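(* Let $\mathcal N$ and $\mathcal M$ be quantum channels satisfying $s$-detailed balance with respect to $\rho_\beta$, with $\mathcal N$ having $\rho_\beta$ as unique fixed state and spectrum in $[0,1]$. Run the single-trajectory algorithm with initial state $\rho_\beta$ and $T_{burn}=0$, and let $v=\mathbb E_{\rho_\beta}(\mathcal M)$. Then $$\mathbb E_{\rho_\beta}\Big[\Big(\sum_{t=1}^Ke_t-Kv\Big)^2\Big]\le K\Big(\mathbb V_{\rho_\beta}(\mathcal M)+\frac{2}{\mathrm{gap}(\mathcal N)}\,\mathrm{SC}\Big).$$
   Context: $H$ is an $n$-qubit Hermitian operator, $\beta>0$, $\rho_\beta=e^{-\beta H}/\operatorname{tr}(e^{-\beta H})$. $\mathcal T^\dagger$ is the Hilbert–Schmidt adjoint (for a channel with Kraus $K_u$, $\mathcal T^\dagger(X)=\sum_uK_u^\dagger XK_u$). $\langle A,B\rangle_s=\operatorname{tr}(A^\dagger\rho_\beta^{1-s}B\rho_\beta^s)$; a map satisfies $s$-detailed balance if $\langle A,\mathcal T^\dagger(B)\rangle_s=\langle\mathcal T^\dagger(A),B\rangle_s$ for all $A,B$. $\mathrm{gap}(\mathcal N)=1-\max_{X\ne0,\langle X,I\rangle_s=0}\langle X,\mathcal N^\dagger(X)\rangle_s/\langle X,X\rangle_s$. $\mathcal M$ has Kraus operators $\{O_u\}_u$ indexed by finitely many real outcomes $u$; $\mathbb E_{\rho_\beta}(\mathcal M)=\sum_uu\operatorname{tr}(O_u\rho_\beta O_u^\dagger)$, $\mathbb V_{\rho_\beta}(\mathcal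 M)=\sum_u|u-\mathbb E_{\rho_\beta}(\mathcal M)|^2\operatorname{tr}(O_u\rho_\beta O_u^\dagger)$, $\widehat{\mathcal M}(X)=\sum_u(u-\mathbb E_{\rho_\beta}(\mathcal M))O_uXO_u^\dagger$, $\mathcal E=\mathcal M\circ\mathcal N\circ\mathcal M$, $\widehat{\mathcal E}=\mathcal M\circ\mathcal N\circ\widehat{\mathcal M}$. $\{Y_i\}_i$ is a $\langle\cdot,\cdot\rangle_s$-orthonormal basis of matrices with $\mathcal E^\dagger(Y_i)=\lambda_iY_i$, $1=\lambda_1>\lambda_2\ge\dots\ge0$, $Y_1=I$; $\alpha_{ij}=\langle Y_j,\widehat{\mathcal E}^\dagger(Y_i)\rangle_s$; $\mathrm{SC}=\sum_j|\alpha_{1j}\alpha_{j1}|$. Single-trajectory algorithm: from the initial state apply $\mathcal N$ $T_{burn}$ times, then for $t=1,\dots,K$ apply $\mathcal M$ (record outcome $e_t$), then $\mathcal N$, then $\mathcal M$ (outcome discarded). $\mathbb E_{\rho_\beta}$ is expectation over this process started from $\rho_\beta$. *)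

theory Defs
  imports "Jordan_Normal_Form.Matrix"
begin

definition trace :: "complex mat \<Rightarrow> complex" where
  "trace A = (\<Sum>i<dim_row A. A $$ (i,i))"

definition finsum_mat :: "nat \<Rightarrow> nat \<Rightarrow> ('b \<Rightarrow> complex mat) \<Rightarrow> 'b set \<Rightarrow> complex mat" where
  "finsum_mat r c f S = mat r c (\<lambda>ij. \<Sum>u\<in>S. f u $$ ij)"

definition listsum_mat :: "nat \<Rightarrow> complex mat list \<Rightarrow> complex mat" where
  "listsum_mat d As = mat d d (\<lambda>ij. \<Sum>A\<leftarrow>As. A $$ ij)"

definition dag :: "complex mat \<Rightarrow> complex mat" where
  "dag A = mat (dim_col A) (dim_row A) (\<lambda>(i,j). cnj (A $$ (j,i)))"

definition hermitian_mat :: "nat \<Rightarrow> complex mat \<Rightarrow> bool" where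
  "hermitian_mat d A \<longleftrightarrow> A \<in> carrier_mat d d \<and> dag A = A"

definition vinner :: "complex vec \<Rightarrow> complex vec \<Rightarrow> complex" where
  "vinner v w = (\<Sum>i<dim_vec v. cnj (v $ i) * w $ i)"

definition density_mat :: "nat \<Rightarrow> complex mat \<Rightarrow> bool" where
  "density_mat d A \<longleftrightarrow> hermitian_mat d A
     \<and> (\<forall>v \<in> carrier_vec d. vinner v (A *\<^sub>v v) \<in> \<real> \<and> 0 \<le> Re (vinner v (A *\<^sub>v v)))
     \<and> trace A = 1"

text \<open>Functional calculus for a Hermitian (hence diagonalizable) matrix A:
  f(A) is the unique d x d matrix acting as f(lambda) on every eigenvector of A with eigenvalue lambda.\<close>
definition mat_fun :: "nat \<Rightarrow> (complex \<Rightarrow> complex) \<Rightarrow> complex mat \<Rightarrow> complex mat" where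
  "mat_fun d f A = (THE B. B \<in> carrier_mat d d \<and>
      (\<forall>v \<in> carrier_vec d. \<forall>l. A *\<^sub>v v = l \<cdot>\<^sub>v v \<longrightarrow> B *\<^sub>v v = f l \<cdot>\<^sub>v v))"

definition gibbs :: "nat \<Rightarrow> real \<Rightarrow> complex mat \<Rightarrow> complex mat" where
  "gibbs d \<beta> H = (let E = mat_fun d (\<lambda>z. exp (- of_real \<beta> * z)) H in (1 / trace E) \<cdot>\<^sub>m E)"

definition mpow :: "nat \<Rightarrow> complex mat \<Rightarrow> real \<Rightarrow> complex mat" where
  "mpow d \<rho> s = mat_fun d (\<lambda>z. of_real (Re z powr s)) \<rho>"

definition sinner :: "nat \<Rightarrow> complex mat \<Rightarrow> real \<Rightarrow> complex mat \<Rightarrow> complex mat \<Rightarrow> complex" where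
  "sinner d \<rho> s A B = trace (dag A * mpow d \<rho> (1 - s) * B * mpow d \<rho> s)"

definition kraus_map :: "nat \<Rightarrow> complex mat list \<Rightarrow> complex mat \<Rightarrow> complex mat" where
  "kraus_map d Ks X = listsum_mat d (map (\<lambda>K. K * X * dag K) Ks)"

definition kraus_adj :: "nat \<Rightarrow> complex mat list \<Rightarrow> complex mat \<Rightarrow> complex mat" where
  "kraus_adj d Ks X = listsum_mat d (map (\<lambda>K. dag K * X * K) Ks)"

definition is_channel :: "nat \<Rightarrow> complex mat list \<Rightarrow> bool" where
  "is_channel d Ks \<longleftrightarrow> Ks \<noteq> [] \<and> set Ks \<subseteq> carrier_mat d d \<and>
     listsum_mat d (map (\<lambda>K. dag K * K) Ks) = 1\<^sub>m d"

definition meas_map :: "nat \<Rightarrow> real set \<Rightarrow> (real \<Rightarrow> complex mat) \<Rightarrow> complex mat \<Rightarrow> complex mat" where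
  "meas_map d U Ok X = finsum_mat d d (\<lambda>u. Ok u * X * dag (Ok u)) U"

definition meas_adj :: "nat \<Rightarrow> real set \<Rightarrow> (real \<Rightarrow> complex mat) \<Rightarrow> complex mat \<Rightarrow> complex mat" where
  "meas_adj d U Ok X = finsum_mat d d (\<lambda>u. dag (Ok u) * X * Ok u) U"

definition is_meas_channel :: "nat \<Rightarrow> real set \<Rightarrow> (real \<Rightarrow> complex mat) \<Rightarrow> bool" where
  "is_meas_channel d U Ok \<longleftrightarrow> finite U \<and> U \<noteq> {} \<and> (\<forall>u\<in>U. Ok u \<in> carrier_mat d d) \<and>
     finsum_mat d d (\<lambda>u. dag (Ok u) * Ok u) U = 1\<^sub>m d"

text \<open>s-detailed balance of a map T given through its adjoint Tadj.\<close>
definition detailed_balance :: "nat \<Rightarrow> complex mat \<Rightarrow> real \<Rightarrow> (complex mat \<Rightarrow> complex mat) \<Rightarrow> bool" where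
  "detailed_balance d \<rho> s Tadj \<longleftrightarrow>
     (\<forall>A \<in> carrier_mat d d. \<forall>B \<in> carrier_mat d d. sinner d \<rho> s A (Tadj B) = sinner d \<rho> s (Tadj A) B)"

definition meas_exp :: "real set \<Rightarrow> (real \<Rightarrow> complex mat) \<Rightarrow> complex mat \<Rightarrow> real" where
  "meas_exp U Ok \<rho> = (\<Sum>u\<in>U. u * Re (trace (Ok u * \<rho> * dag (Ok u))))"

definition meas_var :: "real set \<Rightarrow> (real \<Rightarrow> complex mat) \<Rightarrow> complex mat \<Rightarrow> real" where
  "meas_var U Ok \<rho> = (\<Sum>u\<in>U. \<bar>u - meas_exp U Ok \<rho>\<bar>^2 * Re (trace (Ok u * \<rho> * dag (Ok u))))"

definition meas_hat_adj :: "nat \<Rightarrow> real set \<Rightarrow> (real \<Rightarrow> complex mat) \<Rightarrow> complex mat \<Rightarrow> complex mat \<Rightarrow> complex mat" where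
  "meas_hat_adj d U Ok \<rho> X =
     finsum_mat d d (\<lambda>u. of_real (u - meas_exp U Ok \<rho>) \<cdot>\<^sub>m (dag (Ok u) * X * Ok u)) U"

definition spec_gap :: "nat \<Rightarrow> complex mat \<Rightarrow> real \<Rightarrow> (complex mat \<Rightarrow> complex mat) \<Rightarrow> real" where
  "spec_gap d \<rho> s Nadj = 1 - Sup {Re (sinner d \<rho> s X (Nadj X) / sinner d \<rho> s X X) | X.
       X \<in> carrier_mat d d \<and> X \<noteq> 0\<^sub>m d d \<and> sinner d \<rho> s X (1\<^sub>m d) = 0}"

text \<open>Single trajectory with T_burn = 0: unnormalised state after recording outcomes us = [e_1,...,e_t];
  each round: M with recorded outcome u, then N, then M with discarded outcome.\<close>
fun traj_state :: "nat \<Rightarrow> complex mat list \<Rightarrow> real set \<Rightarrow> (real \<Rightarrow> complex mat) \<Rightarrow> complex mat \<Rightarrow> real list \<Rightarrow> complex mat" where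
  "traj_state d Ns U Ok \<sigma> [] = \<sigma>"
| "traj_state d Ns U Ok \<sigma> (u # us) =
     traj_state d Ns U Ok (meas_map d U Ok (kraus_map d Ns (Ok u * \<sigma> * dag (Ok u)))) us"

definition traj_expect :: "nat \<Rightarrow> complex mat list \<Rightarrow> real set \<Rightarrow> (real \<Rightarrow> complex mat) \<Rightarrow> complex mat \<Rightarrow> nat \<Rightarrow> (real list \<Rightarrow> real) \<Rightarrow> real" where
  "traj_expect d Ns U Ok \<rho> K f =
     (\<Sum>es \<in> {es. set es \<subseteq> U \<and> length es = K}. f es * Re (trace (traj_state d Ns U Ok \<rho> es)))"

end

theory Submission
  imports Defs "Jordan_Normal_Form.Spectral_Radius"

begin

text \<open>Let \<open>G e\<close> be the Heisenberg-picture effect of an outcome sequence \<open>e\<close>, so that trajectory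
  expectations from \<open>\<rho>\<close> are \<open>\<langle>I, \<Sum>e. f e \<cdot> G e\<rangle>\<^sub>s\<close>. Peeling off one round at a time turns the
  centred second moment into \<open>K \<cdot> meas_var + 2 \<cdot> (\<Sum>m<K. \<Sum>k<m. c k)\<close> with
  \<open>c k = \<langle>I, Ehatadj (Eadj\<^sup>k (Ehatadj I))\<rangle>\<^sub>s\<close>. Expanding in the eigenbasis \<open>Y\<close> of \<open>Eadj\<close> gives
  \<open>c k = (\<Sum>j. \<alpha> 1 j \<cdot> \<alpha> j 1 \<cdot> lam j\<^sup>k)\<close>, whose \<open>j = 1\<close> term vanishes because \<open>\<alpha> 1 1\<close> is the
  centred mean of \<open>M\<close>. For \<open>j \<ge> 2\<close>, \<open>lam j = \<langle>Madj (Y j), Nadj (Madj (Y j))\<rangle>\<^sub>s\<close> where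
  \<open>Madj (Y j)\<close> is orthogonal to \<open>I\<close> and has norm at most one (the Kadison--Schwarz inequality
  makes \<open>Madj\<close> a contraction), so \<open>lam j \<le> 1 - gap\<close>. The gap is positive because \<open>Nadj\<close> has
  no eigenvalue \<open>1\<close> on the orthogonal complement of \<open>I\<close>: through \<open>X \<mapsto> \<rho>\<^sup>1\<^sup>-\<^sup>s X \<rho>\<^sup>s\<close> such an
  eigenvector would give a traceless Hermitian fixed point of \<open>N\<close>, and adding a small multiple of
  it to \<open>\<rho>\<close> would produce a second fixed state. Summing the geometric series in \<open>lam j\<close>
  finishes the proof.\<close>

lemma dim_dag[simp]: "dim_row (dag A) = dim_col A" "dim_col (dag A) = dim_row A"
  unfolding dag_def by auto

lemma index_dag[simp]: "i < dim_col A \<Longrightarrow> j < dim_row A \<Longrightarrow> dag A $$ (i,j) = cnj (A $$ (j,i))"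
  unfolding dag_def by auto

lemma dag_carrier[simp]: "A \<in> carrier_mat n m \<Longrightarrow> dag A \<in> carrier_mat m n"
  unfolding dag_def carrier_mat_def by auto

lemma dag_dag[simp]: "dag (dag A) = A"
  by (rule eq_matI) auto

lemma mult_carrier_sq[simp]: "A \<in> carrier_mat n n \<Longrightarrow> B \<in> carrier_mat n n \<Longrightarrow> A * B \<in> carrier_mat n n"
  by auto

lemma index_mult_sum: assumes "i < dim_row A" "j < dim_col B" "dim_col A = dim_row B"
  shows "(A * B) $$ (i,j) = (\<Sum>k<dim_col A. A $$ (i,k) * B $$ (k,j))"
  using assms by (auto simp: scalar_prod_def atLeast0LessThan intro!: sum.cong)

lemma dag_mult: assumes "A \<in> carrier_mat n m" "B \<in> carrier_mat m k"
  shows "dag (A * B) = dag B * dag A"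
proof (rule eq_matI)
  fix i j assume "i < dim_row (dag B * dag A)" "j < dim_col (dag B * dag A)"
  with assms have ij: "i < k" "j < n" and d: "dim_row A = n" "dim_col A = m" "dim_row B = m"
    by auto
  have "dag (A * B) $$ (i, j) = cnj ((A * B) $$ (j, i))" using assms ij by simp
  also have "\<dots> = cnj (\<Sum>l<m. A $$ (j,l) * B $$ (l,i))"
    using assms d ij by (subst index_mult_sum) auto
  also have "\<dots> = (\<Sum>l<m. dag B $$ (i,l) * dag A $$ (l,j))"
    using assms d ij by (auto simp: cnj_sum mult.commute intro!: sum.cong)
  also have "\<dots> = (dag B * dag A) $$ (i, j)"
    using assms d ij by (subst index_mult_sum) auto
  finally show "dag (A * B) $$ (i, j) = (dag B * dag A) $$ (i, j)" .
qed (use assms in auto)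

lemma dag_one[simp]: "dag (1\<^sub>m n) = 1\<^sub>m n"
  by (rule eq_matI) auto

lemma dag_zero[simp]: "dag (0\<^sub>m n m) = 0\<^sub>m m n"
  by (rule eq_matI) auto

lemma dag_add: "A \<in> carrier_mat n m \<Longrightarrow> B \<in> carrier_mat n m \<Longrightarrow> dag (A + B) = dag A + dag B"
  by (intro eq_matI) auto

lemma dag_minus: "A \<in> carrier_mat n m \<Longrightarrow> B \<in> carrier_mat n m \<Longrightarrow> dag (A - B) = dag A - dag B"
  by (intro eq_matI) auto

lemma dag_smult: "dag (c \<cdot>\<^sub>m A) = cnj c \<cdot>\<^sub>m dag A"
  by (intro eq_matI) auto

lemma dag_minus_mult_minus: assumes P: "P \<in> carrier_mat n n" and Q: "Q \<in> carrier_mat n n"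
  shows "dag (P - Q) * (P - Q) = dag P * P - dag P * Q - dag Q * P + dag Q * Q"
proof -
  have dP: "dag P \<in> carrier_mat n n" and dQ: "dag Q \<in> carrier_mat n n" using P Q by auto
  have "dag (P - Q) = dag P - dag Q" using P Q by (rule dag_minus)
  hence "dag (P - Q) * (P - Q) = (dag P - dag Q) * (P - Q)" by simp
  also have "\<dots> = dag P * (P - Q) - dag Q * (P - Q)" using dP dQ P Q by (intro minus_mult_distrib_mat) auto
  also have "dag P * (P - Q) = dag P * P - dag P * Q" using dP P Q by (rule mult_minus_distrib_mat)
  also have "dag Q * (P - Q) = dag Q * P - dag Q * Q" using dQ P Q by (rule mult_minus_distrib_mat)
  also have "dag P * P - dag P * Q - (dag Q * P - dag Q * Q) = dag P * P - dag P * Q - dag Q * P + dag Q * Q"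
    using P Q dP dQ by (intro eq_matI) auto
  finally show ?thesis .
qed

lemma hermitian_parts_eq_zero:
  assumes Y: "Y \<in> carrier_mat n n" and h1: "Y + dag Y = 0\<^sub>m n n" and h2: "\<i> \<cdot>\<^sub>m (Y - dag Y) = 0\<^sub>m n n"
  shows "Y = 0\<^sub>m n n"
proof (rule eq_matI)
  fix i j assume "i < dim_row (0\<^sub>m n n :: complex mat)" "j < dim_col (0\<^sub>m n n :: complex mat)"
  hence i: "i < n" and j: "j < n" by auto
  have "Y $$ (i,j) + cnj (Y $$ (j,i)) = 0" using arg_cong[OF h1, of "\<lambda>M. M $$ (i,j)"] i j Y by simp
  moreover have "\<i> * (Y $$ (i,j) - cnj (Y $$ (j,i))) = 0" using arg_cong[OF h2, of "\<lambda>M. M $$ (i,j)"] i j Y by simp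
  ultimately show "Y $$ (i,j) = 0\<^sub>m n n $$ (i,j)" using i j by (auto simp: algebra_simps)
qed (use Y in auto)

lemma trace_add: "A \<in> carrier_mat n n \<Longrightarrow> B \<in> carrier_mat n n \<Longrightarrow> trace (A + B) = trace A + trace B"
  by (auto simp: trace_def sum.distrib)

lemma trace_minus: "A \<in> carrier_mat n n \<Longrightarrow> B \<in> carrier_mat n n \<Longrightarrow> trace (A - B) = trace A - trace B"
  by (auto simp: trace_def sum_subtractf)

lemma trace_smult: "A \<in> carrier_mat n n \<Longrightarrow> trace (c \<cdot>\<^sub>m A) = c * trace A"
  by (auto simp: trace_def sum_distrib_left intro!: sum.cong)

lemma trace_dag: "A \<in> carrier_mat n n \<Longrightarrow> trace (dag A) = cnj (trace A)"
  by (auto simp: trace_def)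

lemma trace_zero[simp]: "trace (0\<^sub>m n n) = 0"
  by (auto simp: trace_def)

lemma trace_mult_sum: assumes "A \<in> carrier_mat n m" "B \<in> carrier_mat m n"
  shows "trace (A * B) = (\<Sum>i<n. \<Sum>k<m. A $$ (i,k) * B $$ (k,i))"
  unfolding trace_def using assms by (auto simp: scalar_prod_def atLeast0LessThan intro!: sum.cong)

lemma trace_mult_comm: assumes "A \<in> carrier_mat n m" "B \<in> carrier_mat m n"
  shows "trace (A * B) = trace (B * A)"
  unfolding trace_mult_sum[OF assms] trace_mult_sum[OF assms(2,1)]
  by (subst sum.swap) (simp add: mult.commute)

lemma trace_sandwich_cycle: assumes R: "R \<in> carrier_mat n n" and X: "X \<in> carrier_mat n n"
  shows "trace (R * (dag X * X)) = trace (X * R * dag X)"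
proof -
  have "trace (R * (dag X * X)) = trace ((R * dag X) * X)" using R X by (simp add: assoc_mult_mat[of _ n n _ n _ n])
  also have "\<dots> = trace (X * (R * dag X))" using R X by (intro trace_mult_comm[of _ n n]) auto
  also have "\<dots> = trace (X * R * dag X)" using R X by (simp add: assoc_mult_mat[of _ n n _ n _ n])
  finally show ?thesis .
qed

lemma eq_mat_by_trace: assumes A: "A \<in> carrier_mat n n" and B: "B \<in> carrier_mat n n"
  and h: "\<And>X. X \<in> carrier_mat n n \<Longrightarrow> trace (A * X) = trace (B * X)"
  shows "A = B"
proof (rule eq_matI)
  fix i j assume "i < dim_row B" "j < dim_col B"
  hence i: "i < n" and j: "j < n" using B by auto
  define E where "E = mat n n (\<lambda>(k,l). if k = j \<and> l = i then (1::complex) else 0)"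
  have Ec: "E \<in> carrier_mat n n" unfolding E_def by auto
  have unit: "trace (C * E) = C $$ (i,j)" if C: "C \<in> carrier_mat n n" for C
  proof -
    have "trace (C * E) = (\<Sum>k<n. \<Sum>l<n. if l = j then (if k = i then C $$ (k,j) else 0) else 0)"
      unfolding trace_mult_sum[OF C Ec] by (intro sum.cong refl) (auto simp: E_def)
    also have "\<dots> = (\<Sum>k<n. if k = i then C $$ (i,j) else 0)" using j by (simp add: sum.delta)
    also have "\<dots> = C $$ (i,j)" using i by (simp add: sum.delta)
    finally show ?thesis .
  qed
  show "A $$ (i,j) = B $$ (i,j)" using h[OF Ec] unit[OF A] unit[OF B] by simp
qed (use A B in auto)

definition diag_of :: "nat \<Rightarrow> (nat \<Rightarrow> complex) \<Rightarrow> complex mat" where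
  "diag_of n f = mat n n (\<lambda>(i,j). if i = j then f i else 0)"

lemma diag_of_carrier[simp]: "diag_of n f \<in> carrier_mat n n"
  and dim_diag_of[simp]: "dim_row (diag_of n f) = n" "dim_col (diag_of n f) = n"
  by (auto simp: diag_of_def)

lemma index_diag_of[simp]: "i < n \<Longrightarrow> j < n \<Longrightarrow> diag_of n f $$ (i,j) = (if i = j then f i else 0)"
  by (auto simp: diag_of_def)

lemma diag_of_mult: "diag_of n f * diag_of n g = diag_of n (\<lambda>i. f i * g i)"
proof (rule eq_matI)
  fix i j assume "i < dim_row (diag_of n (\<lambda>i. f i * g i))" "j < dim_col (diag_of n (\<lambda>i. f i * g i))"
  hence i: "i < n" and j: "j < n" by auto
  have "(diag_of n f * diag_of n g) $$ (i,j) = (\<Sum>k<n. diag_of n f $$ (i,k) * diag_of n g $$ (k,j))"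
    using i j by (subst index_mult_sum) auto
  also have "\<dots> = (\<Sum>k<n. if k = i then (if i = j then f i * g i else 0) else 0)"
    using i j by (intro sum.cong refl) auto
  also have "\<dots> = diag_of n (\<lambda>i. f i * g i) $$ (i,j)" using i j by (simp add: sum.delta)
  finally show "(diag_of n f * diag_of n g) $$ (i,j) = diag_of n (\<lambda>i. f i * g i) $$ (i,j)" .
qed auto

lemma index_mult_diag_of: assumes V: "V \<in> carrier_mat m n" and i: "i < m" and k: "k < n"
  shows "(V * diag_of n f) $$ (i,k) = V $$ (i,k) * f k"
proof -
  have "(V * diag_of n f) $$ (i,k) = (\<Sum>l<n. V $$ (i,l) * diag_of n f $$ (l,k))"
    using V i k by (subst index_mult_sum) auto
  also have "\<dots> = (\<Sum>l<n. if l = k then V $$ (i,k) * f k else 0)" using k by (intro sum.cong) auto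
  finally show ?thesis using k by simp
qed

lemma smult_diag_of: "c \<cdot>\<^sub>m diag_of n f = diag_of n (\<lambda>i. c * f i)"
  by (rule eq_matI) auto

lemma dag_diag_of: "dag (diag_of n f) = diag_of n (\<lambda>i. cnj (f i))"
  by (rule eq_matI) auto

lemma trace_diag_of: "trace (diag_of n f) = (\<Sum>i<n. f i)"
  by (auto simp: trace_def)

lemma diag_of_one: "diag_of n (\<lambda>_. 1) = 1\<^sub>m n"
  by (rule eq_matI) auto

lemma diag_of_mult_vec: "w \<in> carrier_vec n \<Longrightarrow> diag_of n g *\<^sub>v w = vec n (\<lambda>i. g i * w $ i)"
proof (rule eq_vecI)
  fix i assume w: "w \<in> carrier_vec n" and "i < dim_vec (vec n (\<lambda>i. g i * w $ i))"
  hence i: "i < n" by auto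
  have "(diag_of n g *\<^sub>v w) $ i = (\<Sum>k<n. diag_of n g $$ (i,k) * w $ k)"
    using i w by (auto simp: scalar_prod_def atLeast0LessThan intro!: sum.cong)
  also have "\<dots> = (\<Sum>k<n. if k = i then g i * w $ i else 0)" using i by (intro sum.cong) auto
  finally show "(diag_of n g *\<^sub>v w) $ i = vec n (\<lambda>i. g i * w $ i) $ i" using i by (simp add: sum.delta)
qed auto

definition unitary :: "nat \<Rightarrow> complex mat \<Rightarrow> bool" where
  "unitary n U \<longleftrightarrow> U \<in> carrier_mat n n \<and> dag U * U = 1\<^sub>m n \<and> U * dag U = 1\<^sub>m n"

lemma unitaryI: assumes "U \<in> carrier_mat n n" "dag U * U = 1\<^sub>m n" shows "unitary n U"
  using assms mat_mult_left_right_inverse[of "dag U" n U] unfolding unitary_def by auto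

lemma unitaryD: assumes "unitary n U"
  shows "U \<in> carrier_mat n n" "dag U \<in> carrier_mat n n" "dag U * U = 1\<^sub>m n" "U * dag U = 1\<^sub>m n"
  using assms unfolding unitary_def by auto

lemma unitary_cancel: assumes U: "unitary n U" and X: "X \<in> carrier_mat n m"
  shows "dag U * (U * X) = X" "U * (dag U * X) = X"
  using unitaryD[OF U] X by (simp_all add: assoc_mult_mat[symmetric, of _ n n _ n _ m])

lemma unitary_mult: assumes "unitary n U" "unitary n V" shows "unitary n (U * V)"
proof -
  note u = unitaryD[OF assms(1)] and v = unitaryD[OF assms(2)]
  have "dag (U * V) * (U * V) = dag V * (dag U * (U * V))"
    using u v by (simp add: dag_mult[of _ n n _ n] assoc_mult_mat[of _ n n _ n _ n])
  also have "\<dots> = 1\<^sub>m n" using u v by (simp add: unitary_cancel[OF assms(1)])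
  finally show ?thesis using u v by (intro unitaryI) auto
qed

lemma unitary_normalized_cols:
  assumes ws: "set ws \<subseteq> carrier_vec n" "corthogonal ws" "length ws = n"
  defines "nr \<equiv> \<lambda>j. sqrt (\<Sum>k<n. (cmod (ws ! j $ k))^2)"
  shows "unitary n (mat n n (\<lambda>(i,j). ws ! j $ i / complex_of_real (nr j)))" and "\<forall>j<n. nr j > 0"
proof -
  have wsc: "j < n \<Longrightarrow> ws ! j \<in> carrier_vec n" for j using ws by auto
  have cscalar: "ws ! j \<bullet>c ws ! i = (\<Sum>k<n. ws ! j $ k * cnj (ws ! i $ k))" if "i < n" "j < n" for i j
    using wsc that by (auto simp: scalar_prod_def atLeast0LessThan intro!: sum.cong)
  have sq: "ws ! j \<bullet>c ws ! j = complex_of_real ((nr j)^2) \<and> nr j > 0" if j: "j < n" for j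
  proof -
    define sq_norm where "sq_norm = (\<Sum>k<n. (cmod (ws ! j $ k))^2)"
    have e: "ws ! j \<bullet>c ws ! j = complex_of_real sq_norm"
      unfolding cscalar[OF j j] sq_norm_def of_real_sum
      by (intro sum.cong refl) (simp add: complex_norm_square[symmetric] mult.commute)
    have "sq_norm \<noteq> 0" using corthogonalD[OF ws(2), of j j] j ws(3) e by auto
    moreover have "sq_norm \<ge> 0" unfolding sq_norm_def by (intro sum_nonneg) auto
    ultimately show ?thesis unfolding e nr_def sq_norm_def by auto
  qed
  thus "\<forall>j<n. nr j > 0" by blast
  define W where "W = mat n n (\<lambda>(i,j). ws ! j $ i / complex_of_real (nr j))"
  have Wc: "W \<in> carrier_mat n n" unfolding W_def by auto
  have "dag W * W = 1\<^sub>m n"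
  proof (rule eq_matI)
    fix i j assume "i < dim_row (1\<^sub>m n)" "j < dim_col (1\<^sub>m n)"
    hence i: "i < n" and j: "j < n" by auto
    have "(dag W * W) $$ (i,j) = (ws ! j \<bullet>c ws ! i) / (complex_of_real (nr i) * complex_of_real (nr j))"
      unfolding cscalar[OF i j] sum_divide_distrib using i j Wc
      by (subst index_mult_sum) (auto simp: W_def intro!: sum.cong)
    also have "\<dots> = 1\<^sub>m n $$ (i,j)"
      using sq[OF i] corthogonalD[OF ws(2), of j i] i j ws(3) by (cases "i = j") (auto simp: power2_eq_square)
    finally show "(dag W * W) $$ (i,j) = 1\<^sub>m n $$ (i,j)" .
  qed (use Wc in auto)
  thus "unitary n W" using Wc by (intro unitaryI) auto
qed

text \<open>Normalised Gram--Schmidt applied to a basis completion of \<open>v\<close>.\<close>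

lemma unitary_first_col:
  assumes v: "v \<in> carrier_vec n" and v0: "v \<noteq> 0\<^sub>v n"
  shows "\<exists>W c. unitary n W \<and> c \<noteq> 0 \<and> (\<forall>i<n. W $$ (i,0) = c * v $ i)"
proof -
  interpret cof_vec_space n "TYPE(complex)" .
  define b where "b = basis_completion v"
  from basis_completion[OF v v0, folded b_def]
  have dist_b: "distinct b" and indep: "\<not> lin_dep (set b)" and bc: "set b \<subseteq> carrier_vec n"
    and hdb: "hd b = v" and len_b: "length b = n" by auto
  have n: "n > 0" using v v0 by (cases n) auto
  from hdb len_b n obtain vs where bv: "b = v # vs" by (cases b, auto)
  define ws where "ws = gram_schmidt n b"
  from gram_schmidt_result[OF bc dist_b indep refl, folded ws_def]
  have ws: "set ws \<subseteq> carrier_vec n" "corthogonal ws" "length ws = n"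
    by (auto simp: len_b)
  from gram_schmidt_hd[OF v, of vs, folded bv] have "hd ws = v" unfolding ws_def .
  hence ws0: "ws ! 0 = v" using n ws(3) by (cases ws) auto
  define nr where "nr j = sqrt (\<Sum>k<n. (cmod (ws ! j $ k))^2)" for j
  note W = unitary_normalized_cols[OF ws, folded nr_def]
  have "\<forall>i<n. mat n n (\<lambda>(i,j). ws ! j $ i / complex_of_real (nr j)) $$ (i,0) = (1 / complex_of_real (nr 0)) * v $ i"
    using n ws0 by auto
  moreover have "1 / complex_of_real (nr 0) \<noteq> 0" using W(2) n by auto
  ultimately show ?thesis using W(1) by blast
qed

section \<open>The spectral theorem for Hermitian matrices\<close>

abbreviation spectral_mat :: "nat \<Rightarrow> complex mat \<Rightarrow> (nat \<Rightarrow> complex) \<Rightarrow> complex mat" where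
  "spectral_mat n U f \<equiv> U * diag_of n f * dag U"

lemma index_spectral_mat: assumes V: "V \<in> carrier_mat m n" and i: "i < m" and j: "j < m"
  shows "(V * diag_of n f * dag V) $$ (i,j) = (\<Sum>k<n. V $$ (i,k) * f k * cnj (V $$ (j,k)))"
proof -
  have "(V * diag_of n f * dag V) $$ (i,j) = (\<Sum>l<n. (V * diag_of n f) $$ (i,l) * dag V $$ (l,j))"
    using V i j by (subst index_mult_sum) auto
  also have "\<dots> = (\<Sum>l<n. (\<Sum>k<n. V $$ (i,k) * diag_of n f $$ (k,l)) * cnj (V $$ (j,l)))"
    using V i j by (intro sum.cong refl, subst index_mult_sum) auto
  also have "\<dots> = (\<Sum>l<n. V $$ (i,l) * f l * cnj (V $$ (j,l)))"
  proof (intro sum.cong refl)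
    fix l assume l: "l \<in> {..<n}"
    have "(\<Sum>k<n. V $$ (i,k) * diag_of n f $$ (k,l)) = (\<Sum>k<n. if k = l then V $$ (i,l) * f l else 0)"
      using l by (intro sum.cong refl) auto
    thus "(\<Sum>k<n. V $$ (i,k) * diag_of n f $$ (k,l)) * cnj (V $$ (j,l)) = V $$ (i,l) * f l * cnj (V $$ (j,l))"
      using l by simp
  qed
  finally show ?thesis .
qed

lemma spectral_mat_mult: assumes U: "unitary n U"
  shows "spectral_mat n U f * spectral_mat n U g = spectral_mat n U (\<lambda>i. f i * g i)"
proof -
  note c = unitaryD[OF U]
  have "spectral_mat n U f * spectral_mat n U g = U * (diag_of n f * (dag U * (U * (diag_of n g * dag U))))"
    using c by (simp add: assoc_mult_mat[of _ n n _ n _ n])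
  also have "dag U * (U * (diag_of n g * dag U)) = diag_of n g * dag U"
    using c by (intro unitary_cancel(1)[OF U]) auto
  also have "U * (diag_of n f * (diag_of n g * dag U)) = U * (diag_of n f * diag_of n g) * dag U"
    using c by (simp add: assoc_mult_mat[of _ n n _ n _ n])
  finally show ?thesis by (simp add: diag_of_mult)
qed

lemma smult_spectral_mat: assumes U: "unitary n U"
  shows "c \<cdot>\<^sub>m spectral_mat n U f = spectral_mat n U (\<lambda>i. c * f i)"
proof -
  note cU = unitaryD[OF U]
  have "c \<cdot>\<^sub>m spectral_mat n U f = U * (c \<cdot>\<^sub>m diag_of n f) * dag U"
    using cU by (simp add: mult_smult_distrib[of _ n n _ n] mult_smult_assoc_mat[of _ n n _ n])
  thus ?thesis by (simp add: smult_diag_of)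
qed

lemma dag_spectral_mat: assumes U: "unitary n U"
  shows "dag (spectral_mat n U f) = spectral_mat n U (\<lambda>i. cnj (f i))"
  using unitaryD[OF U] by (simp add: dag_mult[of _ n n _ n] dag_diag_of assoc_mult_mat[of _ n n _ n _ n])

lemma trace_spectral_mat: assumes U: "unitary n U"
  shows "trace (spectral_mat n U f) = (\<Sum>i<n. f i)"
proof -
  note c = unitaryD[OF U]
  have "trace (spectral_mat n U f) = trace (dag U * (U * diag_of n f))"
    using c by (subst trace_mult_comm[of _ n n]) auto
  also have "dag U * (U * diag_of n f) = diag_of n f"
    using c by (simp add: assoc_mult_mat[of _ n n _ n _ n, symmetric])
  finally show ?thesis by (simp add: trace_diag_of)
qed

lemma spectral_mat_one: assumes U: "unitary n U" shows "spectral_mat n U (\<lambda>_. 1) = 1\<^sub>m n"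
  using unitaryD[OF U] by (simp add: diag_of_one)

lemma spectral_mat_mult_vec: assumes U: "unitary n U" and v: "v \<in> carrier_vec n"
  shows "spectral_mat n U g *\<^sub>v v = U *\<^sub>v (diag_of n g *\<^sub>v (dag U *\<^sub>v v))"
proof -
  note c = unitaryD[OF U]
  have "spectral_mat n U g *\<^sub>v v = (U * diag_of n g) *\<^sub>v (dag U *\<^sub>v v)"
    by (rule assoc_mult_mat_vec[OF mult_carrier_sq[OF c(1) diag_of_carrier] c(2) v])
  also have "\<dots> = U *\<^sub>v (diag_of n g *\<^sub>v (dag U *\<^sub>v v))"
    by (rule assoc_mult_mat_vec[OF c(1) diag_of_carrier mult_mat_vec_carrier[OF c(2) v]])
  finally show ?thesis .
qed

lemma spectral_mat_eigvec: assumes U: "unitary n U" and v: "v \<in> carrier_vec n"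
  and ev: "spectral_mat n U g *\<^sub>v v = l \<cdot>\<^sub>v v"
  shows "spectral_mat n U (\<lambda>i. f (g i)) *\<^sub>v v = f l \<cdot>\<^sub>v v"
proof -
  note c = unitaryD[OF U]
  define w where "w = dag U *\<^sub>v v"
  have w: "w \<in> carrier_vec n" unfolding w_def using c(2) v by (rule mult_mat_vec_carrier)
  have "dag U *\<^sub>v (spectral_mat n U g *\<^sub>v v) = (dag U * spectral_mat n U g) *\<^sub>v v"
    using c v by (intro assoc_mult_mat_vec[symmetric]) auto
  also have "dag U * spectral_mat n U g = diag_of n g * dag U"
    using c by (simp add: assoc_mult_mat[of _ n n _ n _ n, symmetric])
  also have "(diag_of n g * dag U) *\<^sub>v v = diag_of n g *\<^sub>v w"
    unfolding w_def by (rule assoc_mult_mat_vec[OF diag_of_carrier c(2) v])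
  finally have "diag_of n g *\<^sub>v w = l \<cdot>\<^sub>v w"
    using ev mult_mat_vec[OF c(2) v] unfolding w_def by simp
  hence gl: "g i * w $ i = l * w $ i" if "i < n" for i
    using that w diag_of_mult_vec[OF w, of g] by (metis index_smult_vec(1) index_vec carrier_vecD)
  have e: "diag_of n (\<lambda>i. f (g i)) *\<^sub>v w = f l \<cdot>\<^sub>v w"
  proof (rule eq_vecI)
    fix i assume "i < dim_vec (f l \<cdot>\<^sub>v w)"
    hence i: "i < n" using w by auto
    show "(diag_of n (\<lambda>i. f (g i)) *\<^sub>v w) $ i = (f l \<cdot>\<^sub>v w) $ i"
      using i w gl[OF i] by (cases "w $ i = 0") (auto simp: diag_of_mult_vec)
  qed (use w in auto)
  have "spectral_mat n U (\<lambda>i. f (g i)) *\<^sub>v v = U *\<^sub>v (diag_of n (\<lambda>i. f (g i)) *\<^sub>v w)"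
    unfolding w_def by (rule spectral_mat_mult_vec[OF U v])
  also have "\<dots> = f l \<cdot>\<^sub>v (U *\<^sub>v w)" unfolding e by (rule mult_mat_vec[OF c(1) w])
  also have "U *\<^sub>v w = v" unfolding w_def using c v
    by (simp add: assoc_mult_mat_vec[of _ n n _ n, symmetric])
  finally show ?thesis .
qed

lemma spectral_mat_col: assumes U: "unitary n U" and k: "k < n"
  shows "spectral_mat n U g *\<^sub>v col U k = g k \<cdot>\<^sub>v col U k"
proof -
  note c = unitaryD[OF U]
  have cu: "col U k \<in> carrier_vec n" using c by auto
  have "dag U *\<^sub>v col U k = col (dag U * U) k" by (rule col_mult2[OF c(2) c(1) k, symmetric])
  also have "\<dots> = unit_vec n k" using c k by simp
  finally have duk: "dag U *\<^sub>v col U k = unit_vec n k" .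
  have "spectral_mat n U g *\<^sub>v col U k = U *\<^sub>v (diag_of n g *\<^sub>v (dag U *\<^sub>v col U k))"
    by (rule spectral_mat_mult_vec[OF U cu])
  also have "diag_of n g *\<^sub>v (dag U *\<^sub>v col U k) = g k \<cdot>\<^sub>v unit_vec n k"
    unfolding duk by (rule eq_vecI) (auto simp: diag_of_mult_vec k)
  also have "U *\<^sub>v (g k \<cdot>\<^sub>v unit_vec n k) = g k \<cdot>\<^sub>v col U k"
    using c k by (subst mult_mat_vec[OF c(1)]) auto
  finally show ?thesis .
qed

lemma eq_spectral_mat_by_cols: assumes U: "unitary n U" and B: "B \<in> carrier_mat n n"
  and cols: "\<And>k. k < n \<Longrightarrow> B *\<^sub>v col U k = f k \<cdot>\<^sub>v col U k"
  shows "B = spectral_mat n U f"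
proof -
  note c = unitaryD[OF U]
  have BU: "B * U = U * diag_of n f"
  proof (rule eq_matI)
    fix i k assume "i < dim_row (U * diag_of n f)" "k < dim_col (U * diag_of n f)"
    hence i: "i < n" and k: "k < n" using c by auto
    have "(B * U) $$ (i,k) = col (B * U) k $ i" using B c i k by simp
    also have "\<dots> = (f k \<cdot>\<^sub>v col U k) $ i" using cols[OF k] col_mult2[OF B c(1) k] by simp
    also have "\<dots> = (\<Sum>l<n. U $$ (i,l) * diag_of n f $$ (l,k))"
      using c i k by (simp add: sum.delta if_distrib[of "\<lambda>x. U $$ (i,_) * x"] mult.commute cong: if_cong)
    also have "\<dots> = (U * diag_of n f) $$ (i,k)" using c i k by (subst index_mult_sum) auto
    finally show "(B * U) $$ (i,k) = (U * diag_of n f) $$ (i,k)" .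
  qed (use B c in auto)
  have "B = B * (U * dag U)" using B c by simp
  also have "\<dots> = (B * U) * dag U" using B c by (simp add: assoc_mult_mat[of _ n n _ n _ n])
  finally show ?thesis unfolding BU .
qed

lemma mat_fun_spectral_mat: assumes U: "unitary n U"
  shows "mat_fun n f (spectral_mat n U g) = spectral_mat n U (\<lambda>i. f (g i))"
  unfolding mat_fun_def
proof (rule the_equality)
  show "spectral_mat n U (\<lambda>i. f (g i)) \<in> carrier_mat n n \<and> (\<forall>v\<in>carrier_vec n. \<forall>l.
      spectral_mat n U g *\<^sub>v v = l \<cdot>\<^sub>v v \<longrightarrow> spectral_mat n U (\<lambda>i. f (g i)) *\<^sub>v v = f l \<cdot>\<^sub>v v)"
    using unitaryD[OF U] spectral_mat_eigvec[OF U] by auto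
next
  fix B assume "B \<in> carrier_mat n n \<and> (\<forall>v\<in>carrier_vec n. \<forall>l.
      spectral_mat n U g *\<^sub>v v = l \<cdot>\<^sub>v v \<longrightarrow> B *\<^sub>v v = f l \<cdot>\<^sub>v v)"
  thus "B = spectral_mat n U (\<lambda>i. f (g i))"
    using unitaryD[OF U] spectral_mat_col[OF U] by (intro eq_spectral_mat_by_cols[OF U]) auto
qed

definition diag_block :: "complex \<Rightarrow> complex mat \<Rightarrow> complex mat" where
  "diag_block c B = mat (Suc (dim_row B)) (Suc (dim_col B))
     (\<lambda>(i,j). if i = 0 \<and> j = 0 then c else if i = 0 \<or> j = 0 then 0 else B $$ (i - 1, j - 1))"

lemma dim_diag_block[simp]: "dim_row (diag_block c B) = Suc (dim_row B)" "dim_col (diag_block c B) = Suc (dim_col B)"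
  unfolding diag_block_def by auto

lemma diag_block_carrier[simp]: "B \<in> carrier_mat m m \<Longrightarrow> diag_block c B \<in> carrier_mat (Suc m) (Suc m)"
  unfolding diag_block_def by auto

lemma index_diag_block[simp]: "i < Suc (dim_row B) \<Longrightarrow> j < Suc (dim_col B) \<Longrightarrow>
    diag_block c B $$ (i,j) = (if i = 0 \<and> j = 0 then c else if i = 0 \<or> j = 0 then 0 else B $$ (i - 1, j - 1))"
  unfolding diag_block_def by auto

lemma diag_block_mult: assumes A: "A \<in> carrier_mat m m" and B: "B \<in> carrier_mat m m"
  shows "diag_block a A * diag_block b B = diag_block (a * b) (A * B)"
proof (rule eq_matI)
  fix i j assume "i < dim_row (diag_block (a * b) (A * B))" "j < dim_col (diag_block (a * b) (A * B))"
  hence i: "i < Suc m" and j: "j < Suc m" using A B by auto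
  have "(diag_block a A * diag_block b B) $$ (i,j) =
      diag_block a A $$ (i,0) * diag_block b B $$ (0,j) +
      (\<Sum>k<m. diag_block a A $$ (i, Suc k) * diag_block b B $$ (Suc k, j))"
    using A B i j by (subst index_mult_sum) (auto simp: sum.lessThan_Suc_shift simp del: sum.lessThan_Suc)
  also have "\<dots> = diag_block (a * b) (A * B) $$ (i,j)"
  proof (cases "i = 0 \<or> j = 0")
    case True thus ?thesis using A B i j by auto
  next
    case False
    then obtain i' j' where ij: "i = Suc i'" "j = Suc j'" by (cases i; cases j) auto
    have "(\<Sum>k<m. diag_block a A $$ (i, Suc k) * diag_block b B $$ (Suc k, j)) =
        (\<Sum>k<m. A $$ (i',k) * B $$ (k,j'))"
      using A B ij i j by (intro sum.cong refl) auto
    also have "\<dots> = (A * B) $$ (i',j')" using A B ij i j by (subst index_mult_sum) auto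
    finally show ?thesis using A B ij i j by simp
  qed
  finally show "(diag_block a A * diag_block b B) $$ (i,j) = diag_block (a * b) (A * B) $$ (i,j)" .
qed (use A B in auto)

lemma dag_diag_block: "B \<in> carrier_mat m m \<Longrightarrow> dag (diag_block c B) = diag_block (cnj c) (dag B)"
  by (rule eq_matI) auto

lemma diag_block_one: "diag_block 1 (1\<^sub>m m) = 1\<^sub>m (Suc m)"
  by (rule eq_matI) auto

lemma diag_block_diag_of: "diag_block c (diag_of m f) = diag_of (Suc m) (\<lambda>i. if i = 0 then c else f (i - 1))"
  by (rule eq_matI) auto

lemma unitary_diag_block: assumes U: "unitary m U" shows "unitary (Suc m) (diag_block 1 U)"
  using unitaryD[OF U]
  by (intro unitaryI) (simp_all add: dag_diag_block[of U m] diag_block_mult[of "dag U" m U] diag_block_one)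

lemma unitary_conj_first_col:
  assumes W: "unitary n W" and A: "A \<in> carrier_mat n n" and v: "v \<in> carrier_vec n"
    and Av: "A *\<^sub>v v = e \<cdot>\<^sub>v v" and Wv: "\<forall>i<n. W $$ (i,0) = c * v $ i" and i: "i < n"
  shows "(dag W * A * W) $$ (i,0) = (if i = 0 then e else 0)"
proof -
  note w = unitaryD[OF W]
  have n0: "0 < n" using i by simp
  have AW0: "(A * W) $$ (k,0) = e * W $$ (k,0)" if k: "k < n" for k
  proof -
    have "(A * W) $$ (k,0) = c * (\<Sum>l<n. A $$ (k,l) * v $ l)"
      using A w k n0 Wv by (subst index_mult_sum) (auto simp: sum_distrib_left intro!: sum.cong)
    also have "(\<Sum>l<n. A $$ (k,l) * v $ l) = (A *\<^sub>v v) $ k"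
      using A v k by (auto simp: scalar_prod_def atLeast0LessThan intro!: sum.cong)
    finally show ?thesis using Av v k Wv by simp
  qed
  have "(dag W * A * W) $$ (i,0) = (dag W * (A * W)) $$ (i,0)"
    using A w by (simp add: assoc_mult_mat[of _ n n _ n _ n])
  also have "\<dots> = (\<Sum>k<n. dag W $$ (i,k) * (A * W) $$ (k,0))"
    using A w i n0 by (subst index_mult_sum) auto
  also have "\<dots> = e * (dag W * W) $$ (i,0)"
    using AW0 w i n0 by (subst index_mult_sum) (auto simp: sum_distrib_left intro!: sum.cong)
  finally show ?thesis using w i n0 by simp
qed

lemma hermitian_first_col_diag_block:
  assumes C: "C \<in> carrier_mat (Suc m) (Suc m)" and hC: "dag C = C"
    and col: "\<And>i. i < Suc m \<Longrightarrow> C $$ (i,0) = (if i = 0 then e else 0)"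
  shows "\<exists>B. B \<in> carrier_mat m m \<and> dag B = B \<and> C = diag_block (complex_of_real (Re e)) B"
proof -
  have row: "C $$ (0,j) = cnj (C $$ (j,0))" if j: "j < Suc m" for j
    using C j arg_cong[OF hC, of "\<lambda>M. M $$ (0,j)"] by simp
  have e_real: "e = complex_of_real (Re e)"
    using row[of 0] col[of 0] by (metis Reals_cnj_iff complex_cnj_cnj of_real_Re zero_less_Suc)
  define B where "B = mat m m (\<lambda>(i,j). C $$ (Suc i, Suc j))"
  have Bc: "B \<in> carrier_mat m m" unfolding B_def by auto
  have hB: "dag B = B"
  proof (rule eq_matI)
    fix i j assume "i < dim_row B" "j < dim_col B"
    hence "i < m" "j < m" using Bc by auto
    thus "dag B $$ (i,j) = B $$ (i,j)"
      using C arg_cong[OF hC, of "\<lambda>M. M $$ (Suc i, Suc j)"] unfolding B_def by auto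
  qed (use Bc in auto)
  have "C = diag_block (complex_of_real (Re e)) B"
  proof (rule eq_matI)
    fix i j assume "i < dim_row (diag_block (complex_of_real (Re e)) B)"
      "j < dim_col (diag_block (complex_of_real (Re e)) B)"
    hence i: "i < Suc m" and j: "j < Suc m" using Bc by auto
    show "C $$ (i,j) = diag_block (complex_of_real (Re e)) B $$ (i,j)"
      using col[OF i] col[OF j] row[OF j] e_real i j Bc by (cases i; cases j) (auto simp: B_def)
  qed (use C Bc in auto)
  thus ?thesis using Bc hB by blast
qed

text \<open>Conjugating by a unitary whose first column is an eigenvector splits off a \<open>1 \<times> 1\<close> block.\<close>

lemma hermitian_deflation: assumes A: "A \<in> carrier_mat (Suc m) (Suc m)" and hA: "dag A = A"
  shows "\<exists>W e B. unitary (Suc m) W \<and> B \<in> carrier_mat m m \<and> dag B = B \<and>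
    A = W * diag_block (complex_of_real e) B * dag W"
proof -
  define n where "n = Suc m"
  have An: "A \<in> carrier_mat n n" using A unfolding n_def by auto
  from spectrum_non_empty[OF An] obtain e where "eigenvalue A e" unfolding spectrum_def n_def by auto
  then obtain v where "eigenvector A v e" unfolding eigenvalue_def by auto
  hence v: "v \<in> carrier_vec n" "v \<noteq> 0\<^sub>v n" and Av: "A *\<^sub>v v = e \<cdot>\<^sub>v v"
    using An unfolding eigenvector_def by auto
  from unitary_first_col[OF v] obtain W c where W: "unitary n W" and Wv: "\<forall>i<n. W $$ (i,0) = c * v $ i"
    by auto
  note w = unitaryD[OF W]
  have "dag (dag W * A * W) = dag W * A * W" using An w hA
    by (simp add: dag_mult[of _ n n _ n] assoc_mult_mat[of _ n n _ n _ n])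
  then obtain B where B: "B \<in> carrier_mat m m" "dag B = B"
    and CB: "dag W * A * W = diag_block (complex_of_real (Re e)) B"
    using hermitian_first_col_diag_block[of "dag W * A * W" m e] unitary_conj_first_col[OF W An v(1) Av Wv]
      An w unfolding n_def by auto
  have "A = (W * dag W) * A * (W * dag W)" using w(4) An by simp
  also have "\<dots> = W * (dag W * A * W) * dag W" using w(1,2) An
    by (simp add: assoc_mult_mat[of _ n n _ n _ n])
  finally show ?thesis using W B unfolding CB n_def by blast
qed

theorem hermitian_diagonalization:
  "A \<in> carrier_mat n n \<Longrightarrow> dag A = A \<Longrightarrow>
   \<exists>U h. unitary n U \<and> A = spectral_mat n U (\<lambda>i. complex_of_real (h i))"
proof (induction n arbitrary: A)
  case 0
  have "unitary 0 (1\<^sub>m 0)" by (intro unitaryI) auto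
  moreover have "A = spectral_mat 0 (1\<^sub>m 0) (\<lambda>i. complex_of_real (f i))" for f
    using 0 by (intro eq_matI) auto
  ultimately show ?case by blast
next
  case (Suc m A)
  obtain W e B where W: "unitary (Suc m) W" and B: "B \<in> carrier_mat m m" "dag B = B"
    and AW: "A = W * diag_block (complex_of_real e) B * dag W"
    using hermitian_deflation[OF Suc.prems] by blast
  obtain V h where V: "unitary m V" and BV: "B = spectral_mat m V (\<lambda>i. complex_of_real (h i))"
    using Suc.IH[OF B] by blast
  note w = unitaryD[OF W] and u = unitaryD[OF unitary_diag_block[OF V]] and v = unitaryD[OF V]
  define h' where "h' i = (if i = 0 then e else h (i - 1))" for i
  have "diag_of (Suc m) (\<lambda>i. complex_of_real (h' i)) =
      diag_block (complex_of_real e) (diag_of m (\<lambda>i. complex_of_real (h i)))"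
    unfolding diag_block_diag_of h'_def by (intro eq_matI) auto
  hence "diag_block (complex_of_real e) B =
      diag_block 1 V * diag_of (Suc m) (\<lambda>i. complex_of_real (h' i)) * dag (diag_block 1 V)"
    using v unfolding BV by (simp add: diag_block_mult[of _ m] dag_diag_block[of V m])
  hence "A = spectral_mat (Suc m) (W * diag_block 1 V) (\<lambda>i. complex_of_real (h' i))"
    unfolding AW using w u
    by (simp add: assoc_mult_mat[of _ "Suc m" "Suc m" _ "Suc m" _ "Suc m"] dag_mult[of _ "Suc m" "Suc m" _ "Suc m"])
  thus ?case using unitary_mult[OF W unitary_diag_block[OF V]] by blast
qed

lemma finsum_carrier[simp]: "finsum_mat r c f S \<in> carrier_mat r c"
  and finsum_dim[simp]: "dim_row (finsum_mat r c f S) = r" "dim_col (finsum_mat r c f S) = c"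
  by (auto simp: finsum_mat_def)

lemma index_finsum[simp]: "i < r \<Longrightarrow> j < c \<Longrightarrow> finsum_mat r c f S $$ (i,j) = (\<Sum>u\<in>S. f u $$ (i,j))"
  by (auto simp: finsum_mat_def)

lemma finsum_cong: "(\<And>u. u \<in> S \<Longrightarrow> f u = g u) \<Longrightarrow> finsum_mat r c f S = finsum_mat r c g S"
  unfolding finsum_mat_def by (intro cong_mat refl) (auto intro!: sum.cong)

lemma finsum_mult_left: assumes A: "A \<in> carrier_mat m r" and f: "\<And>u. u \<in> S \<Longrightarrow> f u \<in> carrier_mat r c"
  shows "A * finsum_mat r c f S = finsum_mat m c (\<lambda>u. A * f u) S"
proof (rule eq_matI)
  fix i j assume "i < dim_row (finsum_mat m c (\<lambda>u. A * f u) S)" "j < dim_col (finsum_mat m c (\<lambda>u. A * f u) S)"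
  hence i: "i < m" and j: "j < c" by auto
  have "(A * finsum_mat r c f S) $$ (i,j) = (\<Sum>k<r. A $$ (i,k) * (\<Sum>u\<in>S. f u $$ (k,j)))"
    using A i j by (subst index_mult_sum) auto
  also have "\<dots> = (\<Sum>u\<in>S. \<Sum>k<r. A $$ (i,k) * f u $$ (k,j))"
    by (simp add: sum_distrib_left sum.swap[of _ S])
  also have "\<dots> = (\<Sum>u\<in>S. (A * f u) $$ (i,j))"
    using A f i j by (intro sum.cong refl, subst index_mult_sum) auto
  finally show "(A * finsum_mat r c f S) $$ (i,j) = finsum_mat m c (\<lambda>u. A * f u) S $$ (i,j)"
    using i j by simp
qed (use A in auto)

lemma finsum_mult_right: assumes A: "A \<in> carrier_mat c m" and f: "\<And>u. u \<in> S \<Longrightarrow> f u \<in> carrier_mat r c"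
  shows "finsum_mat r c f S * A = finsum_mat r m (\<lambda>u. f u * A) S"
proof (rule eq_matI)
  fix i j assume "i < dim_row (finsum_mat r m (\<lambda>u. f u * A) S)" "j < dim_col (finsum_mat r m (\<lambda>u. f u * A) S)"
  hence i: "i < r" and j: "j < m" by auto
  have "(finsum_mat r c f S * A) $$ (i,j) = (\<Sum>k<c. (\<Sum>u\<in>S. f u $$ (i,k)) * A $$ (k,j))"
    using A i j by (subst index_mult_sum) auto
  also have "\<dots> = (\<Sum>u\<in>S. \<Sum>k<c. f u $$ (i,k) * A $$ (k,j))"
    by (simp add: sum_distrib_right sum.swap[of _ S])
  also have "\<dots> = (\<Sum>u\<in>S. (f u * A) $$ (i,j))"
    using A f i j by (intro sum.cong refl, subst index_mult_sum) auto
  finally show "(finsum_mat r c f S * A) $$ (i,j) = finsum_mat r m (\<lambda>u. f u * A) S $$ (i,j)"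
    using i j by simp
qed (use A in auto)

lemma trace_finsum: assumes f: "\<And>u. u \<in> S \<Longrightarrow> f u \<in> carrier_mat n n"
  shows "trace (finsum_mat n n f S) = (\<Sum>u\<in>S. trace (f u))"
proof -
  have "trace (finsum_mat n n f S) = (\<Sum>i<n. \<Sum>u\<in>S. f u $$ (i,i))" by (simp add: trace_def)
  also have "\<dots> = (\<Sum>u\<in>S. \<Sum>i<n. f u $$ (i,i))" by (rule sum.swap)
  also have "\<dots> = (\<Sum>u\<in>S. trace (f u))" using f by (intro sum.cong refl) (auto simp: trace_def)
  finally show ?thesis .
qed

lemma dag_finsum: assumes f: "\<And>u. u \<in> S \<Longrightarrow> f u \<in> carrier_mat n m"
  shows "dag (finsum_mat n m f S) = finsum_mat m n (\<lambda>u. dag (f u)) S"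
proof (intro eq_matI)
  fix i j assume "i < dim_row (finsum_mat m n (\<lambda>u. dag (f u)) S)" "j < dim_col (finsum_mat m n (\<lambda>u. dag (f u)) S)"
  hence i: "i < m" and j: "j < n" by auto
  show "dag (finsum_mat n m f S) $$ (i, j) = finsum_mat m n (\<lambda>u. dag (f u)) S $$ (i, j)"
    using i j by (auto simp: cnj_sum intro!: sum.cong dest!: f)
qed auto

lemma finsum_smult: assumes f: "\<And>u. u \<in> S \<Longrightarrow> f u \<in> carrier_mat n m"
  shows "c \<cdot>\<^sub>m finsum_mat n m f S = finsum_mat n m (\<lambda>u. c \<cdot>\<^sub>m f u) S"
  by (intro eq_matI) (auto simp: sum_distrib_left intro!: sum.cong dest!: f)

lemma finsum_add: assumes "\<And>u. u \<in> S \<Longrightarrow> f u \<in> carrier_mat n m" "\<And>u. u \<in> S \<Longrightarrow> g u \<in> carrier_mat n m"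
  shows "finsum_mat n m (\<lambda>u. f u + g u) S = finsum_mat n m f S + finsum_mat n m g S"
proof (intro eq_matI)
  fix i j assume "i < dim_row (finsum_mat n m f S + finsum_mat n m g S)" "j < dim_col (finsum_mat n m f S + finsum_mat n m g S)"
  hence i: "i < n" and j: "j < m" by auto
  have "(\<Sum>u\<in>S. (f u + g u) $$ (i, j)) = (\<Sum>u\<in>S. f u $$ (i, j) + g u $$ (i,j))"
    using i j by (intro sum.cong) (auto dest!: assms)
  thus "finsum_mat n m (\<lambda>u. f u + g u) S $$ (i, j) = (finsum_mat n m f S + finsum_mat n m g S) $$ (i, j)"
    using i j by (simp add: sum.distrib)
qed auto

lemma finsum_empty[simp]: "finsum_mat n m f {} = 0\<^sub>m n m"
  by (intro eq_matI) auto

lemma finsum_insert: assumes "finite S" "x \<notin> S" "f x \<in> carrier_mat n m"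
  shows "finsum_mat n m f (insert x S) = f x + finsum_mat n m f S"
  using assms by (intro eq_matI) auto

lemma finsum_zero: "finsum_mat n m (\<lambda>u. 0\<^sub>m n m) S = 0\<^sub>m n m"
  by (intro eq_matI) auto

lemma listsum_finsum: "listsum_mat d (map g Ks) = finsum_mat d d (\<lambda>k. g (Ks ! k)) {..<length Ks}"
  unfolding listsum_mat_def finsum_mat_def
  by (intro cong_mat refl) (auto simp: sum_list_sum_nth atLeast0LessThan)

lemma finsum_minus: assumes "\<And>u. u \<in> S \<Longrightarrow> f u \<in> carrier_mat n m" "\<And>u. u \<in> S \<Longrightarrow> g u \<in> carrier_mat n m"
  shows "finsum_mat n m (\<lambda>u. f u - g u) S = finsum_mat n m f S - finsum_mat n m g S"
proof (intro eq_matI)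
  fix i j assume "i < dim_row (finsum_mat n m f S - finsum_mat n m g S)" "j < dim_col (finsum_mat n m f S - finsum_mat n m g S)"
  hence i: "i < n" and j: "j < m" by auto
  have "(\<Sum>u\<in>S. (f u - g u) $$ (i, j)) = (\<Sum>u\<in>S. f u $$ (i, j) - g u $$ (i,j))"
    using i j by (intro sum.cong) (auto dest!: assms)
  thus "finsum_mat n m (\<lambda>u. f u - g u) S $$ (i, j) = (finsum_mat n m f S - finsum_mat n m g S) $$ (i, j)"
    using i j by (simp add: sum_subtractf)
qed auto

lemma finsum_lessThan_Suc_shift: assumes "\<And>k. k < Suc K \<Longrightarrow> f k \<in> carrier_mat n n"
  shows "finsum_mat n n f {..<Suc K} = f 0 + finsum_mat n n (\<lambda>k. f (Suc k)) {..<K}"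
  using assms by (intro eq_matI) (auto simp del: sum.lessThan_Suc simp: sum.lessThan_Suc_shift)

lemma one_smult_mat[simp]: "(1::complex) \<cdot>\<^sub>m A = A"
  by (intro eq_matI) auto

lemma sum_atLeast1_atMost_shift: "(\<Sum>i\<in>{1..N}. f i) = (\<Sum>i<N. f (Suc i))"
  using sum.atLeast1_atMost_eq[of f N] by (simp add: One_nat_def)

lemma smult_smult_mat: "a \<cdot>\<^sub>m (b \<cdot>\<^sub>m A) = (a * b :: complex) \<cdot>\<^sub>m A"
  by (intro eq_matI) auto

lemma sum_partial_geometric_le: fixes l g :: real assumes l0: "0 \<le> l" and lg: "l \<le> 1 - g" and g: "g > 0"
  shows "(\<Sum>m<K. \<Sum>k<m. l ^ k) \<le> real K / g"
proof -
  have l1: "l < 1" using lg g by simp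
  have inner: "(\<Sum>k<m. l ^ k) \<le> 1 / g" for m
  proof -
    have "(\<Sum>k<m. l ^ k) = (1 - l ^ m) / (1 - l)" using l1 by (simp add: sum_gp_strict)
    also have "\<dots> \<le> 1 / (1 - l)" using l0 l1 by (intro divide_right_mono) auto
    also have "\<dots> \<le> 1 / g" using lg g by (intro divide_left_mono) auto
    finally show ?thesis .
  qed
  have "(\<Sum>m<K. \<Sum>k<m. l ^ k) \<le> (\<Sum>m<K. 1 / g)" by (intro sum_mono inner)
  thus ?thesis by simp
qed

definition lin_map :: "nat \<Rightarrow> (complex mat \<Rightarrow> complex mat) \<Rightarrow> bool" where
  "lin_map n T \<longleftrightarrow> (\<forall>X \<in> carrier_mat n n. T X \<in> carrier_mat n n) \<and>
     (\<forall>X \<in> carrier_mat n n. \<forall>Y \<in> carrier_mat n n. T (X + Y) = T X + T Y) \<and>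
     (\<forall>X \<in> carrier_mat n n. \<forall>c. T (c \<cdot>\<^sub>m X) = c \<cdot>\<^sub>m T X)"

lemma lin_mapD: assumes "lin_map n T"
  shows "X \<in> carrier_mat n n \<Longrightarrow> T X \<in> carrier_mat n n"
    "X \<in> carrier_mat n n \<Longrightarrow> Y \<in> carrier_mat n n \<Longrightarrow> T (X + Y) = T X + T Y"
    "X \<in> carrier_mat n n \<Longrightarrow> T (c \<cdot>\<^sub>m X) = c \<cdot>\<^sub>m T X"
  using assms unfolding lin_map_def by auto

lemma lin_map_comp: "lin_map n S \<Longrightarrow> lin_map n T \<Longrightarrow> lin_map n (\<lambda>X. S (T X))"
  unfolding lin_map_def by auto

lemma lin_map_zero: assumes "lin_map n T" shows "T (0\<^sub>m n n) = 0\<^sub>m n n"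
proof -
  have "T (0\<^sub>m n n) = T (0 \<cdot>\<^sub>m 0\<^sub>m n n)" by simp
  also have "\<dots> = 0 \<cdot>\<^sub>m T (0\<^sub>m n n)" using lin_mapD(3)[OF assms, of "0\<^sub>m n n"] by simp
  also have "\<dots> = 0\<^sub>m n n" using lin_mapD(1)[OF assms, of "0\<^sub>m n n"] by (intro eq_matI) auto
  finally show ?thesis .
qed

lemma lin_map_finsum: assumes T: "lin_map n T" and fin: "finite I" and X: "\<And>i. i \<in> I \<Longrightarrow> X i \<in> carrier_mat n n"
  shows "T (finsum_mat n n X I) = finsum_mat n n (\<lambda>i. T (X i)) I"
  using fin X
proof (induction I rule: finite_induct)
  case empty thus ?case using lin_map_zero[OF T] by simp
next
  case (insert x F)
  have "T (finsum_mat n n X (insert x F)) = T (X x + finsum_mat n n X F)"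
    using insert by (subst finsum_insert) auto
  also have "\<dots> = T (X x) + T (finsum_mat n n X F)" using insert by (intro lin_mapD(2)[OF T]) auto
  also have "\<dots> = finsum_mat n n (\<lambda>i. T (X i)) (insert x F)"
    using insert lin_mapD(1)[OF T] by (subst finsum_insert) auto
  finally show ?case .
qed

lemma lin_map_lincomb: assumes T: "lin_map n T" and fin: "finite I" and X: "\<And>i. i \<in> I \<Longrightarrow> X i \<in> carrier_mat n n"
  shows "T (finsum_mat n n (\<lambda>i. c i \<cdot>\<^sub>m X i) I) = finsum_mat n n (\<lambda>i. c i \<cdot>\<^sub>m T (X i)) I"
  using lin_map_finsum[OF T fin, of "\<lambda>i. c i \<cdot>\<^sub>m X i"] X lin_mapD(3)[OF T]
  by (auto intro: finsum_cong)

lemma lin_map_minus: assumes T: "lin_map n T" and X: "X \<in> carrier_mat n n" and Y: "Y \<in> carrier_mat n n"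
  shows "T (X - Y) = T X - T Y"
proof -
  have "X - Y = X + (-1) \<cdot>\<^sub>m Y" using X Y by (intro eq_matI) auto
  hence "T (X - Y) = T X + (-1) \<cdot>\<^sub>m T Y" using T X Y by (simp add: lin_mapD)
  also have "\<dots> = T X - T Y" using lin_mapD(1)[OF T X] lin_mapD(1)[OF T Y] by (intro eq_matI) auto
  finally show ?thesis .
qed

definition sandwich_sum :: "nat \<Rightarrow> 'a set \<Rightarrow> ('a \<Rightarrow> complex mat) \<Rightarrow> ('a \<Rightarrow> complex mat) \<Rightarrow> complex mat \<Rightarrow> complex mat" where
  "sandwich_sum n I A B X = finsum_mat n n (\<lambda>k. A k * X * B k) I"

lemma sandwich_sum_carrier[simp]: "sandwich_sum n I A B X \<in> carrier_mat n n"
  unfolding sandwich_sum_def by simp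

lemma lin_map_sandwich_sum: assumes A: "\<And>k. k \<in> I \<Longrightarrow> A k \<in> carrier_mat n n" and B: "\<And>k. k \<in> I \<Longrightarrow> B k \<in> carrier_mat n n"
  shows "lin_map n (sandwich_sum n I A B)"
  unfolding lin_map_def
proof (intro conjI ballI allI)
  fix X Y :: "complex mat" assume X: "X \<in> carrier_mat n n" and Y: "Y \<in> carrier_mat n n"
  show "sandwich_sum n I A B (X + Y) = sandwich_sum n I A B X + sandwich_sum n I A B Y"
    unfolding sandwich_sum_def
  proof (subst finsum_add[symmetric])
    show "finsum_mat n n (\<lambda>k. A k * (X + Y) * B k) I = finsum_mat n n (\<lambda>u. A u * X * B u + A u * Y * B u) I"
    proof (rule finsum_cong)
      fix k assume k: "k \<in> I"
      have "A k * (X + Y) = A k * X + A k * Y" using A[OF k] X Y by (rule mult_add_distrib_mat)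
      thus "A k * (X + Y) * B k = A k * X * B k + A k * Y * B k"
        using A[OF k] B[OF k] X Y by (simp add: add_mult_distrib_mat[of _ n n])
    qed
  qed (use A B X Y in auto)
next
  fix X :: "complex mat" and c :: complex assume X: "X \<in> carrier_mat n n"
  show "sandwich_sum n I A B (c \<cdot>\<^sub>m X) = c \<cdot>\<^sub>m sandwich_sum n I A B X"
    unfolding sandwich_sum_def
  proof (subst finsum_smult)
    show "finsum_mat n n (\<lambda>k. A k * (c \<cdot>\<^sub>m X) * B k) I = finsum_mat n n (\<lambda>u. c \<cdot>\<^sub>m (A u * X * B u)) I"
    proof (rule finsum_cong)
      fix k assume k: "k \<in> I"
      show "A k * (c \<cdot>\<^sub>m X) * B k = c \<cdot>\<^sub>m (A k * X * B k)"
        using A[OF k] B[OF k] X by (simp add: mult_smult_distrib[of _ n n] mult_smult_assoc_mat[of _ n n])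
    qed
  qed (use A B X in auto)
qed simp

lemma trace_sandwich_sum_dual: assumes A: "\<And>k. k \<in> I \<Longrightarrow> A k \<in> carrier_mat n n" and B: "\<And>k. k \<in> I \<Longrightarrow> B k \<in> carrier_mat n n"
  and X: "X \<in> carrier_mat n n" and Y: "Y \<in> carrier_mat n n"
  shows "trace (sandwich_sum n I A B X * Y) = trace (X * sandwich_sum n I B A Y)"
proof -
  have "trace (sandwich_sum n I A B X * Y) = trace (finsum_mat n n (\<lambda>k. A k * X * B k * Y) I)"
    unfolding sandwich_sum_def using A B X Y by (subst finsum_mult_right[of _ n n]) auto
  also have "\<dots> = (\<Sum>k\<in>I. trace (A k * X * B k * Y))" using A B X Y by (intro trace_finsum) auto
  also have "\<dots> = (\<Sum>k\<in>I. trace (X * (B k * Y * A k)))"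
  proof (intro sum.cong refl)
    fix k assume k: "k \<in> I"
    have "trace (A k * X * B k * Y) = trace (A k * (X * B k * Y))"
      using A[OF k] B[OF k] X Y by (simp add: assoc_mult_mat[of _ n n _ n _ n])
    also have "\<dots> = trace ((X * B k * Y) * A k)" using A[OF k] B[OF k] X Y by (intro trace_mult_comm[of _ n n]) auto
    also have "\<dots> = trace (X * (B k * Y * A k))" using A[OF k] B[OF k] X Y by (simp add: assoc_mult_mat[of _ n n _ n _ n])
    finally show "trace (A k * X * B k * Y) = trace (X * (B k * Y * A k))" .
  qed
  also have "\<dots> = trace (finsum_mat n n (\<lambda>k. X * (B k * Y * A k)) I)"
    using A B X Y by (intro trace_finsum[symmetric]) auto
  also have "finsum_mat n n (\<lambda>k. X * (B k * Y * A k)) I = X * sandwich_sum n I B A Y"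
    unfolding sandwich_sum_def using A B X Y by (subst finsum_mult_left[of _ n n]) auto
  finally show ?thesis .
qed

lemma dag_sandwich_sum: assumes A: "\<And>k. k \<in> I \<Longrightarrow> A k \<in> carrier_mat n n" and B: "\<And>k. k \<in> I \<Longrightarrow> B k \<in> carrier_mat n n"
  and X: "X \<in> carrier_mat n n"
  shows "dag (sandwich_sum n I A B X) = sandwich_sum n I (\<lambda>k. dag (B k)) (\<lambda>k. dag (A k)) (dag X)"
  unfolding sandwich_sum_def
proof (subst dag_finsum)
  show "finsum_mat n n (\<lambda>u. dag (A u * X * B u)) I = finsum_mat n n (\<lambda>k. dag (B k) * dag X * dag (A k)) I"
  proof (rule finsum_cong)
    fix k assume k: "k \<in> I"
    show "dag (A k * X * B k) = dag (B k) * dag X * dag (A k)"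
      using A[OF k] B[OF k] X by (simp add: dag_mult[of _ n n _ n] assoc_mult_mat[of _ n n _ n _ n])
  qed
qed (use A B X in auto)

lemma kraus_map_sandwich: "kraus_map d Ns X = sandwich_sum d {..<length Ns} (\<lambda>k. Ns ! k) (\<lambda>k. dag (Ns ! k)) X"
  unfolding kraus_map_def sandwich_sum_def by (simp add: listsum_finsum)

lemma kraus_adj_sandwich: "kraus_adj d Ns X = sandwich_sum d {..<length Ns} (\<lambda>k. dag (Ns ! k)) (\<lambda>k. Ns ! k) X"
  unfolding kraus_adj_def sandwich_sum_def by (simp add: listsum_finsum)

lemma meas_map_sandwich: "meas_map d U Ok X = sandwich_sum d U Ok (\<lambda>u. dag (Ok u)) X"
  unfolding meas_map_def sandwich_sum_def ..

lemma meas_adj_sandwich: "meas_adj d U Ok X = sandwich_sum d U (\<lambda>u. dag (Ok u)) Ok X"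
  unfolding meas_adj_def sandwich_sum_def ..

lemma meas_hat_adj_sandwich: assumes O: "\<And>u. u \<in> U \<Longrightarrow> Ok u \<in> carrier_mat d d" and X: "X \<in> carrier_mat d d"
  shows "meas_hat_adj d U Ok \<rho> X = sandwich_sum d U (\<lambda>u. complex_of_real (u - meas_exp U Ok \<rho>) \<cdot>\<^sub>m dag (Ok u)) Ok X"
  unfolding meas_hat_adj_def sandwich_sum_def
proof (rule finsum_cong)
  fix u assume u: "u \<in> U"
  have c: "dag (Ok u) * X \<in> carrier_mat d d" using O[OF u] X by simp
  show "complex_of_real (u - meas_exp U Ok \<rho>) \<cdot>\<^sub>m (dag (Ok u) * X * Ok u) =
    complex_of_real (u - meas_exp U Ok \<rho>) \<cdot>\<^sub>m dag (Ok u) * X * Ok u"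
    using O[OF u] X by (simp add: mult_smult_assoc_mat[OF c O[OF u]] mult_smult_assoc_mat[of _ d d _ d])
qed

lemma trace_sandwich_diag: assumes V: "V \<in> carrier_mat m n"
  shows "trace (V * diag_of n (\<lambda>k. complex_of_real (q k)) * dag V) =
    complex_of_real (\<Sum>i<m. \<Sum>k<n. q k * (cmod (V $$ (i,k)))^2)"
proof -
  have "trace (V * diag_of n (\<lambda>k. complex_of_real (q k)) * dag V) =
     (\<Sum>i<m. \<Sum>k<n. V $$ (i,k) * complex_of_real (q k) * cnj (V $$ (i,k)))"
    unfolding trace_def using V carrier_matD[OF V] by (intro sum.cong refl) (auto simp: index_spectral_mat simp del: index_mult_mat(1))
  also have "\<dots> = (\<Sum>i<m. \<Sum>k<n. complex_of_real (q k * (cmod (V $$ (i,k)))^2))"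
    by (intro sum.cong refl) (simp add: complex_norm_square[symmetric] mult.commute mult.left_commute)
  also have "\<dots> = complex_of_real (\<Sum>i<m. \<Sum>k<n. q k * (cmod (V $$ (i,k)))^2)"
    by simp
  finally show ?thesis .
qed

lemma vinner_sum: assumes A: "A \<in> carrier_mat n n" and v: "v \<in> carrier_vec n"
  shows "vinner v (A *\<^sub>v v) = (\<Sum>i<n. \<Sum>j<n. cnj (v $ i) * A $$ (i,j) * v $ j)"
  unfolding vinner_def using A v
  by (auto simp: scalar_prod_def atLeast0LessThan sum_distrib_left mult.assoc intro!: sum.cong)

lemma vinner_self: "v \<in> carrier_vec n \<Longrightarrow> vinner v v = complex_of_real (\<Sum>i<n. (cmod (v $ i))^2)"
  unfolding vinner_def by (auto simp: complex_norm_square[symmetric] mult.commute intro!: sum.cong)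

lemma vinner_spectral_mat: assumes U: "unitary n U" and v: "v \<in> carrier_vec n"
  shows "vinner v (spectral_mat n U f *\<^sub>v v) = (\<Sum>k<n. f k * complex_of_real ((cmod (\<Sum>j<n. cnj (U $$ (j,k)) * v $ j))^2))"
proof -
  note c = unitaryD[OF U]
  define w where "w k = (\<Sum>j<n. cnj (U $$ (j,k)) * v $ j)" for k
  have "vinner v (spectral_mat n U f *\<^sub>v v) = (\<Sum>i<n. \<Sum>j<n. cnj (v $ i) * (\<Sum>k<n. U $$ (i,k) * f k * cnj (U $$ (j,k))) * v $ j)"
    using c v by (subst vinner_sum[of _ n]) (auto simp: index_spectral_mat simp del: index_mult_mat(1))
  also have "\<dots> = (\<Sum>i<n. \<Sum>j<n. \<Sum>k<n. f k * ((cnj (v $ i) * U $$ (i,k)) * (cnj (U $$ (j,k)) * v $ j)))"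
    by (intro sum.cong refl) (simp add: sum_distrib_left sum_distrib_right mult_ac)
  also have "\<dots> = (\<Sum>i<n. \<Sum>k<n. \<Sum>j<n. f k * ((cnj (v $ i) * U $$ (i,k)) * (cnj (U $$ (j,k)) * v $ j)))"
    by (rule sum.cong[OF refl], rule sum.swap)
  also have "\<dots> = (\<Sum>k<n. \<Sum>i<n. \<Sum>j<n. f k * ((cnj (v $ i) * U $$ (i,k)) * (cnj (U $$ (j,k)) * v $ j)))"
    by (rule sum.swap)
  also have "\<dots> = (\<Sum>k<n. f k * ((\<Sum>i<n. cnj (v $ i) * U $$ (i,k)) * w k))"
    unfolding w_def by (rule sum.cong[OF refl], subst sum_product, simp add: sum_distrib_left)
  also have "\<dots> = (\<Sum>k<n. f k * complex_of_real ((cmod (w k))^2))"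
  proof (intro sum.cong refl)
    fix k
    have "(\<Sum>i<n. cnj (v $ i) * U $$ (i,k)) = cnj (w k)" unfolding w_def by (simp add: cnj_sum mult.commute)
    thus "f k * ((\<Sum>i<n. cnj (v $ i) * U $$ (i,k)) * w k) = f k * complex_of_real ((cmod (w k))^2)"
      by (simp add: complex_norm_square[symmetric] mult.commute)
  qed
  finally show ?thesis unfolding w_def .
qed

lemma sandwich_spectral_mat: assumes A: "A \<in> carrier_mat m n" and U: "U \<in> carrier_mat n n" and D: "D \<in> carrier_mat n n"
  shows "A * (U * D * dag U) * dag A = (A * U) * D * dag (A * U)"
proof -
  have UD: "U * D \<in> carrier_mat n n" using U D by simp
  have dU: "dag U \<in> carrier_mat n n" and dA: "dag A \<in> carrier_mat n m" using U A by auto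
  have dUA: "dag U * dag A \<in> carrier_mat n m" using dU dA by simp
  have UDU: "U * D * dag U \<in> carrier_mat n n" using UD dU by simp
  have e1: "dag (A * U) = dag U * dag A" by (simp add: dag_mult[OF A U])
  have e2: "(A * U) * D = A * (U * D)" by (rule assoc_mult_mat[OF A U D])
  have e3: "A * (U * D) * (dag U * dag A) = A * ((U * D) * (dag U * dag A))" by (rule assoc_mult_mat[OF A UD dUA])
  have e4: "(U * D) * (dag U * dag A) = ((U * D) * dag U) * dag A" by (rule assoc_mult_mat[OF UD dU dA, symmetric])
  have e5: "A * (((U * D) * dag U) * dag A) = (A * ((U * D) * dag U)) * dag A" by (rule assoc_mult_mat[OF A UDU dA, symmetric])
  show ?thesis unfolding e1 e2 e3 e4 e5 by (rule refl)
qed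

lemma vinner_add_smult: assumes A: "A \<in> carrier_mat n n" and B: "B \<in> carrier_mat n n" and v: "v \<in> carrier_vec n"
  shows "vinner v ((A + c \<cdot>\<^sub>m B) *\<^sub>v v) = vinner v (A *\<^sub>v v) + c * vinner v (B *\<^sub>v v)"
proof -
  have AB: "A + c \<cdot>\<^sub>m B \<in> carrier_mat n n" using A B by simp
  have "vinner v ((A + c \<cdot>\<^sub>m B) *\<^sub>v v) = (\<Sum>i<n. \<Sum>j<n. cnj (v $ i) * (A + c \<cdot>\<^sub>m B) $$ (i,j) * v $ j)"
    by (rule vinner_sum[OF AB v])
  also have "\<dots> = (\<Sum>i<n. \<Sum>j<n. cnj (v $ i) * A $$ (i,j) * v $ j) + c * (\<Sum>i<n. \<Sum>j<n. cnj (v $ i) * B $$ (i,j) * v $ j)"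
    using A B by (simp add: sum.distrib sum_distrib_left algebra_simps)
  also have "\<dots> = vinner v (A *\<^sub>v v) + c * vinner v (B *\<^sub>v v)"
    by (simp only: vinner_sum[OF A v] vinner_sum[OF B v])
  finally show ?thesis .
qed

lemma cnj_vinner_hermitian: assumes A: "A \<in> carrier_mat n n" and h: "dag A = A" and v: "v \<in> carrier_vec n"
  shows "cnj (vinner v (A *\<^sub>v v)) = vinner v (A *\<^sub>v v)"
proof -
  have Aij: "cnj (A $$ (i,j)) = A $$ (j,i)" if "i < n" "j < n" for i j
  proof -
    have "A $$ (j,i) = dag A $$ (j,i)" using h by simp
    also have "\<dots> = cnj (A $$ (i,j))" using A that by simp
    finally show ?thesis by simp
  qed
  have "cnj (vinner v (A *\<^sub>v v)) = (\<Sum>i<n. \<Sum>j<n. v $ i * A $$ (j,i) * cnj (v $ j))"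
    using A v by (simp add: vinner_sum[of _ n] cnj_sum Aij)
  also have "\<dots> = (\<Sum>j<n. \<Sum>i<n. v $ i * A $$ (j,i) * cnj (v $ j))" by (rule sum.swap)
  also have "\<dots> = vinner v (A *\<^sub>v v)" using A v by (simp add: vinner_sum[of _ n] mult_ac)
  finally show ?thesis .
qed

lemma vinner_bound: assumes A: "A \<in> carrier_mat n n" and v: "v \<in> carrier_vec n"
  shows "cmod (vinner v (A *\<^sub>v v)) \<le> (\<Sum>i<n. \<Sum>j<n. cmod (A $$ (i,j))) * (\<Sum>l<n. (cmod (v $ l))^2)"
proof -
  define nv where "nv = (\<Sum>l<n. (cmod (v $ l))^2)"
  have vi: "(cmod (v $ i))^2 \<le> nv" if "i < n" for i
    unfolding nv_def using that by (intro member_le_sum) auto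
  have vij: "cmod (v $ i) * cmod (v $ j) \<le> nv" if "i < n" "j < n" for i j
  proof -
    have "cmod (v $ i) * cmod (v $ j) \<le> ((cmod (v $ i))^2 + (cmod (v $ j))^2) / 2"
      using sum_squares_bound[of "cmod (v $ i)" "cmod (v $ j)"] by (simp add: power2_eq_square field_simps)
    also have "\<dots> \<le> nv" using vi[OF that(1)] vi[OF that(2)] by simp
    finally show ?thesis .
  qed
  have "cmod (vinner v (A *\<^sub>v v)) \<le> (\<Sum>i<n. \<Sum>j<n. cmod (cnj (v $ i) * A $$ (i,j) * v $ j))"
    using A v by (simp add: vinner_sum[of _ n]) (intro order.trans[OF norm_sum] sum_mono norm_sum)
  also have "\<dots> \<le> (\<Sum>i<n. \<Sum>j<n. cmod (A $$ (i,j)) * nv)"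
  proof (intro sum_mono)
    fix i j assume "i \<in> {..<n}" "j \<in> {..<n}"
    hence ij: "i < n" "j < n" by auto
    have "cmod (cnj (v $ i) * A $$ (i,j) * v $ j) = cmod (A $$ (i,j)) * (cmod (v $ i) * cmod (v $ j))"
      by (simp add: norm_mult)
    also have "\<dots> \<le> cmod (A $$ (i,j)) * nv" by (intro mult_left_mono vij ij) auto
    finally show "cmod (cnj (v $ i) * A $$ (i,j) * v $ j) \<le> cmod (A $$ (i,j)) * nv" .
  qed
  also have "\<dots> = (\<Sum>i<n. \<Sum>j<n. cmod (A $$ (i,j))) * nv" by (simp add: sum_distrib_right)
  finally show ?thesis unfolding nv_def .
qed

section \<open>The KMS inner product of a faithful state\<close>

locale faithful_state =
  fixes d :: nat and \<rho> :: "complex mat" and s :: real and Ur :: "complex mat" and p :: "nat \<Rightarrow> real"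
  assumes d_pos: "d > 0" and unitary_Ur: "unitary d Ur" and p_pos: "\<forall>i<d. p i > 0" and p_sum: "(\<Sum>i<d. p i) = 1"
    and rho_eq: "\<rho> = spectral_mat d Ur (\<lambda>i. complex_of_real (p i))"
begin

abbreviation kms_inner :: "complex mat \<Rightarrow> complex mat \<Rightarrow> complex" (\<open>\<langle>_,/ _\<rangle>\<close>) where
  "\<langle>A, B\<rangle> \<equiv> sinner d \<rho> s A B"

abbreviation rpow where "rpow a \<equiv> mpow d \<rho> a"

definition Gamma :: "complex mat \<Rightarrow> complex mat" where
  "Gamma X = rpow (1 - s) * X * rpow s"

lemma Ur_unitaryD: "Ur \<in> carrier_mat d d" "dag Ur \<in> carrier_mat d d" "dag Ur * Ur = 1\<^sub>m d" "Ur * dag Ur = 1\<^sub>m d"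
  using unitaryD[OF unitary_Ur] by auto

lemma mpow_eq: "rpow a = spectral_mat d Ur (\<lambda>i. complex_of_real (p i powr a))"
  unfolding mpow_def rho_eq by (simp add: mat_fun_spectral_mat[OF unitary_Ur])

lemma rho_carrier[simp]: "\<rho> \<in> carrier_mat d d"
  unfolding rho_eq using Ur_unitaryD by simp

lemma rpow_carrier[simp]: "rpow a \<in> carrier_mat d d"
  unfolding mpow_eq using Ur_unitaryD by simp

lemma dim_rho[simp]: "dim_row \<rho> = d" "dim_col \<rho> = d"
  using carrier_matD[OF rho_carrier] by auto

lemma dim_rpow[simp]: "dim_row (rpow a) = d" "dim_col (rpow a) = d"
  using carrier_matD[OF rpow_carrier[of a]] by auto

lemma dim_Gamma[simp]: "dim_row (Gamma X) = d" "dim_col (Gamma X) = d"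
  unfolding Gamma_def by auto

lemma rpow_mult: "rpow a * rpow b = rpow (a + b)"
proof -
  have "rpow a * rpow b = spectral_mat d Ur (\<lambda>i. complex_of_real (p i powr a) * complex_of_real (p i powr b))"
    unfolding mpow_eq by (rule spectral_mat_mult[OF unitary_Ur])
  also have "(\<lambda>i. complex_of_real (p i powr a) * complex_of_real (p i powr b)) = (\<lambda>i. complex_of_real (p i powr (a + b)))"
    by (auto simp: powr_add)
  finally show ?thesis unfolding mpow_eq .
qed

lemma rpow_one: "rpow 1 = \<rho>"
proof -
  have "rpow 1 = spectral_mat d Ur (\<lambda>i. complex_of_real (p i powr 1))" unfolding mpow_eq ..
  also have "\<dots> = spectral_mat d Ur (\<lambda>i. complex_of_real (p i))"
  proof -
    have "diag_of d (\<lambda>i. complex_of_real (p i powr 1)) = diag_of d (\<lambda>i. complex_of_real (p i))"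
      using p_pos by (intro eq_matI) auto
    thus ?thesis by simp
  qed
  finally show ?thesis unfolding rho_eq[symmetric] .
qed

lemma rpow_zero: "rpow 0 = 1\<^sub>m d"
proof -
  have "diag_of d (\<lambda>i. complex_of_real (p i powr 0)) = diag_of d (\<lambda>_. 1)"
    using p_pos by (intro eq_matI) auto
  thus ?thesis unfolding mpow_eq using spectral_mat_one[OF unitary_Ur] by simp
qed

lemma dag_rpow: "dag (rpow a) = rpow a"
  unfolding mpow_eq by (subst dag_spectral_mat[OF unitary_Ur]) simp

lemma dag_rho: "dag \<rho> = \<rho>"
  using dag_rpow[of 1] unfolding rpow_one .

lemma rpow_complementary: "rpow s * rpow (1 - s) = \<rho>" "rpow (1 - s) * rpow s = \<rho>"
  unfolding rpow_mult by (simp_all add: rpow_one)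

lemma Gamma_carrier[simp]: "X \<in> carrier_mat d d \<Longrightarrow> Gamma X \<in> carrier_mat d d"
  unfolding Gamma_def by simp

lemma kms_eq_trace_Gamma: assumes A: "A \<in> carrier_mat d d" and B: "B \<in> carrier_mat d d"
  shows "\<langle>A, B\<rangle> = trace (dag A * Gamma B)"
  unfolding sinner_def Gamma_def using A B by (simp add: assoc_mult_mat[of _ d d _ d _ d])

lemma kms_one_left: assumes X: "X \<in> carrier_mat d d"
  shows "\<langle>1\<^sub>m d, X\<rangle> = trace (\<rho> * X)"
proof -
  have "\<langle>1\<^sub>m d, X\<rangle> = trace ((rpow (1 - s) * X) * rpow s)"
    unfolding sinner_def using X by simp
  also have "\<dots> = trace (rpow s * (rpow (1 - s) * X))" using X by (intro trace_mult_comm[of _ d d]) auto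
  also have "rpow s * (rpow (1 - s) * X) = \<rho> * X"
    using X by (simp add: assoc_mult_mat[of _ d d _ d _ d, symmetric] rpow_complementary)
  finally show ?thesis .
qed

lemma trace_Gamma: "X \<in> carrier_mat d d \<Longrightarrow> trace (Gamma X) = \<langle>1\<^sub>m d, X\<rangle>"
  by (subst kms_eq_trace_Gamma) (auto intro!: left_mult_one_mat[symmetric] carrier_matI)

lemma cnj_kms: assumes A: "A \<in> carrier_mat d d" and B: "B \<in> carrier_mat d d"
  shows "cnj (\<langle>A, B\<rangle>) = \<langle>B, A\<rangle>"
proof -
  have "cnj (\<langle>A, B\<rangle>) = trace (dag (dag A * rpow (1 - s) * B * rpow s))"
    unfolding sinner_def using A B by (subst trace_dag[of _ d]) auto
  also have "dag (dag A * rpow (1 - s) * B * rpow s) = rpow s * dag B * rpow (1 - s) * A"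
    using A B by (simp add: dag_mult[of _ d d _ d] dag_rpow assoc_mult_mat[of _ d d _ d _ d])
  also have "trace (rpow s * dag B * rpow (1 - s) * A) = trace (rpow s * (dag B * rpow (1 - s) * A))"
    using A B by (simp add: assoc_mult_mat[of _ d d _ d _ d])
  also have "\<dots> = trace ((dag B * rpow (1 - s) * A) * rpow s)"
    using A B by (intro trace_mult_comm[of _ d d]) auto
  also have "\<dots> = \<langle>B, A\<rangle>" unfolding sinner_def using A B
    by (simp add: assoc_mult_mat[of _ d d _ d _ d])
  finally show ?thesis .
qed

lemma kms_add_right: assumes A: "A \<in> carrier_mat d d" and B: "B \<in> carrier_mat d d" and C: "C \<in> carrier_mat d d"
  shows "\<langle>A, B + C\<rangle> = \<langle>A, B\<rangle> + \<langle>A, C\<rangle>"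
proof -
  have X: "dag A * rpow (1 - s) \<in> carrier_mat d d" using A by simp
  have "dag A * rpow (1 - s) * (B + C) * rpow s = dag A * rpow (1 - s) * B * rpow s + dag A * rpow (1 - s) * C * rpow s"
    unfolding mult_add_distrib_mat[OF X B C] using X B C by (intro add_mult_distrib_mat[of _ d d]) auto
  thus ?thesis unfolding sinner_def using X B C by (simp add: trace_add[of _ d])
qed

lemma kms_minus_right: assumes A: "A \<in> carrier_mat d d" and B: "B \<in> carrier_mat d d" and C: "C \<in> carrier_mat d d"
  shows "\<langle>A, B - C\<rangle> = \<langle>A, B\<rangle> - \<langle>A, C\<rangle>"
proof -
  have X: "dag A * rpow (1 - s) \<in> carrier_mat d d" using A by simp
  have "dag A * rpow (1 - s) * (B - C) * rpow s = dag A * rpow (1 - s) * B * rpow s - dag A * rpow (1 - s) * C * rpow s"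
    unfolding mult_minus_distrib_mat[OF X B C] using X B C by (intro minus_mult_distrib_mat[of _ d d]) auto
  thus ?thesis unfolding sinner_def using X B C by (simp add: trace_minus[of _ d])
qed

lemma kms_smult_right: assumes A: "A \<in> carrier_mat d d" and B: "B \<in> carrier_mat d d"
  shows "\<langle>A, c \<cdot>\<^sub>m B\<rangle> = c * \<langle>A, B\<rangle>"
proof -
  have X: "dag A * rpow (1 - s) \<in> carrier_mat d d" using A by simp
  have "dag A * rpow (1 - s) * (c \<cdot>\<^sub>m B) * rpow s = c \<cdot>\<^sub>m (dag A * rpow (1 - s) * B * rpow s)"
    unfolding mult_smult_distrib[OF X B] using X B by (intro mult_smult_assoc_mat[of _ d d]) auto
  thus ?thesis unfolding sinner_def using X B by (simp add: trace_smult[of _ d])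
qed

lemma kms_finsum_right: assumes A: "A \<in> carrier_mat d d" and f: "\<And>u. u \<in> S \<Longrightarrow> f u \<in> carrier_mat d d"
  shows "\<langle>A, finsum_mat d d f S\<rangle> = (\<Sum>u\<in>S. \<langle>A, f u\<rangle>)"
proof -
  have "\<langle>A, finsum_mat d d f S\<rangle> = trace (dag A * rpow (1 - s) * finsum_mat d d f S * rpow s)"
    unfolding sinner_def ..
  also have "dag A * rpow (1 - s) * finsum_mat d d f S * rpow s = finsum_mat d d (\<lambda>u. dag A * rpow (1 - s) * f u * rpow s) S"
    using A f by (simp add: finsum_mult_left[of _ d d] finsum_mult_right[of _ d d])
  also have "trace \<dots> = (\<Sum>u\<in>S. trace (dag A * rpow (1 - s) * f u * rpow s))"
    using A f by (intro trace_finsum) auto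
  finally show ?thesis unfolding sinner_def .
qed

lemma kms_smult_left: assumes "A \<in> carrier_mat d d" "B \<in> carrier_mat d d"
  shows "\<langle>c \<cdot>\<^sub>m A, B\<rangle> = cnj c * \<langle>A, B\<rangle>"
proof -
  have "\<langle>c \<cdot>\<^sub>m A, B\<rangle> = cnj (\<langle>B, c \<cdot>\<^sub>m A\<rangle>)"
    using assms by (subst cnj_kms) auto
  also have "\<dots> = cnj c * \<langle>A, B\<rangle>"
    using assms by (simp add: kms_smult_right cnj_kms)
  finally show ?thesis .
qed

lemma kms_finsum_left: assumes B: "B \<in> carrier_mat d d" and f: "\<And>u. u \<in> S \<Longrightarrow> f u \<in> carrier_mat d d"
  shows "\<langle>finsum_mat d d f S, B\<rangle> = (\<Sum>u\<in>S. \<langle>f u, B\<rangle>)"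
proof -
  have "\<langle>finsum_mat d d f S, B\<rangle> = cnj (\<langle>B, finsum_mat d d f S\<rangle>)"
    using assms by (subst cnj_kms) auto
  also have "\<dots> = (\<Sum>u\<in>S. \<langle>f u, B\<rangle>)"
    using assms by (simp add: kms_finsum_right cnj_sum cnj_kms)
  finally show ?thesis .
qed

definition rho_min where "rho_min = Min (p ` {..<d})"

lemma rho_min_bounds: "rho_min > 0" "\<And>i. i < d \<Longrightarrow> rho_min \<le> p i"
proof -
  have fin: "finite (p ` {..<d})" and ne: "p ` {..<d} \<noteq> {}" using d_pos by auto
  show "rho_min > 0" unfolding rho_min_def using fin ne p_pos by (subst Min_gr_iff) auto
  show "\<And>i. i < d \<Longrightarrow> rho_min \<le> p i" unfolding rho_min_def using fin by auto
qed

lemma trace_rho: "trace \<rho> = 1"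
  unfolding rho_eq by (subst trace_spectral_mat[OF unitary_Ur]) (simp add: p_sum flip: of_real_sum)

lemma kms_one_one: "\<langle>1\<^sub>m d, 1\<^sub>m d\<rangle> = 1"
  by (simp add: kms_one_left trace_rho)

lemma kms_zero_left: "X \<in> carrier_mat d d \<Longrightarrow> \<langle>0\<^sub>m d d, X\<rangle> = 0"
  unfolding sinner_def by (simp add: trace_def)

lemma kms_one_orth_sym: "X \<in> carrier_mat d d \<Longrightarrow> \<langle>X, 1\<^sub>m d\<rangle> = 0 \<longleftrightarrow> \<langle>1\<^sub>m d, X\<rangle> = 0"
  using cnj_kms[of X "1\<^sub>m d"] by (metis complex_cnj_zero_iff one_carrier_mat)

lemma rho_quadratic_form: assumes v: "v \<in> carrier_vec d"
  shows "vinner v (\<rho> *\<^sub>v v) \<in> \<real>" "Re (vinner v (\<rho> *\<^sub>v v)) \<ge> rho_min * Re (vinner v v)"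
proof -
  define w where "w k = (cmod (\<Sum>j<d. cnj (Ur $$ (j,k)) * v $ j))^2" for k
  have e1: "vinner v (\<rho> *\<^sub>v v) = complex_of_real (\<Sum>k<d. p k * w k)"
    unfolding rho_eq w_def by (subst vinner_spectral_mat[OF unitary_Ur v]) simp
  have "vinner v v = vinner v (1\<^sub>m d *\<^sub>v v)" using v by simp
  also have "\<dots> = vinner v (spectral_mat d Ur (\<lambda>_. 1) *\<^sub>v v)" using spectral_mat_one[OF unitary_Ur] by simp
  also have "\<dots> = complex_of_real (\<Sum>k<d. w k)"
    unfolding w_def by (subst vinner_spectral_mat[OF unitary_Ur v]) simp
  finally have e2: "vinner v v = complex_of_real (\<Sum>k<d. w k)" .
  show "vinner v (\<rho> *\<^sub>v v) \<in> \<real>" unfolding e1 by simp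
  have "rho_min * (\<Sum>k<d. w k) \<le> (\<Sum>k<d. p k * w k)"
    unfolding sum_distrib_left using rho_min_bounds(2) by (intro sum_mono mult_right_mono) (auto simp: w_def)
  thus "Re (vinner v (\<rho> *\<^sub>v v)) \<ge> rho_min * Re (vinner v v)" unfolding e1 e2 by simp
qed

lemma trace_sandwich_rho_pos: assumes A: "A \<in> carrier_mat m d"
  shows "\<exists>q. trace (A * \<rho> * dag A) = complex_of_real q \<and> q \<ge> 0 \<and> (A \<noteq> 0\<^sub>m m d \<longrightarrow> q > 0)"
proof -
  define V where "V = A * Ur"
  have V: "V \<in> carrier_mat m d" unfolding V_def using A Ur_unitaryD by auto
  have "A * \<rho> * dag A = V * diag_of d (\<lambda>i. complex_of_real (p i)) * dag V"
    unfolding rho_eq V_def by (rule sandwich_spectral_mat[OF A Ur_unitaryD(1) diag_of_carrier])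
  hence tr: "trace (A * \<rho> * dag A) = complex_of_real (\<Sum>i<m. \<Sum>k<d. p k * (cmod (V $$ (i,k)))^2)"
    using trace_sandwich_diag[OF V] by simp
  define q where "q = (\<Sum>i<m. \<Sum>k<d. p k * (cmod (V $$ (i,k)))^2)"
  have q0: "q \<ge> 0" unfolding q_def using p_pos by (intro sum_nonneg mult_nonneg_nonneg) auto
  have qpos: "q > 0" if nz: "A \<noteq> 0\<^sub>m m d"
  proof (rule ccontr)
    assume "\<not> q > 0"
    hence "q = 0" using q0 by simp
    hence "\<forall>i\<in>{..<m}. (\<Sum>k<d. p k * (cmod (V $$ (i,k)))^2) = 0"
      unfolding q_def using p_pos by (subst sum_nonneg_eq_0_iff[symmetric]) (auto intro!: sum_nonneg)
    hence "\<forall>i<m. \<forall>k<d. p k * (cmod (V $$ (i,k)))^2 = 0"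
      using p_pos by (subst (asm) sum_nonneg_eq_0_iff) auto
    hence "\<forall>i<m. \<forall>k<d. V $$ (i,k) = 0" using p_pos by fastforce
    hence V0: "V = 0\<^sub>m m d" using V by (intro eq_matI) auto
    have "A = V * dag Ur" unfolding V_def using A Ur_unitaryD by (simp add: assoc_mult_mat[of _ m d _ d _ d])
    also have "\<dots> = 0\<^sub>m m d" unfolding V0 using Ur_unitaryD by simp
    finally show False using nz by simp
  qed
  show ?thesis using tr q0 qpos unfolding q_def by blast
qed

lemma Gamma_eq_zero: assumes X: "X \<in> carrier_mat d d" and G: "Gamma X = 0\<^sub>m d d"
  shows "X = 0\<^sub>m d d"
proof -
  have "rpow (- (1 - s)) * Gamma X * rpow (- s) = (rpow (- (1 - s)) * rpow (1 - s)) * X * (rpow s * rpow (- s))"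
    unfolding Gamma_def using X by (simp add: assoc_mult_mat[of _ d d _ d _ d])
  also have "\<dots> = X" using X by (simp add: rpow_mult rpow_zero)
  finally show ?thesis using G X by simp
qed

lemma Gamma_smult: "X \<in> carrier_mat d d \<Longrightarrow> Gamma (c \<cdot>\<^sub>m X) = c \<cdot>\<^sub>m Gamma X"
  unfolding Gamma_def by (simp add: mult_smult_distrib[of _ d d _ d] mult_smult_assoc_mat[of _ d d _ d])

lemma perturbed_rho_quadratic_form:
  assumes Z: "Z \<in> carrier_mat d d" and hZ: "dag Z = Z" and v: "v \<in> carrier_vec d"
    and e0: "0 \<le> \<epsilon>" and eC: "\<epsilon> * (\<Sum>i<d. \<Sum>j<d. cmod (Z $$ (i,j))) \<le> rho_min"
  shows "vinner v ((\<rho> + complex_of_real \<epsilon> \<cdot>\<^sub>m Z) *\<^sub>v v) \<in> \<real> \<and>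
    0 \<le> Re (vinner v ((\<rho> + complex_of_real \<epsilon> \<cdot>\<^sub>m Z) *\<^sub>v v))"
proof -
  define C where "C = (\<Sum>i<d. \<Sum>j<d. cmod (Z $$ (i,j)))"
  define nv where "nv = (\<Sum>l<d. (cmod (v $ l))^2)"
  have nv0: "nv \<ge> 0" unfolding nv_def by (intro sum_nonneg) auto
  have e: "vinner v ((\<rho> + complex_of_real \<epsilon> \<cdot>\<^sub>m Z) *\<^sub>v v) =
      vinner v (\<rho> *\<^sub>v v) + complex_of_real \<epsilon> * vinner v (Z *\<^sub>v v)"
    by (rule vinner_add_smult[OF rho_carrier Z v])
  have r1: "vinner v (\<rho> *\<^sub>v v) \<in> \<real>" using rho_quadratic_form(1)[OF v] .
  have r2: "vinner v (Z *\<^sub>v v) \<in> \<real>" using cnj_vinner_hermitian[OF Z hZ v] by (metis Reals_cnj_iff)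
  have b1: "rho_min * nv \<le> Re (vinner v (\<rho> *\<^sub>v v))"
    using rho_quadratic_form(2)[OF v] vinner_self[OF v] unfolding nv_def by simp
  have "- (C * nv) \<le> Re (vinner v (Z *\<^sub>v v))"
    using vinner_bound[OF Z v] abs_Re_le_cmod[of "vinner v (Z *\<^sub>v v)"] unfolding C_def nv_def by linarith
  hence b2: "- (\<epsilon> * C * nv) \<le> \<epsilon> * Re (vinner v (Z *\<^sub>v v))"
    using mult_left_mono[OF _ e0] by (metis minus_mult_right mult.assoc)
  have "\<epsilon> * C * nv \<le> rho_min * nv" using eC nv0 unfolding C_def by (intro mult_right_mono)
  hence "0 \<le> Re (vinner v (\<rho> *\<^sub>v v)) + \<epsilon> * Re (vinner v (Z *\<^sub>v v))" using b1 b2 by linarith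
  thus ?thesis unfolding e using r1 r2 by (simp add: Reals_mult Reals_add)
qed

lemma rho_perturbation_density:
  assumes Z: "Z \<in> carrier_mat d d" and hZ: "dag Z = Z" and tZ: "trace Z = 0"
  shows "\<exists>\<epsilon>>0. density_mat d (\<rho> + complex_of_real \<epsilon> \<cdot>\<^sub>m Z)"
proof -
  define C where "C = (\<Sum>i<d. \<Sum>j<d. cmod (Z $$ (i,j)))"
  have C0: "C \<ge> 0" unfolding C_def by (intro sum_nonneg) auto
  define \<epsilon> where "\<epsilon> = rho_min / (C + 1)"
  have e0: "\<epsilon> > 0" unfolding \<epsilon>_def using rho_min_bounds(1) C0 by simp
  have "\<epsilon> * C = rho_min * (C / (C + 1))" unfolding \<epsilon>_def by simp
  also have "\<dots> \<le> rho_min" using rho_min_bounds(1) C0 by (intro mult_left_le) auto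
  finally have "\<epsilon> * C \<le> rho_min" .
  hence psd: "\<forall>v \<in> carrier_vec d. vinner v ((\<rho> + complex_of_real \<epsilon> \<cdot>\<^sub>m Z) *\<^sub>v v) \<in> \<real> \<and>
      0 \<le> Re (vinner v ((\<rho> + complex_of_real \<epsilon> \<cdot>\<^sub>m Z) *\<^sub>v v))"
    using perturbed_rho_quadratic_form[OF Z hZ] e0 unfolding C_def by auto
  have "hermitian_mat d (\<rho> + complex_of_real \<epsilon> \<cdot>\<^sub>m Z)"
    unfolding hermitian_mat_def using Z by (simp add: dag_add[of _ d d] dag_smult dag_rho hZ)
  moreover have "trace (\<rho> + complex_of_real \<epsilon> \<cdot>\<^sub>m Z) = 1"
    using Z by (simp add: trace_add[of _ d] trace_smult[of _ d] tZ trace_rho)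
  ultimately show ?thesis unfolding density_mat_def using e0 psd by blast
qed

lemma kms_orth_one_of_scalar:
  assumes Z: "Z \<in> carrier_mat d d" and Z1: "Z - \<langle>1\<^sub>m d, Z\<rangle> \<cdot>\<^sub>m 1\<^sub>m d = 0\<^sub>m d d"
    and X: "X \<in> carrier_mat d d" and o: "\<langle>1\<^sub>m d, X\<rangle> = 0"
  shows "\<langle>Z, X\<rangle> = 0"
proof -
  have "Z = \<langle>1\<^sub>m d, Z\<rangle> \<cdot>\<^sub>m 1\<^sub>m d"
  proof (rule eq_matI)
    fix i j assume "i < dim_row (\<langle>1\<^sub>m d, Z\<rangle> \<cdot>\<^sub>m 1\<^sub>m d)" "j < dim_col (\<langle>1\<^sub>m d, Z\<rangle> \<cdot>\<^sub>m 1\<^sub>m d)"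
    thus "Z $$ (i,j) = (\<langle>1\<^sub>m d, Z\<rangle> \<cdot>\<^sub>m 1\<^sub>m d) $$ (i,j)"
      using arg_cong[OF Z1, of "\<lambda>M. M $$ (i,j)"] Z by simp
  qed (use Z in auto)
  thus ?thesis using X o by (metis kms_smult_left mult_zero_right one_carrier_mat)
qed

definition orthonormal_basis :: "('i \<Rightarrow> complex mat) \<Rightarrow> 'i set \<Rightarrow> bool" where
  "orthonormal_basis Y I \<longleftrightarrow> finite I \<and> (\<forall>i\<in>I. Y i \<in> carrier_mat d d) \<and>
     (\<forall>i\<in>I. \<forall>j\<in>I. \<langle>Y i, Y j\<rangle> = (if i = j then 1 else 0)) \<and>
     (\<forall>X\<in>carrier_mat d d. \<exists>c. X = finsum_mat d d (\<lambda>i. c i \<cdot>\<^sub>m Y i) I)"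

lemma orthonormal_basisD: assumes "orthonormal_basis Y I"
  shows "finite I" "\<And>i. i \<in> I \<Longrightarrow> Y i \<in> carrier_mat d d"
    "\<And>i j. i \<in> I \<Longrightarrow> j \<in> I \<Longrightarrow> \<langle>Y i, Y j\<rangle> = (if i = j then 1 else 0)"
    "\<And>X. X \<in> carrier_mat d d \<Longrightarrow> \<exists>c. X = finsum_mat d d (\<lambda>i. c i \<cdot>\<^sub>m Y i) I"
  using assms unfolding orthonormal_basis_def by auto

lemma kms_lincomb_right: assumes A: "A \<in> carrier_mat d d" and Y: "\<And>i. i \<in> I \<Longrightarrow> Y i \<in> carrier_mat d d"
  shows "\<langle>A, finsum_mat d d (\<lambda>i. c i \<cdot>\<^sub>m Y i) I\<rangle> = (\<Sum>i\<in>I. c i * \<langle>A, Y i\<rangle>)"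
  using A Y by (simp add: kms_finsum_right kms_smult_right)

lemma kms_lincomb_left: assumes A: "A \<in> carrier_mat d d" and Y: "\<And>i. i \<in> I \<Longrightarrow> Y i \<in> carrier_mat d d"
  shows "\<langle>finsum_mat d d (\<lambda>i. c i \<cdot>\<^sub>m Y i) I, A\<rangle> = (\<Sum>i\<in>I. cnj (c i) * \<langle>Y i, A\<rangle>)"
  using A Y by (simp add: kms_finsum_left kms_smult_left)

lemma orthonormal_basis_coeff: assumes B: "orthonormal_basis Y I" and j: "j \<in> I"
  shows "\<langle>Y j, finsum_mat d d (\<lambda>i. c i \<cdot>\<^sub>m Y i) I\<rangle> = c j"
proof -
  note b = orthonormal_basisD[OF B]
  have "\<langle>Y j, finsum_mat d d (\<lambda>i. c i \<cdot>\<^sub>m Y i) I\<rangle> = (\<Sum>i\<in>I. c i * \<langle>Y j, Y i\<rangle>)"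
    using b j by (intro kms_lincomb_right) auto
  also have "\<dots> = (\<Sum>i\<in>I. if i = j then c j else 0)" using b j by (intro sum.cong) auto
  also have "\<dots> = c j" using b j by (simp add: sum.delta')
  finally show ?thesis .
qed

lemma orthonormal_basis_expand: assumes B: "orthonormal_basis Y I" and X: "X \<in> carrier_mat d d"
  shows "X = finsum_mat d d (\<lambda>i. \<langle>Y i, X\<rangle> \<cdot>\<^sub>m Y i) I"
proof -
  obtain c where c: "X = finsum_mat d d (\<lambda>i. c i \<cdot>\<^sub>m Y i) I" using orthonormal_basisD(4)[OF B X] by auto
  have "\<And>i. i \<in> I \<Longrightarrow> \<langle>Y i, X\<rangle> = c i" unfolding c by (rule orthonormal_basis_coeff[OF B])
  hence "finsum_mat d d (\<lambda>i. \<langle>Y i, X\<rangle> \<cdot>\<^sub>m Y i) I = finsum_mat d d (\<lambda>i. c i \<cdot>\<^sub>m Y i) I"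
    by (intro finsum_cong) auto
  thus ?thesis using c by simp
qed

lemma orthonormal_basis_ext: assumes B: "orthonormal_basis Y I" and W: "W \<in> carrier_mat d d" and X: "X \<in> carrier_mat d d"
  and h: "\<And>i. i \<in> I \<Longrightarrow> \<langle>Y i, W\<rangle> = \<langle>Y i, X\<rangle>"
  shows "W = X"
proof -
  have "W = finsum_mat d d (\<lambda>i. \<langle>Y i, W\<rangle> \<cdot>\<^sub>m Y i) I" by (rule orthonormal_basis_expand[OF B W])
  also have "\<dots> = finsum_mat d d (\<lambda>i. \<langle>Y i, X\<rangle> \<cdot>\<^sub>m Y i) I" using h by (intro finsum_cong) auto
  also have "\<dots> = X" by (rule orthonormal_basis_expand[OF B X, symmetric])
  finally show ?thesis .
qed

lemma parseval: assumes B: "orthonormal_basis Y I" and X: "X \<in> carrier_mat d d" and X': "X' \<in> carrier_mat d d"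
  shows "\<langle>X, X'\<rangle> = (\<Sum>i\<in>I. cnj (\<langle>Y i, X\<rangle>) * \<langle>Y i, X'\<rangle>)"
proof -
  have "\<langle>X, X'\<rangle> = \<langle>finsum_mat d d (\<lambda>i. \<langle>Y i, X\<rangle> \<cdot>\<^sub>m Y i) I, X'\<rangle>"
    using orthonormal_basis_expand[OF B X] by simp
  also have "\<dots> = (\<Sum>i\<in>I. cnj (\<langle>Y i, X\<rangle>) * \<langle>Y i, X'\<rangle>)"
    using orthonormal_basisD(2)[OF B] X' by (intro kms_lincomb_left) auto
  finally show ?thesis .
qed

lemma parseval_norm: assumes B: "orthonormal_basis Y I" and X: "X \<in> carrier_mat d d"
  shows "\<langle>X, X\<rangle> = complex_of_real (\<Sum>i\<in>I. (cmod (\<langle>Y i, X\<rangle>))^2)"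
  unfolding parseval[OF B X X] of_real_sum
  by (intro sum.cong refl) (simp add: complex_norm_square[symmetric] mult.commute)

lemma kms_self_pos: assumes B: "orthonormal_basis Y I" and X: "X \<in> carrier_mat d d" and nz: "X \<noteq> 0\<^sub>m d d"
  shows "Re (\<langle>X, X\<rangle>) > 0"
proof (rule ccontr)
  assume "\<not> Re (\<langle>X, X\<rangle>) > 0"
  hence "(\<Sum>i\<in>I. (cmod (\<langle>Y i, X\<rangle>))^2) \<le> 0" unfolding parseval_norm[OF B X] by simp
  hence "\<forall>i\<in>I. (cmod (\<langle>Y i, X\<rangle>))^2 = 0"
  proof -
    have "(\<Sum>i\<in>I. (cmod (\<langle>Y i, X\<rangle>))^2) = 0" using sum_nonneg[of I "\<lambda>i. (cmod (\<langle>Y i, X\<rangle>))^2"]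
      \<open>(\<Sum>i\<in>I. (cmod (\<langle>Y i, X\<rangle>))^2) \<le> 0\<close> by simp
    thus ?thesis using orthonormal_basisD(1)[OF B] by (subst (asm) sum_nonneg_eq_0_iff) auto
  qed
  hence z: "\<And>i. i \<in> I \<Longrightarrow> \<langle>Y i, X\<rangle> = 0" by auto
  have "X = finsum_mat d d (\<lambda>i. \<langle>Y i, X\<rangle> \<cdot>\<^sub>m Y i) I" by (rule orthonormal_basis_expand[OF B X])
  also have "\<dots> = finsum_mat d d (\<lambda>i. 0\<^sub>m d d) I"
  proof (intro finsum_cong)
    fix i assume i: "i \<in> I"
    have "Y i \<in> carrier_mat d d" using orthonormal_basisD(2)[OF B i] .
    thus "\<langle>Y i, X\<rangle> \<cdot>\<^sub>m Y i = 0\<^sub>m d d" using z[OF i] by (intro eq_matI) auto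
  qed
  also have "\<dots> = 0\<^sub>m d d" by (rule finsum_zero)
  finally show False using nz by simp
qed

lemma eigenbasis_quadratic_form: assumes B: "orthonormal_basis Y I" and T: "lin_map d T"
  and ev: "\<And>i. i \<in> I \<Longrightarrow> T (Y i) = \<mu> i \<cdot>\<^sub>m Y i" and X: "X \<in> carrier_mat d d"
  shows "\<langle>X, T X\<rangle> = (\<Sum>i\<in>I. \<mu> i * complex_of_real ((cmod (\<langle>Y i, X\<rangle>))^2))"
    "\<langle>T X, T X\<rangle> = (\<Sum>i\<in>I. complex_of_real ((cmod (\<mu> i))^2 * (cmod (\<langle>Y i, X\<rangle>))^2))"
proof -
  note b = orthonormal_basisD[OF B]
  have TX: "T X = finsum_mat d d (\<lambda>i. (\<langle>Y i, X\<rangle> * \<mu> i) \<cdot>\<^sub>m Y i) I"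
  proof -
    have "T X = T (finsum_mat d d (\<lambda>i. \<langle>Y i, X\<rangle> \<cdot>\<^sub>m Y i) I)" using orthonormal_basis_expand[OF B X] by simp
    also have "\<dots> = finsum_mat d d (\<lambda>i. \<langle>Y i, X\<rangle> \<cdot>\<^sub>m T (Y i)) I"
      using b by (intro lin_map_lincomb[OF T]) auto
    also have "\<dots> = finsum_mat d d (\<lambda>i. (\<langle>Y i, X\<rangle> * \<mu> i) \<cdot>\<^sub>m Y i) I"
      using b ev by (intro finsum_cong) (auto simp: smult_smult_mat mult.commute)
    finally show ?thesis .
  qed
  have TXc: "T X \<in> carrier_mat d d" using lin_mapD(1)[OF T X] .
  have co: "\<And>i. i \<in> I \<Longrightarrow> \<langle>Y i, T X\<rangle> = \<langle>Y i, X\<rangle> * \<mu> i"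
    unfolding TX by (rule orthonormal_basis_coeff[OF B])
  show "\<langle>X, T X\<rangle> = (\<Sum>i\<in>I. \<mu> i * complex_of_real ((cmod (\<langle>Y i, X\<rangle>))^2))"
    unfolding parseval[OF B X TXc]
    by (intro sum.cong refl) (simp add: co complex_norm_square[symmetric] mult_ac)
  show "\<langle>T X, T X\<rangle> = (\<Sum>i\<in>I. complex_of_real ((cmod (\<mu> i))^2 * (cmod (\<langle>Y i, X\<rangle>))^2))"
    unfolding parseval_norm[OF B TXc] of_real_sum
    by (intro sum.cong refl) (simp add: co norm_mult power_mult_distrib)
qed

definition kms_matrix :: "(complex mat \<Rightarrow> complex mat) \<Rightarrow> (nat \<Rightarrow> complex mat) \<Rightarrow> nat \<Rightarrow> complex mat" where
  "kms_matrix T Y N = mat N N (\<lambda>(i,j). \<langle>Y (Suc i), T (Y (Suc j))\<rangle>)"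

lemma kms_matrix_hermitian:
  assumes B: "orthonormal_basis Y {1..N}" and T: "lin_map d T"
    and SA: "\<And>A B. A \<in> carrier_mat d d \<Longrightarrow> B \<in> carrier_mat d d \<Longrightarrow> \<langle>A, T B\<rangle> = \<langle>T A, B\<rangle>"
  shows "dag (kms_matrix T Y N) = kms_matrix T Y N"
proof (rule eq_matI)
  fix i j assume "i < dim_row (kms_matrix T Y N)" "j < dim_col (kms_matrix T Y N)"
  hence i: "i < N" and j: "j < N" unfolding kms_matrix_def by auto
  have Yc: "Y (Suc i) \<in> carrier_mat d d" "Y (Suc j) \<in> carrier_mat d d"
    using orthonormal_basisD(2)[OF B] i j by auto
  have "cnj \<langle>Y (Suc j), T (Y (Suc i))\<rangle> = \<langle>T (Y (Suc i)), Y (Suc j)\<rangle>"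
    using Yc lin_mapD(1)[OF T] by (intro cnj_kms) auto
  also have "\<dots> = \<langle>Y (Suc i), T (Y (Suc j))\<rangle>" using SA[OF Yc] by simp
  finally show "dag (kms_matrix T Y N) $$ (i,j) = kms_matrix T Y N $$ (i,j)"
    using i j unfolding kms_matrix_def by simp
qed (auto simp: kms_matrix_def)

lemma orthonormal_basis_unitary_change:
  assumes B: "orthonormal_basis Y {1..N}" and V: "unitary N V"
  shows "orthonormal_basis (\<lambda>k. finsum_mat d d (\<lambda>i. V $$ (i - 1, k) \<cdot>\<^sub>m Y i) {1..N}) {..<N}"
proof -
  note b = orthonormal_basisD[OF B] and v = unitaryD[OF V]
  define Z where "Z k = finsum_mat d d (\<lambda>i. V $$ (i - 1, k) \<cdot>\<^sub>m Y i) {1..N}" for k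
  have Zc: "Z k \<in> carrier_mat d d" for k unfolding Z_def by simp
  have coeff: "\<langle>Y i, Z k\<rangle> = V $$ (i - 1, k)" if "i \<in> {1..N}" for i k
    unfolding Z_def by (rule orthonormal_basis_coeff[OF B that])
  have orth: "\<langle>Z k, Z l\<rangle> = (if k = l then 1 else 0)" if k: "k < N" and l: "l < N" for k l
  proof -
    have "\<langle>Z k, Z l\<rangle> = (\<Sum>i<N. cnj (V $$ (i, k)) * V $$ (i, l))"
      unfolding parseval[OF B Zc Zc] sum_atLeast1_atMost_shift by (intro sum.cong refl) (simp add: coeff)
    also have "\<dots> = (dag V * V) $$ (k,l)" using v k l by (subst index_mult_sum) auto
    finally show ?thesis using v k l by simp
  qed
  have span: "\<exists>c. X = finsum_mat d d (\<lambda>k. c k \<cdot>\<^sub>m Z k) {..<N}" if X: "X \<in> carrier_mat d d" for X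
  proof -
    define a where "a i = \<langle>Y (Suc i), X\<rangle>" for i
    define c where "c k = (\<Sum>i<N. cnj (V $$ (i,k)) * a i)" for k
    have "finsum_mat d d (\<lambda>k. c k \<cdot>\<^sub>m Z k) {..<N} = X"
    proof (rule orthonormal_basis_ext[OF B _ X])
      fix j assume j: "j \<in> {1..N}"
      then obtain j' where j': "j = Suc j'" "j' < N" by (cases j) auto
      have "\<langle>Y j, finsum_mat d d (\<lambda>k. c k \<cdot>\<^sub>m Z k) {..<N}\<rangle> = (\<Sum>k<N. \<Sum>i<N. V $$ (j',k) * cnj (V $$ (i,k)) * a i)"
        using b(2)[OF j] Zc j j' by (simp add: kms_lincomb_right coeff c_def sum_distrib_left mult_ac)
      also have "\<dots> = (\<Sum>i<N. (\<Sum>k<N. V $$ (j',k) * dag V $$ (k,i)) * a i)"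
        using v j' by (subst sum.swap) (auto simp: sum_distrib_right intro!: sum.cong)
      also have "\<dots> = (\<Sum>i<N. (V * dag V) $$ (j',i) * a i)"
        using v j' by (intro sum.cong refl) (subst index_mult_sum, auto)
      also have "\<dots> = (\<Sum>i<N. if i = j' then a j' else 0)"
        using v j' by (intro sum.cong refl) auto
      also have "\<dots> = \<langle>Y j, X\<rangle>" using j' by (simp add: a_def)
      finally show "\<langle>Y j, finsum_mat d d (\<lambda>k. c k \<cdot>\<^sub>m Z k) {..<N}\<rangle> = \<langle>Y j, X\<rangle>" .
    qed simp
    thus ?thesis by metis
  qed
  show ?thesis unfolding orthonormal_basis_def Z_def[symmetric] using Zc orth span by auto
qed

text \<open>The matrix of a self-adjoint map in an orthonormal basis is Hermitian; diagonalising it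
  by a unitary \<open>V\<close> and changing the basis by \<open>V\<close> yields an orthonormal eigenbasis.\<close>

lemma selfadj_eigenbasis:
  fixes Y :: "nat \<Rightarrow> complex mat" and N :: nat
  assumes B: "orthonormal_basis Y {1..N}" and T: "lin_map d T"
    and SA: "\<And>A B. A \<in> carrier_mat d d \<Longrightarrow> B \<in> carrier_mat d d \<Longrightarrow> \<langle>A, T B\<rangle> = \<langle>T A, B\<rangle>"
  shows "\<exists>Z \<mu>. orthonormal_basis Z {..<N} \<and> (\<forall>k<N. T (Z k) = complex_of_real (\<mu> k) \<cdot>\<^sub>m Z k)"
proof -
  note b = orthonormal_basisD[OF B]
  define BT where "BT = kms_matrix T Y N"
  have BTc: "BT \<in> carrier_mat N N" unfolding BT_def kms_matrix_def by auto
  from hermitian_diagonalization[OF BTc kms_matrix_hermitian[OF B T SA, folded BT_def]]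
  obtain V h where V: "unitary N V" and BTe: "BT = V * diag_of N (\<lambda>i. complex_of_real (h i)) * dag V"
    by auto
  note v = unitaryD[OF V]
  define Z where "Z k = finsum_mat d d (\<lambda>i. V $$ (i - 1, k) \<cdot>\<^sub>m Y i) {1..N}" for k
  have Zb: "orthonormal_basis Z {..<N}" unfolding Z_def by (rule orthonormal_basis_unitary_change[OF B V])
  have Zc: "Z k \<in> carrier_mat d d" for k unfolding Z_def by simp
  have BTV: "BT * V = V * diag_of N (\<lambda>i. complex_of_real (h i))"
    unfolding BTe using v by (simp add: assoc_mult_mat[of _ N N _ N _ N] unitary_cancel[OF V])
  have eig: "T (Z k) = complex_of_real (h k) \<cdot>\<^sub>m Z k" if k: "k < N" for k
  proof (rule orthonormal_basis_ext[OF B])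
    fix j assume j: "j \<in> {1..N}"
    then obtain j' where j': "j = Suc j'" "j' < N" by (cases j) auto
    have TZ: "T (Z k) = finsum_mat d d (\<lambda>i. V $$ (i - 1, k) \<cdot>\<^sub>m T (Y i)) {1..N}"
      unfolding Z_def using b by (intro lin_map_lincomb[OF T]) auto
    have "\<langle>Y j, T (Z k)\<rangle> = (\<Sum>i\<in>{1..N}. V $$ (i - 1, k) * \<langle>Y j, T (Y i)\<rangle>)"
      unfolding TZ using b(2)[OF j] lin_mapD(1)[OF T] b(2) by (intro kms_lincomb_right) auto
    also have "\<dots> = (\<Sum>i<N. BT $$ (j', i) * V $$ (i, k))"
      unfolding sum_atLeast1_atMost_shift using j' by (intro sum.cong refl) (simp add: BT_def kms_matrix_def)
    also have "\<dots> = (BT * V) $$ (j', k)" using BTc v j' k by (subst index_mult_sum) auto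
    also have "\<dots> = V $$ (j', k) * complex_of_real (h k)" unfolding BTV by (rule index_mult_diag_of[OF v(1) j'(2) k])
    also have "\<dots> = \<langle>Y j, complex_of_real (h k) \<cdot>\<^sub>m Z k\<rangle>"
      using b(2)[OF j] Zc orthonormal_basis_coeff[OF B j, of "\<lambda>i. V $$ (i - 1, k)"] j'
      unfolding Z_def by (simp add: kms_smult_right mult.commute)
    finally show "\<langle>Y j, T (Z k)\<rangle> = \<langle>Y j, complex_of_real (h k) \<cdot>\<^sub>m Z k\<rangle>" .
  qed (use lin_mapD(1)[OF T] Zc in auto)
  thus ?thesis using Zb by blast
qed

end

primrec effect :: "nat \<Rightarrow> complex mat list \<Rightarrow> real set \<Rightarrow> (real \<Rightarrow> complex mat) \<Rightarrow> real list \<Rightarrow> complex mat" where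
  "effect d Ns U Ok [] = 1\<^sub>m d"
| "effect d Ns U Ok (u # es) = dag (Ok u) * kraus_adj d Ns (meas_adj d U Ok (effect d Ns U Ok es)) * Ok u"

definition outcome_seqs :: "real set \<Rightarrow> nat \<Rightarrow> real list set" where
  "outcome_seqs U K = {es. set es \<subseteq> U \<and> length es = K}"

lemma outcome_seqs_Suc: "outcome_seqs U (Suc K) = (\<lambda>(u,es). u # es) ` (U \<times> outcome_seqs U K)"
  by (auto simp: outcome_seqs_def length_Suc_conv image_iff)

lemma sum_outcome_seqs_Suc: "(\<Sum>es\<in>outcome_seqs U (Suc K). h es) = (\<Sum>u\<in>U. \<Sum>es\<in>outcome_seqs U K. h (u # es))"
proof -
  have inj: "inj_on (\<lambda>(u,es). u # es) (U \<times> outcome_seqs U K)" by (auto simp: inj_on_def)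
  have "(\<Sum>es\<in>outcome_seqs U (Suc K). h es) = (\<Sum>x\<in>U \<times> outcome_seqs U K. h ((\<lambda>(u,es). u # es) x))"
    unfolding outcome_seqs_Suc by (subst sum.reindex[OF inj]) (simp add: comp_def)
  also have "\<dots> = (\<Sum>u\<in>U. \<Sum>es\<in>outcome_seqs U K. h (u # es))"
    by (simp add: sum.cartesian_product case_prod_beta)
  finally show ?thesis .
qed

lemma outcome_seqs_0: "outcome_seqs U 0 = {[]}"
  unfolding outcome_seqs_def by auto

locale trajectory_setting = faithful_state d \<rho> s Ur p for d \<rho> s Ur p +
  fixes Ns :: "complex mat list" and U :: "real set" and Ok :: "real \<Rightarrow> complex mat"
    and Y :: "nat \<Rightarrow> complex mat" and lam :: "nat \<Rightarrow> real"
  assumes N_ch: "is_channel d Ns" and M_ch: "is_meas_channel d U Ok"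
    and N_db: "detailed_balance d \<rho> s (kraus_adj d Ns)"
    and M_db: "detailed_balance d \<rho> s (meas_adj d U Ok)"
    and N_fix: "\<forall>\<sigma>. density_mat d \<sigma> \<longrightarrow> (kraus_map d Ns \<sigma> = \<sigma> \<longleftrightarrow> \<sigma> = \<rho>)"
    and N_spec: "\<forall>X \<in> carrier_mat d d. \<forall>c. X \<noteq> 0\<^sub>m d d \<and> kraus_map d Ns X = c \<cdot>\<^sub>m X
                   \<longrightarrow> c \<in> \<real> \<and> 0 \<le> Re c \<and> Re c \<le> 1"
    and Y_car: "\<forall>i \<in> {1..d^2}. Y i \<in> carrier_mat d d"
    and Y_on: "\<forall>i \<in> {1..d^2}. \<forall>j \<in> {1..d^2}. sinner d \<rho> s (Y i) (Y j) = (if i = j then 1 else 0)"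
    and Y_span: "\<forall>X \<in> carrier_mat d d. \<exists>c. X = finsum_mat d d (\<lambda>i. c i \<cdot>\<^sub>m Y i) {1..d^2}"
    and Y_eig: "\<forall>i \<in> {1..d^2}. meas_adj d U Ok (kraus_adj d Ns (meas_adj d U Ok (Y i))) = of_real (lam i) \<cdot>\<^sub>m Y i"
    and Y1: "Y 1 = 1\<^sub>m d"
    and lam_nonneg: "\<forall>i \<in> {1..d^2}. 0 \<le> lam i"
begin

abbreviation "Nmap \<equiv> kraus_map d Ns"
abbreviation "Nadj \<equiv> kraus_adj d Ns"
abbreviation "Mmap \<equiv> meas_map d U Ok"
abbreviation "Madj \<equiv> meas_adj d U Ok"
abbreviation "vmean \<equiv> meas_exp U Ok \<rho>"
abbreviation "Mhat_adj \<equiv> meas_hat_adj d U Ok \<rho>"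
abbreviation "Eadj \<equiv> (\<lambda>X. Madj (Nadj (Madj X)))"
abbreviation "Ehat_adj \<equiv> (\<lambda>X. Mhat_adj (Nadj (Madj X)))"

lemma Ns_carrier: "k < length Ns \<Longrightarrow> Ns ! k \<in> carrier_mat d d"
  using N_ch unfolding is_channel_def by auto

lemma finite_U: "finite U" and Ok_carrier: "u \<in> U \<Longrightarrow> Ok u \<in> carrier_mat d d"
  using M_ch unfolding is_meas_channel_def by auto

lemma lin_Nmap: "lin_map d Nmap"
  unfolding kraus_map_sandwich[abs_def] using Ns_carrier by (intro lin_map_sandwich_sum) auto

lemma lin_Nadj: "lin_map d Nadj"
  unfolding kraus_adj_sandwich[abs_def] using Ns_carrier by (intro lin_map_sandwich_sum) auto

lemma lin_Madj: "lin_map d Madj"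
  unfolding meas_adj_sandwich[abs_def] using Ok_carrier by (intro lin_map_sandwich_sum) auto

lemma Mhat_adj_sandwich: "X \<in> carrier_mat d d \<Longrightarrow> Mhat_adj X = sandwich_sum d U (\<lambda>u. complex_of_real (u - vmean) \<cdot>\<^sub>m dag (Ok u)) Ok X"
  by (rule meas_hat_adj_sandwich[OF Ok_carrier])

lemma Mhat_adj_carrier[simp]: "Mhat_adj X \<in> carrier_mat d d"
  unfolding meas_hat_adj_def by simp

lemma lin_Mhat_adj: "lin_map d Mhat_adj"
proof -
  have l: "lin_map d (sandwich_sum d U (\<lambda>u. complex_of_real (u - vmean) \<cdot>\<^sub>m dag (Ok u)) Ok)"
    using Ok_carrier by (intro lin_map_sandwich_sum) auto
  show ?thesis unfolding lin_map_def
  proof (intro conjI ballI allI)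
    fix X Y :: "complex mat" assume X: "X \<in> carrier_mat d d" and Y: "Y \<in> carrier_mat d d"
    show "Mhat_adj (X + Y) = Mhat_adj X + Mhat_adj Y"
      unfolding Mhat_adj_sandwich[OF X] Mhat_adj_sandwich[OF Y] Mhat_adj_sandwich[OF add_carrier_mat[OF Y]]
      by (rule lin_mapD(2)[OF l X Y])
  next
    fix X :: "complex mat" and c :: complex assume X: "X \<in> carrier_mat d d"
    show "Mhat_adj (c \<cdot>\<^sub>m X) = c \<cdot>\<^sub>m Mhat_adj X"
      unfolding Mhat_adj_sandwich[OF X] Mhat_adj_sandwich[OF smult_carrier_mat[OF X]]
      by (rule lin_mapD(3)[OF l X])
  qed simp
qed

lemma lin_Eadj: "lin_map d Eadj"
  by (rule lin_map_comp[OF lin_Madj lin_map_comp[OF lin_Nadj lin_Madj]])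

lemma lin_Ehat_adj: "lin_map d Ehat_adj"
  by (rule lin_map_comp[OF lin_Mhat_adj lin_map_comp[OF lin_Nadj lin_Madj]])

lemma Nmap_carrier[simp]: "Nmap X \<in> carrier_mat d d" unfolding kraus_map_sandwich by simp

lemma Nadj_carrier[simp]: "Nadj X \<in> carrier_mat d d" unfolding kraus_adj_sandwich by simp

lemma Mmap_carrier[simp]: "Mmap X \<in> carrier_mat d d" unfolding meas_map_sandwich by simp

lemma Madj_carrier[simp]: "Madj X \<in> carrier_mat d d" unfolding meas_adj_sandwich by simp

lemma Nadj_one: "Nadj (1\<^sub>m d) = 1\<^sub>m d"
proof -
  have "Nadj (1\<^sub>m d) = listsum_mat d (map (\<lambda>K. dag K * K) Ns)"
    unfolding kraus_adj_def listsum_finsum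
  proof (intro finsum_cong)
    fix k assume "k \<in> {..<length Ns}"
    hence c: "Ns ! k \<in> carrier_mat d d" using Ns_carrier by auto
    show "dag (Ns ! k) * 1\<^sub>m d * Ns ! k = dag (Ns ! k) * Ns ! k"
      using right_mult_one_mat[OF dag_carrier[OF c]] by simp
  qed
  thus ?thesis using N_ch unfolding is_channel_def by simp
qed

lemma Madj_one: "Madj (1\<^sub>m d) = 1\<^sub>m d"
proof -
  have "Madj (1\<^sub>m d) = finsum_mat d d (\<lambda>u. dag (Ok u) * Ok u) U"
    unfolding meas_adj_def
  proof (intro finsum_cong)
    fix u assume "u \<in> U"
    hence c: "Ok u \<in> carrier_mat d d" using Ok_carrier by auto
    show "dag (Ok u) * 1\<^sub>m d * Ok u = dag (Ok u) * Ok u"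
      using right_mult_one_mat[OF dag_carrier[OF c]] by simp
  qed
  thus ?thesis using M_ch unfolding is_meas_channel_def by simp
qed

lemma trace_Nmap_dual: "X \<in> carrier_mat d d \<Longrightarrow> Z \<in> carrier_mat d d \<Longrightarrow> trace (Nmap X * Z) = trace (X * Nadj Z)"
  unfolding kraus_map_sandwich kraus_adj_sandwich using Ns_carrier by (intro trace_sandwich_sum_dual) auto

lemma trace_Mmap_dual: "X \<in> carrier_mat d d \<Longrightarrow> Z \<in> carrier_mat d d \<Longrightarrow> trace (Mmap X * Z) = trace (X * Madj Z)"
  unfolding meas_map_sandwich meas_adj_sandwich using Ok_carrier by (intro trace_sandwich_sum_dual) auto

lemma dag_Nmap: "X \<in> carrier_mat d d \<Longrightarrow> dag (Nmap X) = Nmap (dag X)"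
  unfolding kraus_map_sandwich using Ns_carrier by (subst dag_sandwich_sum) auto

lemma dag_Nadj: "X \<in> carrier_mat d d \<Longrightarrow> dag (Nadj X) = Nadj (dag X)"
  unfolding kraus_adj_sandwich using Ns_carrier by (subst dag_sandwich_sum) auto

lemma dag_Madj: "X \<in> carrier_mat d d \<Longrightarrow> dag (Madj X) = Madj (dag X)"
  unfolding meas_adj_sandwich using Ok_carrier by (subst dag_sandwich_sum) auto

lemma Nadj_selfadj: "A \<in> carrier_mat d d \<Longrightarrow> B \<in> carrier_mat d d \<Longrightarrow> \<langle>A, Nadj B\<rangle> = \<langle>Nadj A, B\<rangle>"
  using N_db unfolding detailed_balance_def by auto

lemma Madj_selfadj: "A \<in> carrier_mat d d \<Longrightarrow> B \<in> carrier_mat d d \<Longrightarrow> \<langle>A, Madj B\<rangle> = \<langle>Madj A, B\<rangle>"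
  using M_db unfolding detailed_balance_def by auto

lemma kms_one_Nadj: "X \<in> carrier_mat d d \<Longrightarrow> \<langle>1\<^sub>m d, Nadj X\<rangle> = \<langle>1\<^sub>m d, X\<rangle>"
  using Nadj_selfadj[of "1\<^sub>m d" X] by (simp add: Nadj_one)

lemma kms_one_Madj: "X \<in> carrier_mat d d \<Longrightarrow> \<langle>1\<^sub>m d, Madj X\<rangle> = \<langle>1\<^sub>m d, X\<rangle>"
  using Madj_selfadj[of "1\<^sub>m d" X] by (simp add: Madj_one)

lemma kms_one_Eadj: "X \<in> carrier_mat d d \<Longrightarrow> \<langle>1\<^sub>m d, Eadj X\<rangle> = \<langle>1\<^sub>m d, X\<rangle>"
  using kms_one_Madj[of "Nadj (Madj X)"] kms_one_Nadj[of "Madj X"] kms_one_Madj[of X] by simp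

lemma Y_orthonormal_basis: "orthonormal_basis Y {1..d^2}"
  unfolding orthonormal_basis_def using Y_car Y_on Y_span by auto

lemma kms_self_real: "X \<in> carrier_mat d d \<Longrightarrow> \<langle>X, X\<rangle> = complex_of_real (Re \<langle>X, X\<rangle>)"
  using parseval_norm[OF Y_orthonormal_basis] by simp

lemma Nmap_Gamma: assumes X: "X \<in> carrier_mat d d"
  shows "Nmap (Gamma X) = Gamma (Nadj X)"
proof (rule eq_mat_by_trace[of _ d])
  fix Z :: "complex mat" assume Z: "Z \<in> carrier_mat d d"
  define W where "W = dag Z"
  have W: "W \<in> carrier_mat d d" and ZW: "Z = dag W" using Z unfolding W_def by auto
  have GX: "Gamma X \<in> carrier_mat d d" using X by simp
  have "trace (Nmap (Gamma X) * Z) = trace (Gamma X * Nadj Z)" by (rule trace_Nmap_dual[OF GX Z])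
  also have "\<dots> = trace (Nadj Z * Gamma X)" by (rule trace_mult_comm[OF GX Nadj_carrier])
  also have "Nadj Z = dag (Nadj W)" unfolding ZW by (rule dag_Nadj[OF W, symmetric])
  also have "trace (dag (Nadj W) * Gamma X) = \<langle>Nadj W, X\<rangle>" by (rule kms_eq_trace_Gamma[OF Nadj_carrier X, symmetric])
  also have "\<dots> = \<langle>W, Nadj X\<rangle>" by (rule Nadj_selfadj[OF W X, symmetric])
  also have "\<dots> = trace (Z * Gamma (Nadj X))" unfolding ZW by (rule kms_eq_trace_Gamma[OF W Nadj_carrier])
  also have "\<dots> = trace (Gamma (Nadj X) * Z)" by (rule trace_mult_comm[OF Z Gamma_carrier[OF Nadj_carrier]])
  finally show "trace (Nmap (Gamma X) * Z) = trace (Gamma (Nadj X) * Z)" .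
qed (use X in auto)

lemma Nmap_rho: "Nmap \<rho> = \<rho>"
proof (rule eq_mat_by_trace[of _ d])
  fix Z :: "complex mat" assume Z: "Z \<in> carrier_mat d d"
  have "trace (Nmap \<rho> * Z) = trace (\<rho> * Nadj Z)" using Z by (intro trace_Nmap_dual) auto
  also have "\<dots> = \<langle>1\<^sub>m d, Nadj Z\<rangle>" using Z by (simp add: kms_one_left)
  also have "\<dots> = \<langle>1\<^sub>m d, Z\<rangle>" using Z by (rule kms_one_Nadj)
  also have "\<dots> = trace (\<rho> * Z)" using Z by (simp add: kms_one_left)
  finally show "trace (Nmap \<rho> * Z) = trace (\<rho> * Z)" .
qed auto

abbreviation "eff \<equiv> effect d Ns U Ok"
abbreviation "seqs \<equiv> outcome_seqs U"

lemma finite_seqs: "finite (seqs K)"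
  unfolding outcome_seqs_def using finite_U by (rule finite_lists_length_eq)

lemma effect_carrier: "set es \<subseteq> U \<Longrightarrow> eff es \<in> carrier_mat d d"
proof (induction es)
  case (Cons u es) thus ?case using Ok_carrier[of u] by simp
qed simp

lemma effect_carrier_seqs: "es \<in> seqs K \<Longrightarrow> eff es \<in> carrier_mat d d"
  unfolding outcome_seqs_def by (auto intro: effect_carrier)

lemma trace_traj_state: "set es \<subseteq> U \<Longrightarrow> \<sigma> \<in> carrier_mat d d \<Longrightarrow> trace (traj_state d Ns U Ok \<sigma> es) = trace (\<sigma> * eff es)"
proof (induction es arbitrary: \<sigma>)
  case Nil thus ?case by simp
next
  case (Cons u es \<sigma>)
  have u: "u \<in> U" and es: "set es \<subseteq> U" using Cons.prems by auto
  have O: "Ok u \<in> carrier_mat d d" using Ok_carrier[OF u] .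
  have Gc: "eff es \<in> carrier_mat d d" using effect_carrier[OF es] .
  define \<tau> where "\<tau> = Ok u * \<sigma> * dag (Ok u)"
  have \<tau>: "\<tau> \<in> carrier_mat d d" unfolding \<tau>_def using O Cons.prems by simp
  have "trace (traj_state d Ns U Ok \<sigma> (u # es)) = trace (Mmap (Nmap \<tau>) * eff es)"
    unfolding \<tau>_def using Cons.IH[OF es] by simp
  also have "\<dots> = trace (Nmap \<tau> * Madj (eff es))" by (rule trace_Mmap_dual[OF Nmap_carrier Gc])
  also have "\<dots> = trace (\<tau> * Nadj (Madj (eff es)))" by (rule trace_Nmap_dual[OF \<tau> Madj_carrier])
  also have "\<dots> = trace (Ok u * (\<sigma> * (dag (Ok u) * Nadj (Madj (eff es)))))"
    unfolding \<tau>_def using O Cons.prems by (simp add: assoc_mult_mat[of _ d d _ d _ d])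
  also have "\<dots> = trace ((\<sigma> * (dag (Ok u) * Nadj (Madj (eff es)))) * Ok u)"
    using O Cons.prems by (intro trace_mult_comm[of _ d d]) auto
  also have "\<dots> = trace (\<sigma> * eff (u # es))"
    using O Cons.prems by (simp add: assoc_mult_mat[of _ d d _ d _ d])
  finally show ?case .
qed

section \<open>The second moment of the recorded outcomes\<close>

definition weighted_effect :: "nat \<Rightarrow> (real list \<Rightarrow> real) \<Rightarrow> complex mat" where
  "weighted_effect K f = finsum_mat d d (\<lambda>es. complex_of_real (f es) \<cdot>\<^sub>m eff es) (seqs K)"

lemma weighted_effect_carrier[simp]: "weighted_effect K f \<in> carrier_mat d d"
  unfolding weighted_effect_def by simp

lemma dim_weighted_effect[simp]: "dim_row (weighted_effect K f) = d" "dim_col (weighted_effect K f) = d"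
  unfolding weighted_effect_def by simp_all

lemma traj_expect_weighted_effect: "traj_expect d Ns U Ok \<rho> K f = Re (\<langle>1\<^sub>m d, weighted_effect K f\<rangle>)"
proof -
  have "traj_expect d Ns U Ok \<rho> K f = (\<Sum>es\<in>seqs K. f es * Re (trace (\<rho> * eff es)))"
    unfolding traj_expect_def outcome_seqs_def
    by (intro sum.cong refl) (auto simp: trace_traj_state)
  also have "\<dots> = Re (\<Sum>es\<in>seqs K. trace (\<rho> * (complex_of_real (f es) \<cdot>\<^sub>m eff es)))"
    unfolding Re_sum using effect_carrier_seqs
    by (intro sum.cong refl) (auto simp: mult_smult_distrib[of _ d d _ d] trace_smult[of _ d])
  also have "(\<Sum>es\<in>seqs K. trace (\<rho> * (complex_of_real (f es) \<cdot>\<^sub>m eff es))) = trace (\<rho> * weighted_effect K f)"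
    unfolding weighted_effect_def using effect_carrier_seqs
    by (subst finsum_mult_left[of _ d d]) (auto simp: trace_finsum[of _ _ d])
  also have "\<dots> = \<langle>1\<^sub>m d, weighted_effect K f\<rangle>" by (simp add: kms_one_left)
  finally show ?thesis .
qed

definition step_adj :: "real \<Rightarrow> complex mat \<Rightarrow> complex mat" where
  "step_adj u X = dag (Ok u) * Nadj (Madj X) * Ok u"

lemma lin_step_adj: assumes u: "u \<in> U" shows "lin_map d (step_adj u)"
proof -
  have "lin_map d (sandwich_sum d {u} (\<lambda>_. dag (Ok u)) (\<lambda>_. Ok u))" using Ok_carrier[OF u] by (intro lin_map_sandwich_sum) auto
  moreover have "sandwich_sum d {u} (\<lambda>_. dag (Ok u)) (\<lambda>_. Ok u) X = dag (Ok u) * X * Ok u" if "X \<in> carrier_mat d d" for X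
    unfolding sandwich_sum_def using that Ok_carrier[OF u] by (intro eq_matI) auto
  ultimately have l: "lin_map d (\<lambda>X. dag (Ok u) * X * Ok u)"
    unfolding lin_map_def using Ok_carrier[OF u] by (auto simp del: sandwich_sum_carrier)
  show ?thesis unfolding step_adj_def[abs_def]
    by (rule lin_map_comp[OF l lin_map_comp[OF lin_Nadj lin_Madj]])
qed

lemma weighted_effect_Suc: "weighted_effect (Suc K) f = finsum_mat d d (\<lambda>u. step_adj u (weighted_effect K (\<lambda>es. f (u # es)))) U"
proof -
  have "weighted_effect (Suc K) f = finsum_mat d d (\<lambda>u. finsum_mat d d (\<lambda>es. complex_of_real (f (u # es)) \<cdot>\<^sub>m eff (u # es)) (seqs K)) U"
    unfolding weighted_effect_def by (intro eq_matI) (auto simp: sum_outcome_seqs_Suc)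
  also have "\<dots> = finsum_mat d d (\<lambda>u. step_adj u (weighted_effect K (\<lambda>es. f (u # es)))) U"
  proof (rule finsum_cong)
    fix u assume u: "u \<in> U"
    have "step_adj u (weighted_effect K (\<lambda>es. f (u # es))) = finsum_mat d d (\<lambda>es. complex_of_real (f (u # es)) \<cdot>\<^sub>m step_adj u (eff es)) (seqs K)"
      unfolding weighted_effect_def using effect_carrier_seqs by (intro lin_map_lincomb[OF lin_step_adj[OF u] finite_seqs]) auto
    also have "\<dots> = finsum_mat d d (\<lambda>es. complex_of_real (f (u # es)) \<cdot>\<^sub>m eff (u # es)) (seqs K)"
      by (intro finsum_cong) (simp add: step_adj_def)
    finally show "finsum_mat d d (\<lambda>es. complex_of_real (f (u # es)) \<cdot>\<^sub>m eff (u # es)) (seqs K) = step_adj u (weighted_effect K (\<lambda>es. f (u # es)))" ..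
  qed
  finally show ?thesis .
qed

lemma index_smult_effect: "es \<in> seqs K \<Longrightarrow> i < d \<Longrightarrow> j < d \<Longrightarrow> (c \<cdot>\<^sub>m eff es) $$ (i,j) = c * eff es $$ (i,j)"
  using effect_carrier_seqs[of es K] by auto

lemma weighted_effect_lincomb: "weighted_effect K (\<lambda>es. a * g es + b * h es) = complex_of_real a \<cdot>\<^sub>m weighted_effect K g + complex_of_real b \<cdot>\<^sub>m weighted_effect K h"
proof (intro eq_matI)
  fix i j assume "i < dim_row (complex_of_real a \<cdot>\<^sub>m weighted_effect K g + complex_of_real b \<cdot>\<^sub>m weighted_effect K h)"
    "j < dim_col (complex_of_real a \<cdot>\<^sub>m weighted_effect K g + complex_of_real b \<cdot>\<^sub>m weighted_effect K h)"
  hence i: "i < d" and j: "j < d" by auto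
  have "weighted_effect K (\<lambda>es. a * g es + b * h es) $$ (i,j) =
    (\<Sum>es\<in>seqs K. complex_of_real a * (complex_of_real (g es) * eff es $$ (i,j)) + complex_of_real b * (complex_of_real (h es) * eff es $$ (i,j)))"
    unfolding weighted_effect_def index_finsum[OF i j]
  proof (intro sum.cong refl)
    fix es assume es: "es \<in> seqs K"
    have "eff es \<in> carrier_mat d d" using effect_carrier_seqs[OF es] .
    thus "(complex_of_real (a * g es + b * h es) \<cdot>\<^sub>m eff es) $$ (i, j) =
      complex_of_real a * (complex_of_real (g es) * eff es $$ (i, j)) + complex_of_real b * (complex_of_real (h es) * eff es $$ (i, j))"
      using i j by (simp add: algebra_simps)
  qed
  also have "\<dots> = (complex_of_real a \<cdot>\<^sub>m weighted_effect K g + complex_of_real b \<cdot>\<^sub>m weighted_effect K h) $$ (i,j)"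
    unfolding weighted_effect_def using i j by (simp add: sum.distrib sum_distrib_left index_smult_effect cong: sum.cong)
  finally show "weighted_effect K (\<lambda>es. a * g es + b * h es) $$ (i,j) = (complex_of_real a \<cdot>\<^sub>m weighted_effect K g + complex_of_real b \<cdot>\<^sub>m weighted_effect K h) $$ (i,j)" .
qed (auto simp: weighted_effect_def)

lemma weighted_effect_cong: "(\<And>es. f es = g es) \<Longrightarrow> weighted_effect K f = weighted_effect K g"
  by (metis ext)

lemma step_adj_carrier[simp]: "step_adj u X \<in> carrier_mat d d" if "u \<in> U"
  unfolding step_adj_def using Ok_carrier[OF that] by simp

lemma step_adj_one: assumes u: "u \<in> U" shows "step_adj u (1\<^sub>m d) = dag (Ok u) * Ok u"
  unfolding step_adj_def Madj_one Nadj_one using right_mult_one_mat[OF dag_carrier[OF Ok_carrier[OF u]]] by simp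

lemma sum_step_adj: "finsum_mat d d (\<lambda>u. step_adj u X) U = Eadj X"
  unfolding step_adj_def meas_adj_def ..

lemma centered_sum_step_adj: "finsum_mat d d (\<lambda>u. complex_of_real (u - vmean) \<cdot>\<^sub>m step_adj u X) U = Ehat_adj X"
  unfolding step_adj_def meas_hat_adj_def ..

lemma weighted_effect_one: "weighted_effect K (\<lambda>_. 1) = 1\<^sub>m d"
proof (induction K)
  case 0
  show ?case unfolding weighted_effect_def outcome_seqs_0 by (intro eq_matI) auto
next
  case (Suc K)
  have "weighted_effect (Suc K) (\<lambda>_. 1) = finsum_mat d d (\<lambda>u. step_adj u (1\<^sub>m d)) U"
    unfolding weighted_effect_Suc using Suc.IH by simp
  also have "\<dots> = finsum_mat d d (\<lambda>u. dag (Ok u) * Ok u) U" by (intro finsum_cong) (simp add: step_adj_one)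
  also have "\<dots> = 1\<^sub>m d" using M_ch unfolding is_meas_channel_def by simp
  finally show ?case .
qed

lemma weighted_effect_affine: "weighted_effect K (\<lambda>es. a + b * g es + c * h es) =
   complex_of_real a \<cdot>\<^sub>m 1\<^sub>m d + (complex_of_real b \<cdot>\<^sub>m weighted_effect K g + complex_of_real c \<cdot>\<^sub>m weighted_effect K h)"
proof -
  have "weighted_effect K (\<lambda>es. a + b * g es + c * h es) = weighted_effect K (\<lambda>es. a * 1 + 1 * (b * g es + c * h es))"
    by (intro weighted_effect_cong) simp
  also have "\<dots> = complex_of_real a \<cdot>\<^sub>m weighted_effect K (\<lambda>_. 1) + complex_of_real 1 \<cdot>\<^sub>m weighted_effect K (\<lambda>es. b * g es + c * h es)"
    by (rule weighted_effect_lincomb)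
  also have "weighted_effect K (\<lambda>es. b * g es + c * h es) = complex_of_real b \<cdot>\<^sub>m weighted_effect K g + complex_of_real c \<cdot>\<^sub>m weighted_effect K h"
    by (rule weighted_effect_lincomb)
  finally show ?thesis unfolding weighted_effect_one by simp
qed

definition Dhat where "Dhat = Ehat_adj (1\<^sub>m d)"

lemma Dhat_carrier[simp]: "Dhat \<in> carrier_mat d d" unfolding Dhat_def by simp

lemma Eadj_pow_carrier[simp]: "X \<in> carrier_mat d d \<Longrightarrow> (Eadj ^^ k) X \<in> carrier_mat d d"
  by (cases k) auto

abbreviation "sum_effect K \<equiv> weighted_effect K (\<lambda>es. sum_list es - real K * vmean)"
abbreviation "square_effect K \<equiv> weighted_effect K (\<lambda>es. (sum_list es - real K * vmean)^2)"

lemma sum_effect_eq: "sum_effect K = finsum_mat d d (\<lambda>k. (Eadj ^^ k) Dhat) {..<K}"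
proof (induction K)
  case 0
  show ?case unfolding weighted_effect_def outcome_seqs_0 by (intro eq_matI) auto
next
  case (Suc K)
  have "sum_effect (Suc K) = finsum_mat d d (\<lambda>u. step_adj u (weighted_effect K (\<lambda>es. (u - vmean) + 1 * (sum_list es - real K * vmean) + 0 * 0))) U"
    unfolding weighted_effect_Suc by (intro finsum_cong arg_cong[where f = "step_adj _"] weighted_effect_cong) (simp add: algebra_simps)
  also have "\<dots> = finsum_mat d d (\<lambda>u. complex_of_real (u - vmean) \<cdot>\<^sub>m step_adj u (1\<^sub>m d) + step_adj u (sum_effect K)) U"
  proof (intro finsum_cong)
    fix u assume u: "u \<in> U"
    have "weighted_effect K (\<lambda>es. (u - vmean) + 1 * (sum_list es - real K * vmean) + 0 * 0) =
      complex_of_real (u - vmean) \<cdot>\<^sub>m 1\<^sub>m d + sum_effect K"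
      unfolding weighted_effect_affine[where h = "\<lambda>_. 0"] by (intro eq_matI) auto
    thus "step_adj u (weighted_effect K (\<lambda>es. (u - vmean) + 1 * (sum_list es - real K * vmean) + 0 * 0)) =
      complex_of_real (u - vmean) \<cdot>\<^sub>m step_adj u (1\<^sub>m d) + step_adj u (sum_effect K)"
      using lin_step_adj[OF u] by (simp add: lin_mapD)
  qed
  also have "\<dots> = Dhat + Eadj (sum_effect K)"
    unfolding Dhat_def sum_step_adj[symmetric] centered_sum_step_adj[symmetric] using step_adj_carrier
    by (intro finsum_add) auto
  also have "Eadj (sum_effect K) = finsum_mat d d (\<lambda>k. Eadj ((Eadj ^^ k) Dhat)) {..<K}"
    unfolding Suc.IH by (intro lin_map_finsum[OF lin_Eadj]) auto
  also have "Dhat + \<dots> = finsum_mat d d (\<lambda>k. (Eadj ^^ k) Dhat) {..<Suc K}"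
    by (subst finsum_lessThan_Suc_shift) auto
  finally show ?case .
qed

definition corr where "corr k = \<langle>1\<^sub>m d, Ehat_adj ((Eadj ^^ k) Dhat)\<rangle>"

definition meas_prob :: "real \<Rightarrow> real" where
  "meas_prob u = Re (trace (Ok u * \<rho> * dag (Ok u)))"

lemma kms_one_dag_Ok_Ok: assumes u: "u \<in> U"
  shows "\<langle>1\<^sub>m d, dag (Ok u) * Ok u\<rangle> = complex_of_real (meas_prob u)"
proof -
  have O: "Ok u \<in> carrier_mat d d" using Ok_carrier[OF u] .
  obtain q where q: "trace (Ok u * \<rho> * dag (Ok u)) = complex_of_real q"
    using trace_sandwich_rho_pos[OF O] by auto
  have "\<langle>1\<^sub>m d, dag (Ok u) * Ok u\<rangle> = trace (Ok u * \<rho> * dag (Ok u))"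
    using O by (simp add: kms_one_left trace_sandwich_cycle[OF rho_carrier O])
  thus ?thesis using q unfolding meas_prob_def by simp
qed

lemma sum_meas_prob: "(\<Sum>u\<in>U. meas_prob u) = 1"
proof -
  have "complex_of_real (\<Sum>u\<in>U. meas_prob u) = \<langle>1\<^sub>m d, finsum_mat d d (\<lambda>u. dag (Ok u) * Ok u) U\<rangle>"
    using Ok_carrier by (simp add: kms_finsum_right kms_one_dag_Ok_Ok)
  also have "\<dots> = 1" using M_ch unfolding is_meas_channel_def by (simp add: kms_one_one)
  finally show ?thesis by (metis of_real_eq_1_iff)
qed

definition var_effect where "var_effect = finsum_mat d d (\<lambda>u. complex_of_real ((u - vmean)^2) \<cdot>\<^sub>m (dag (Ok u) * Ok u)) U"

lemma kms_one_Ehat_sum_effect: "\<langle>1\<^sub>m d, Ehat_adj (sum_effect K)\<rangle> = (\<Sum>k<K. corr k)"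
proof -
  have "Ehat_adj (sum_effect K) = finsum_mat d d (\<lambda>k. Ehat_adj ((Eadj ^^ k) Dhat)) {..<K}"
    unfolding sum_effect_eq by (intro lin_map_finsum[OF lin_Ehat_adj]) auto
  thus ?thesis unfolding corr_def by (simp add: kms_finsum_right)
qed

lemma square_effect_Suc: "\<langle>1\<^sub>m d, square_effect (Suc K)\<rangle> = \<langle>1\<^sub>m d, var_effect\<rangle> + 2 * (\<Sum>k<K. corr k) + \<langle>1\<^sub>m d, square_effect K\<rangle>"
proof -
  define a where "a u = (u - vmean)^2" for u
  define b where "b u = 2 * (u - vmean)" for u
  have "square_effect (Suc K) = finsum_mat d d (\<lambda>u. step_adj u (weighted_effect K (\<lambda>es. a u + b u * (sum_list es - real K * vmean) + 1 * (sum_list es - real K * vmean)^2))) U"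
    unfolding weighted_effect_Suc a_def b_def
    by (intro finsum_cong arg_cong[where f = "step_adj _"] weighted_effect_cong) (simp add: algebra_simps power2_eq_square)
  also have "\<dots> = finsum_mat d d (\<lambda>u. complex_of_real (a u) \<cdot>\<^sub>m step_adj u (1\<^sub>m d) +
     (complex_of_real (b u) \<cdot>\<^sub>m step_adj u (sum_effect K) + step_adj u (square_effect K))) U"
  proof (intro finsum_cong)
    fix u assume u: "u \<in> U"
    note l = lin_mapD[OF lin_step_adj[OF u]]
    show "step_adj u (weighted_effect K (\<lambda>es. a u + b u * (sum_list es - real K * vmean) + 1 * (sum_list es - real K * vmean)^2)) =
      complex_of_real (a u) \<cdot>\<^sub>m step_adj u (1\<^sub>m d) + (complex_of_real (b u) \<cdot>\<^sub>m step_adj u (sum_effect K) + step_adj u (square_effect K))"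
      unfolding weighted_effect_affine by (simp add: l)
  qed
  finally have e: "square_effect (Suc K) = \<dots>" .
  have "\<langle>1\<^sub>m d, square_effect (Suc K)\<rangle> = (\<Sum>u\<in>U. complex_of_real (a u) * \<langle>1\<^sub>m d, step_adj u (1\<^sub>m d)\<rangle> +
     (complex_of_real (b u) * \<langle>1\<^sub>m d, step_adj u (sum_effect K)\<rangle> + \<langle>1\<^sub>m d, step_adj u (square_effect K)\<rangle>))"
    unfolding e using step_adj_carrier by (simp add: kms_finsum_right kms_add_right kms_smult_right)
  also have "\<dots> = (\<Sum>u\<in>U. complex_of_real (a u) * \<langle>1\<^sub>m d, step_adj u (1\<^sub>m d)\<rangle>) +
     2 * (\<Sum>u\<in>U. complex_of_real (u - vmean) * \<langle>1\<^sub>m d, step_adj u (sum_effect K)\<rangle>) + (\<Sum>u\<in>U. \<langle>1\<^sub>m d, step_adj u (square_effect K)\<rangle>)"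
    unfolding b_def by (simp only: sum.distrib sum_distrib_left of_real_mult of_real_numeral mult.assoc add.assoc)
  also have "(\<Sum>u\<in>U. complex_of_real (a u) * \<langle>1\<^sub>m d, step_adj u (1\<^sub>m d)\<rangle>) = \<langle>1\<^sub>m d, var_effect\<rangle>"
    unfolding var_effect_def a_def using Ok_carrier
    by (simp add: kms_finsum_right kms_smult_right step_adj_one)
  also have "(\<Sum>u\<in>U. complex_of_real (u - vmean) * \<langle>1\<^sub>m d, step_adj u (sum_effect K)\<rangle>) = \<langle>1\<^sub>m d, Ehat_adj (sum_effect K)\<rangle>"
    unfolding centered_sum_step_adj[symmetric] using step_adj_carrier by (simp add: kms_finsum_right kms_smult_right)
  also have "(\<Sum>u\<in>U. \<langle>1\<^sub>m d, step_adj u (square_effect K)\<rangle>) = \<langle>1\<^sub>m d, Eadj (square_effect K)\<rangle>"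
    unfolding sum_step_adj[symmetric] using step_adj_carrier by (simp add: kms_finsum_right)
  also have "\<dots> = \<langle>1\<^sub>m d, square_effect K\<rangle>" by (rule kms_one_Eadj) simp
  finally show ?thesis unfolding kms_one_Ehat_sum_effect .
qed

lemma square_effect_eq: "\<langle>1\<^sub>m d, square_effect K\<rangle> = of_nat K * \<langle>1\<^sub>m d, var_effect\<rangle> + 2 * (\<Sum>m<K. \<Sum>k<m. corr k)"
proof (induction K)
  case 0
  have "square_effect 0 = 0\<^sub>m d d" unfolding weighted_effect_def outcome_seqs_0 by (intro eq_matI) auto
  thus ?case by (simp add: sinner_def)
next
  case (Suc K)
  show ?case unfolding square_effect_Suc Suc.IH by (simp add: algebra_simps)
qed

lemma Re_kms_var_effect: "Re \<langle>1\<^sub>m d, var_effect\<rangle> = meas_var U Ok \<rho>"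
  unfolding var_effect_def meas_var_def using Ok_carrier
  by (simp add: kms_finsum_right kms_smult_right kms_one_dag_Ok_Ok Re_sum meas_prob_def)

lemma traj_expect_centered_square:
  "traj_expect d Ns U Ok \<rho> K (\<lambda>es. (sum_list es - real K * vmean)^2) =
     real K * meas_var U Ok \<rho> + 2 * (\<Sum>m<K. \<Sum>k<m. Re (corr k))"
  unfolding traj_expect_weighted_effect square_effect_eq using Re_kms_var_effect by (simp add: Re_sum)

section \<open>Spectral expansion in the eigenbasis of \<open>E\<^sup>\<dagger>\<close>\<close>

definition alpha where "alpha i j = \<langle>Y j, Ehat_adj (Y i)\<rangle>"

lemma Y_carrier: "j \<in> {1..d^2} \<Longrightarrow> Y j \<in> carrier_mat d d"
  using Y_car by auto

lemma one_mem_Y_index: "1 \<in> {1..d^2}" using d_pos by simp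

lemma Eadj_pow_Dhat: "(Eadj ^^ k) Dhat = finsum_mat d d (\<lambda>j. (alpha 1 j * complex_of_real (lam j ^ k)) \<cdot>\<^sub>m Y j) {1..d^2}"
proof (induction k)
  case 0
  have "Dhat = finsum_mat d d (\<lambda>j. \<langle>Y j, Dhat\<rangle> \<cdot>\<^sub>m Y j) {1..d^2}" by (rule orthonormal_basis_expand[OF Y_orthonormal_basis Dhat_carrier])
  also have "\<dots> = finsum_mat d d (\<lambda>j. (alpha 1 j * complex_of_real (lam j ^ 0)) \<cdot>\<^sub>m Y j) {1..d^2}"
    unfolding alpha_def Dhat_def Y1 by (intro finsum_cong) simp
  finally show ?case by simp
next
  case (Suc k)
  have "(Eadj ^^ Suc k) Dhat = Eadj (finsum_mat d d (\<lambda>j. (alpha 1 j * complex_of_real (lam j ^ k)) \<cdot>\<^sub>m Y j) {1..d^2})"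
    using Suc.IH by simp
  also have "\<dots> = finsum_mat d d (\<lambda>j. (alpha 1 j * complex_of_real (lam j ^ k)) \<cdot>\<^sub>m Eadj (Y j)) {1..d^2}"
    using Y_carrier by (intro lin_map_lincomb[OF lin_Eadj]) auto
  also have "\<dots> = finsum_mat d d (\<lambda>j. (alpha 1 j * complex_of_real (lam j ^ Suc k)) \<cdot>\<^sub>m Y j) {1..d^2}"
  proof (intro finsum_cong)
    fix j assume j: "j \<in> {1..d^2}"
    have "Eadj (Y j) = complex_of_real (lam j) \<cdot>\<^sub>m Y j" using Y_eig j by auto
    thus "(alpha 1 j * complex_of_real (lam j ^ k)) \<cdot>\<^sub>m Eadj (Y j) = (alpha 1 j * complex_of_real (lam j ^ Suc k)) \<cdot>\<^sub>m Y j"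
      by (simp add: smult_smult_mat mult_ac)
  qed
  finally show ?case .
qed

lemma corr_expand: "corr k = (\<Sum>j\<in>{1..d^2}. alpha 1 j * alpha j 1 * complex_of_real (lam j ^ k))"
proof -
  have "Ehat_adj ((Eadj ^^ k) Dhat) = finsum_mat d d (\<lambda>j. (alpha 1 j * complex_of_real (lam j ^ k)) \<cdot>\<^sub>m Ehat_adj (Y j)) {1..d^2}"
    unfolding Eadj_pow_Dhat using Y_carrier by (intro lin_map_lincomb[OF lin_Ehat_adj]) auto
  hence "corr k = (\<Sum>j\<in>{1..d^2}. (alpha 1 j * complex_of_real (lam j ^ k)) * \<langle>Y 1, Ehat_adj (Y j)\<rangle>)"
    unfolding corr_def Y1 by (simp add: kms_finsum_right kms_smult_right)
  thus ?thesis unfolding alpha_def by (simp add: mult_ac)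
qed

lemma alpha_one_one: "alpha 1 1 = 0"
proof -
  have "Mhat_adj (1\<^sub>m d) = finsum_mat d d (\<lambda>u. complex_of_real (u - vmean) \<cdot>\<^sub>m (dag (Ok u) * Ok u)) U"
    unfolding meas_hat_adj_def by (intro finsum_cong) (metis Ok_carrier dag_carrier right_mult_one_mat)
  hence "alpha 1 1 = complex_of_real (\<Sum>u\<in>U. (u - vmean) * meas_prob u)"
    unfolding alpha_def Y1 using Ok_carrier
    by (simp add: Madj_one Nadj_one kms_finsum_right kms_smult_right kms_one_dag_Ok_Ok)
  also have "(\<Sum>u\<in>U. (u - vmean) * meas_prob u) = (\<Sum>u\<in>U. u * meas_prob u) - vmean * (\<Sum>u\<in>U. meas_prob u)"
    by (simp add: algebra_simps sum_subtractf sum_distrib_left)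
  also have "(\<Sum>u\<in>U. u * meas_prob u) = vmean" unfolding meas_exp_def meas_prob_def ..
  finally show ?thesis by (simp add: sum_meas_prob)
qed

lemma Re_corr_le: "Re (corr k) \<le> (\<Sum>j\<in>{1..d^2}. cmod (alpha 1 j * alpha j 1) * lam j ^ k)"
  unfolding corr_expand Re_sum
proof (intro sum_mono)
  fix j assume j: "j \<in> {1..d^2}"
  have "Re (alpha 1 j * alpha j 1 * complex_of_real (lam j ^ k)) = Re (alpha 1 j * alpha j 1) * lam j ^ k"
    by simp
  also have "\<dots> \<le> cmod (alpha 1 j * alpha j 1) * lam j ^ k"
    using lam_nonneg j by (intro mult_right_mono complex_Re_le_cmod) auto
  finally show "Re (alpha 1 j * alpha j 1 * complex_of_real (lam j ^ k)) \<le> cmod (alpha 1 j * alpha j 1) * lam j ^ k" .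
qed

lemma sum_corr_le:
  assumes gap: "\<And>j. j \<in> {2..d^2} \<Longrightarrow> lam j \<le> 1 - g \<and> g > 0"
  shows "(\<Sum>m<K. \<Sum>k<m. Re (corr k)) \<le> real K / g * (\<Sum>j = 1..d^2. cmod (alpha 1 j * alpha j 1))"
proof -
  define z where "z j = cmod (alpha 1 j * alpha j 1)" for j
  have "(\<Sum>m<K. \<Sum>k<m. Re (corr k)) \<le> (\<Sum>m<K. \<Sum>k<m. \<Sum>j\<in>{1..d^2}. z j * lam j ^ k)"
    unfolding z_def by (intro sum_mono Re_corr_le)
  also have "\<dots> = (\<Sum>m<K. \<Sum>j\<in>{1..d^2}. \<Sum>k<m. z j * lam j ^ k)"
    by (rule sum.cong[OF refl], rule sum.swap)
  also have "\<dots> = (\<Sum>j\<in>{1..d^2}. \<Sum>m<K. \<Sum>k<m. z j * lam j ^ k)"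
    by (rule sum.swap)
  also have "\<dots> = (\<Sum>j\<in>{1..d^2}. z j * (\<Sum>m<K. \<Sum>k<m. lam j ^ k))"
    by (simp add: sum_distrib_left)
  also have "\<dots> \<le> (\<Sum>j\<in>{1..d^2}. z j * (real K / g))"
  proof (intro sum_mono)
    fix j assume j: "j \<in> {1..d^2}"
    show "z j * (\<Sum>m<K. \<Sum>k<m. lam j ^ k) \<le> z j * (real K / g)"
    proof (cases "j = 1")
      case True thus ?thesis using alpha_one_one by (simp add: z_def)
    next
      case False
      hence "j \<in> {2..d^2}" using j by auto
      thus ?thesis using gap lam_nonneg j unfolding z_def
        by (intro mult_left_mono sum_partial_geometric_le) auto
    qed
  qed
  finally show ?thesis unfolding z_def by (simp add: sum_distrib_left mult.commute)
qed

lemma traj_bound_of_gap: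
  assumes gap: "\<And>j. j \<in> {2..d^2} \<Longrightarrow> lam j \<le> 1 - g \<and> g > 0"
  shows "traj_expect d Ns U Ok \<rho> K (\<lambda>es. (sum_list es - real K * vmean)^2)
     \<le> real K * (meas_var U Ok \<rho> + 2 / g * (\<Sum>j = 1..d^2. cmod (alpha 1 j * alpha j 1)))"
proof -
  define SC where "SC = (\<Sum>j = 1..d^2. cmod (alpha 1 j * alpha j 1))"
  have "real K * (meas_var U Ok \<rho> + 2 / g * SC) = real K * meas_var U Ok \<rho> + 2 * (real K / g * SC)"
    by (simp add: algebra_simps)
  thus ?thesis using sum_corr_le[OF gap, of K] unfolding traj_expect_centered_square SC_def by linarith
qed

section \<open>The spectral gap\<close>

lemma Nmap_traceless_hermitian_fixed_point:
  assumes Z: "Z \<in> carrier_mat d d" and hZ: "dag Z = Z" and tZ: "trace Z = 0" and fZ: "Nmap Z = Z"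
  shows "Z = 0\<^sub>m d d"
proof -
  obtain \<epsilon> where e0: "\<epsilon> > 0" and dens: "density_mat d (\<rho> + complex_of_real \<epsilon> \<cdot>\<^sub>m Z)"
    using rho_perturbation_density[OF Z hZ tZ] by blast
  have "Nmap (\<rho> + complex_of_real \<epsilon> \<cdot>\<^sub>m Z) = \<rho> + complex_of_real \<epsilon> \<cdot>\<^sub>m Z"
    using Z by (simp add: lin_mapD[OF lin_Nmap] Nmap_rho fZ)
  hence fix_eq: "\<rho> + complex_of_real \<epsilon> \<cdot>\<^sub>m Z = \<rho>" using N_fix dens by blast
  show ?thesis
  proof (rule eq_matI)
    fix i j assume "i < dim_row (0\<^sub>m d d :: complex mat)" "j < dim_col (0\<^sub>m d d :: complex mat)"
    hence ij: "i < d" "j < d" by auto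
    hence "complex_of_real \<epsilon> * Z $$ (i,j) = 0" using arg_cong[OF fix_eq, of "\<lambda>M. M $$ (i,j)"] Z by simp
    thus "Z $$ (i,j) = 0\<^sub>m d d $$ (i,j)" using e0 ij by simp
  qed (use Z in auto)
qed

lemma Nmap_traceless_fixed_point:
  assumes X: "X \<in> carrier_mat d d" and tX: "trace X = 0" and fX: "Nmap X = X"
  shows "X = 0\<^sub>m d d"
proof -
  have dX: "dag X \<in> carrier_mat d d" using X by simp
  have fdX: "Nmap (dag X) = dag X" using dag_Nmap[OF X] fX by simp
  have tdX: "trace (dag X) = 0" using trace_dag[OF X] tX by simp
  have "X + dag X = 0\<^sub>m d d"
  proof (rule Nmap_traceless_hermitian_fixed_point)
    show "dag (X + dag X) = X + dag X" using X by (intro eq_matI) auto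
  qed (use X dX fX fdX tX tdX in \<open>auto simp: lin_mapD[OF lin_Nmap] trace_add[of _ d]\<close>)
  moreover have "\<i> \<cdot>\<^sub>m (X - dag X) = 0\<^sub>m d d"
  proof (rule Nmap_traceless_hermitian_fixed_point)
    show "dag (\<i> \<cdot>\<^sub>m (X - dag X)) = \<i> \<cdot>\<^sub>m (X - dag X)" using X by (intro eq_matI) (auto simp: algebra_simps)
  qed (use X dX fX fdX tX tdX in \<open>auto simp: lin_mapD[OF lin_Nmap] lin_map_minus[OF lin_Nmap] trace_smult[of _ d] trace_minus[of _ d] minus_carrier_mat\<close>)
  ultimately show ?thesis by (rule hermitian_parts_eq_zero[OF X])
qed

lemma Nadj_no_fixed_point:
  assumes X: "X \<in> carrier_mat d d" and o: "\<langle>1\<^sub>m d, X\<rangle> = 0" and f: "Nadj X = X"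
  shows "X = 0\<^sub>m d d"
proof -
  have "Gamma X = 0\<^sub>m d d"
    using Nmap_traceless_fixed_point[of "Gamma X"] Nmap_Gamma[OF X] trace_Gamma[OF X] X f o by simp
  thus ?thesis by (rule Gamma_eq_zero[OF X])
qed

text \<open>The defect in the Kadison--Schwarz inequality for \<open>M\<^sup>\<dagger>\<close>, written as a sum of squares.\<close>

lemma Madj_schwarz_defect: assumes W: "W \<in> carrier_mat d d"
  shows "finsum_mat d d (\<lambda>u. dag (W * Ok u - Ok u * Madj W) * (W * Ok u - Ok u * Madj W)) U =
    Madj (dag W * W) - dag (Madj W) * Madj W"
proof -
  define Y where "Y = Madj W"
  have Yc: "Y \<in> carrier_mat d d" unfolding Y_def by simp
  have dW: "dag W \<in> carrier_mat d d" and dY: "dag Y \<in> carrier_mat d d" using W Yc by auto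
  have summand: "dag (W * Ok u - Ok u * Y) * (W * Ok u - Ok u * Y) = dag (Ok u) * (dag W * W) * Ok u
      - (dag (Ok u) * dag W * Ok u) * Y - dag Y * (dag (Ok u) * W * Ok u) + dag Y * (dag (Ok u) * Ok u) * Y"
    if u: "u \<in> U" for u
  proof -
    have O: "Ok u \<in> carrier_mat d d" using Ok_carrier[OF u] .
    have "dag (W * Ok u - Ok u * Y) * (W * Ok u - Ok u * Y) = dag (W * Ok u) * (W * Ok u) - dag (W * Ok u) * (Ok u * Y)
       - dag (Ok u * Y) * (W * Ok u) + dag (Ok u * Y) * (Ok u * Y)"
      using W O Yc by (intro dag_minus_mult_minus) auto
    thus ?thesis using W O Yc dW dY by (simp add: dag_mult[of _ d d _ d] assoc_mult_mat[of _ d d _ d _ d])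
  qed
  have "finsum_mat d d (\<lambda>u. (dag (Ok u) * dag W * Ok u) * Y) U = Madj (dag W) * Y"
    unfolding meas_adj_def using Ok_carrier dW Yc by (subst finsum_mult_right[of _ d d]) auto
  hence s2: "finsum_mat d d (\<lambda>u. (dag (Ok u) * dag W * Ok u) * Y) U = dag Y * Y"
    unfolding Y_def using dag_Madj[OF W] by simp
  have s3: "finsum_mat d d (\<lambda>u. dag Y * (dag (Ok u) * W * Ok u)) U = dag Y * Y"
    unfolding meas_adj_def Y_def using Ok_carrier W dY by (subst finsum_mult_left[of _ d d]) (auto simp: Y_def)
  have s4: "finsum_mat d d (\<lambda>u. dag Y * (dag (Ok u) * Ok u) * Y) U = dag Y * Y"
  proof -
    have "finsum_mat d d (\<lambda>u. dag Y * (dag (Ok u) * Ok u) * Y) U =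
        dag Y * finsum_mat d d (\<lambda>u. dag (Ok u) * Ok u) U * Y"
      using Ok_carrier dY Yc by (simp add: finsum_mult_right[of _ d d] finsum_mult_left[of _ d d])
    thus ?thesis using M_ch right_mult_one_mat[OF dY] unfolding is_meas_channel_def by simp
  qed
  have "finsum_mat d d (\<lambda>u. dag (W * Ok u - Ok u * Y) * (W * Ok u - Ok u * Y)) U =
      Madj (dag W * W) - dag Y * Y - dag Y * Y + dag Y * Y"
    using Ok_carrier W dW Yc dY
    by (simp add: finsum_cong[OF summand] finsum_add[of _ _ d d] finsum_minus[of _ _ d d] meas_adj_def s2 s3 s4
        minus_carrier_mat)
  also have "\<dots> = Madj (dag W * W) - dag Y * Y" using Yc dY by (intro eq_matI) auto
  finally show ?thesis unfolding Y_def .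
qed

lemma Madj_eigenvalue_bound:
  assumes W: "W \<in> carrier_mat d d" and nz: "W \<noteq> 0\<^sub>m d d" and e: "Madj W = c \<cdot>\<^sub>m W"
  shows "cmod c \<le> 1"
proof -
  define A where "A u = W * Ok u - Ok u * Madj W" for u
  have Ac: "A u \<in> carrier_mat d d" if "u \<in> U" for u
    unfolding A_def using Ok_carrier[OF that] W by (simp add: minus_carrier_mat)
  have YY: "dag (Madj W) * Madj W \<in> carrier_mat d d" by simp
  have "trace (\<rho> * (Madj (dag W * W) - dag (Madj W) * Madj W)) = (\<Sum>u\<in>U. trace (A u * \<rho> * dag (A u)))"
    unfolding Madj_schwarz_defect[OF W, folded A_def, symmetric] using Ac
    by (simp add: finsum_mult_left[of _ d d] trace_finsum[of _ _ d] trace_sandwich_cycle[of _ d])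
  moreover have "Re (trace (A u * \<rho> * dag (A u))) \<ge> 0" if "u \<in> U" for u
    using trace_sandwich_rho_pos[OF Ac[OF that]] by auto
  ultimately have nonneg: "0 \<le> Re (trace (\<rho> * Madj (dag W * W)) - trace (\<rho> * (dag (Madj W) * Madj W)))"
    using YY by (simp add: Re_sum sum_nonneg mult_minus_distrib_mat[OF rho_carrier Madj_carrier YY] trace_minus[of _ d])
  obtain t where t: "trace (W * \<rho> * dag W) = complex_of_real t" "t > 0"
    using trace_sandwich_rho_pos[OF W] nz by auto
  have tW: "trace (\<rho> * (dag W * W)) = complex_of_real t" using W t by (simp add: trace_sandwich_cycle[OF rho_carrier W])
  have tr1: "trace (\<rho> * Madj (dag W * W)) = complex_of_real t"
    using W kms_one_Madj[of "dag W * W"] tW by (simp add: kms_one_left)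
  have "dag (Madj W) * Madj W = (cnj c * c) \<cdot>\<^sub>m (dag W * W)"
    unfolding e dag_smult using W
    by (simp add: mult_smult_assoc_mat[of _ d d _ d] mult_smult_distrib[of _ d d _ d] smult_smult_mat mult.commute)
  hence "trace (\<rho> * (dag (Madj W) * Madj W)) = (cnj c * c) * trace (\<rho> * (dag W * W))"
    using W by (simp add: mult_smult_distrib[of _ d d _ d] trace_smult[of _ d])
  also have "\<dots> = complex_of_real ((cmod c)^2 * t)"
    using tW complex_norm_square[of c] by (simp add: mult.commute)
  finally have "0 \<le> t - (cmod c)^2 * t" using nonneg tr1 by simp
  hence "(cmod c)^2 \<le> 1" using t(2) by (simp add: algebra_simps)
  thus ?thesis by (metis abs_norm_cancel abs_square_le_1)
qed

lemma Madj_contraction: assumes X: "X \<in> carrier_mat d d"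
  shows "Re (\<langle>Madj X, Madj X\<rangle>) \<le> Re (\<langle>X, X\<rangle>)"
proof -
  obtain W \<nu> where W: "orthonormal_basis W {..<d^2}" and ev: "\<forall>k<d^2. Madj (W k) = complex_of_real (\<nu> k) \<cdot>\<^sub>m W k"
    using selfadj_eigenbasis[OF Y_orthonormal_basis lin_Madj Madj_selfadj] by blast
  note w = orthonormal_basisD[OF W]
  have nb: "cmod (complex_of_real (\<nu> k)) \<le> 1" if k: "k < d^2" for k
  proof (rule Madj_eigenvalue_bound)
    show "W k \<in> carrier_mat d d" using w(2) k by auto
    show "Madj (W k) = complex_of_real (\<nu> k) \<cdot>\<^sub>m W k" using ev k by auto
    show "W k \<noteq> 0\<^sub>m d d"
    proof
      assume "W k = 0\<^sub>m d d"
      hence "\<langle>W k, W k\<rangle> = 0" by (simp add: kms_zero_left)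
      thus False using w(3)[of k k] k by simp
    qed
  qed
  have "\<langle>Madj X, Madj X\<rangle> = (\<Sum>k<d^2. complex_of_real ((cmod (complex_of_real (\<nu> k)))^2 * (cmod (\<langle>W k, X\<rangle>))^2))"
    using ev by (intro eigenbasis_quadratic_form(2)[OF W lin_Madj _ X]) auto
  hence "Re (\<langle>Madj X, Madj X\<rangle>) = (\<Sum>k<d^2. (cmod (complex_of_real (\<nu> k)))^2 * (cmod (\<langle>W k, X\<rangle>))^2)"
    by (simp add: Re_sum)
  also have "\<dots> \<le> (\<Sum>k<d^2. (cmod (\<langle>W k, X\<rangle>))^2)"
  proof (intro sum_mono)
    fix k assume "k \<in> {..<d^2}"
    hence "(cmod (complex_of_real (\<nu> k)))^2 \<le> 1" using nb by (simp add: abs_square_le_1)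
    thus "(cmod (complex_of_real (\<nu> k)))^2 * (cmod (\<langle>W k, X\<rangle>))^2 \<le> (cmod (\<langle>W k, X\<rangle>))^2"
      by (simp add: mult_left_le_one_le)
  qed
  also have "\<dots> = Re (\<langle>X, X\<rangle>)" using parseval_norm[OF W X] by simp
  finally show ?thesis .
qed

lemma Nadj_eigvec_centered:
  assumes Z: "Z \<in> carrier_mat d d" and ev: "Nadj Z = complex_of_real \<mu> \<cdot>\<^sub>m Z"
  shows "Nadj (Z - \<langle>1\<^sub>m d, Z\<rangle> \<cdot>\<^sub>m 1\<^sub>m d) = complex_of_real \<mu> \<cdot>\<^sub>m (Z - \<langle>1\<^sub>m d, Z\<rangle> \<cdot>\<^sub>m 1\<^sub>m d)"
    and "\<langle>1\<^sub>m d, Z - \<langle>1\<^sub>m d, Z\<rangle> \<cdot>\<^sub>m 1\<^sub>m d\<rangle> = 0"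
proof -
  define a where "a = \<langle>1\<^sub>m d, Z\<rangle>"
  have "a = \<langle>1\<^sub>m d, Nadj Z\<rangle>" unfolding a_def using Z by (simp add: kms_one_Nadj)
  also have "\<dots> = complex_of_real \<mu> * a" unfolding ev a_def using Z by (simp add: kms_smult_right)
  finally have ma: "a = complex_of_real \<mu> * a" .
  have "Nadj (Z - a \<cdot>\<^sub>m 1\<^sub>m d) = Nadj Z - a \<cdot>\<^sub>m Nadj (1\<^sub>m d)"
    using Z by (simp add: lin_map_minus[OF lin_Nadj] lin_mapD(3)[OF lin_Nadj])
  also have "\<dots> = complex_of_real \<mu> \<cdot>\<^sub>m (Z - a \<cdot>\<^sub>m 1\<^sub>m d)"
    unfolding ev Nadj_one using Z ma by (intro eq_matI) (auto simp: algebra_simps)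
  finally show "Nadj (Z - \<langle>1\<^sub>m d, Z\<rangle> \<cdot>\<^sub>m 1\<^sub>m d) = complex_of_real \<mu> \<cdot>\<^sub>m (Z - \<langle>1\<^sub>m d, Z\<rangle> \<cdot>\<^sub>m 1\<^sub>m d)"
    unfolding a_def .
  show "\<langle>1\<^sub>m d, Z - \<langle>1\<^sub>m d, Z\<rangle> \<cdot>\<^sub>m 1\<^sub>m d\<rangle> = 0"
    using Z by (simp add: kms_minus_right kms_smult_right kms_one_one)
qed

lemma Nadj_eigenvalue_range:
  assumes X: "X \<in> carrier_mat d d" and nz: "X \<noteq> 0\<^sub>m d d" and o: "\<langle>1\<^sub>m d, X\<rangle> = 0"
    and ev: "Nadj X = complex_of_real \<mu> \<cdot>\<^sub>m X"
  shows "0 \<le> \<mu> \<and> \<mu> < 1"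
proof -
  have "Gamma X \<noteq> 0\<^sub>m d d" using Gamma_eq_zero[OF X] nz by auto
  moreover have "Nmap (Gamma X) = complex_of_real \<mu> \<cdot>\<^sub>m Gamma X"
    using Nmap_Gamma[OF X] ev Gamma_smult[OF X] by simp
  ultimately have "0 \<le> \<mu> \<and> \<mu> \<le> 1" using N_spec Gamma_carrier[OF X] by fastforce
  moreover have "\<mu> \<noteq> 1" using Nadj_no_fixed_point[OF X o] ev nz X by auto
  ultimately show ?thesis by auto
qed

text \<open>On the orthogonal complement of \<open>I\<close>, \<open>0 \<le> N\<^sup>\<dagger> \<le> m\<close> for some \<open>m < 1\<close>: expand in an
  eigenbasis of \<open>N\<^sup>\<dagger>\<close>; eigenvectors that are multiples of \<open>I\<close> do not contribute, and the others
  can be centred to eigenvectors orthogonal to \<open>I\<close>.\<close>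

lemma Nadj_quadratic_form_bounds:
  "\<exists>m<1. \<forall>X\<in>carrier_mat d d. \<langle>1\<^sub>m d, X\<rangle> = 0 \<longrightarrow>
     0 \<le> Re \<langle>X, Nadj X\<rangle> \<and> Re \<langle>X, Nadj X\<rangle> \<le> m * Re \<langle>X, X\<rangle>"
proof -
  obtain Z \<mu> where Zb: "orthonormal_basis Z {..<d^2}"
    and evZ: "\<forall>k<d^2. Nadj (Z k) = complex_of_real (\<mu> k) \<cdot>\<^sub>m Z k"
    using selfadj_eigenbasis[OF Y_orthonormal_basis lin_Nadj Nadj_selfadj] by blast
  have Zc: "k < d^2 \<Longrightarrow> Z k \<in> carrier_mat d d" for k using orthonormal_basisD(2)[OF Zb] by auto
  define Kg where "Kg = {k. k < d^2 \<and> Z k - \<langle>1\<^sub>m d, Z k\<rangle> \<cdot>\<^sub>m 1\<^sub>m d \<noteq> 0\<^sub>m d d}"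
  define m where "m = Max (insert 0 (\<mu> ` Kg))"
  have fin: "finite Kg" unfolding Kg_def by auto
  have range: "0 \<le> \<mu> k \<and> \<mu> k < 1" if "k \<in> Kg" for k
    using that Nadj_eigvec_centered[OF Zc] evZ Zc unfolding Kg_def
    by (intro Nadj_eigenvalue_range[of "Z k - \<langle>1\<^sub>m d, Z k\<rangle> \<cdot>\<^sub>m 1\<^sub>m d"]) auto
  have m1: "m < 1" unfolding m_def using fin range by (subst Max_less_iff) auto
  have mk: "k \<in> Kg \<Longrightarrow> \<mu> k \<le> m" for k unfolding m_def using fin by auto
  have "0 \<le> Re \<langle>X, Nadj X\<rangle> \<and> Re \<langle>X, Nadj X\<rangle> \<le> m * Re \<langle>X, X\<rangle>"
    if X: "X \<in> carrier_mat d d" and o: "\<langle>1\<^sub>m d, X\<rangle> = 0" for X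
  proof -
    have summand: "0 \<le> \<mu> k * (cmod \<langle>Z k, X\<rangle>)^2 \<and> \<mu> k * (cmod \<langle>Z k, X\<rangle>)^2 \<le> m * (cmod \<langle>Z k, X\<rangle>)^2"
      if k: "k < d^2" for k
    proof (cases "k \<in> Kg")
      case True thus ?thesis using range mk by (auto intro: mult_right_mono)
    next
      case False
      hence "\<langle>Z k, X\<rangle> = 0" using kms_orth_one_of_scalar[OF Zc[OF k] _ X o] k unfolding Kg_def by auto
      thus ?thesis by simp
    qed
    have "Re \<langle>X, Nadj X\<rangle> = (\<Sum>k<d^2. \<mu> k * (cmod \<langle>Z k, X\<rangle>)^2)"
      using eigenbasis_quadratic_form(1)[OF Zb lin_Nadj _ X] evZ by (simp add: Re_sum)
    moreover have "m * Re \<langle>X, X\<rangle> = (\<Sum>k<d^2. m * (cmod \<langle>Z k, X\<rangle>)^2)"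
      using parseval_norm[OF Zb X] by (simp add: sum_distrib_left)
    ultimately show ?thesis using summand by (auto intro: sum_nonneg sum_mono)
  qed
  thus ?thesis using m1 by blast
qed

definition rayleigh_quotient :: "complex mat \<Rightarrow> real" where
  "rayleigh_quotient X = Re (\<langle>X, Nadj X\<rangle> / \<langle>X, X\<rangle>)"

lemma rayleigh_quotient_eq: "X \<in> carrier_mat d d \<Longrightarrow> rayleigh_quotient X = Re \<langle>X, Nadj X\<rangle> / Re \<langle>X, X\<rangle>"
  unfolding rayleigh_quotient_def by (subst kms_self_real) (auto simp: Re_divide_of_real)

lemma spec_gap_eq: "spec_gap d \<rho> s Nadj =
    1 - Sup (rayleigh_quotient ` {X \<in> carrier_mat d d. X \<noteq> 0\<^sub>m d d \<and> \<langle>1\<^sub>m d, X\<rangle> = 0})"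
  unfolding spec_gap_def rayleigh_quotient_def using kms_one_orth_sym by (intro arg_cong[where f = "\<lambda>S. 1 - Sup S"]) auto

lemma lam_eq_Nadj_form: assumes j: "j \<in> {1..d^2}"
  shows "lam j = Re \<langle>Madj (Y j), Nadj (Madj (Y j))\<rangle>"
proof -
  have "complex_of_real (lam j) = \<langle>Y j, Eadj (Y j)\<rangle>" using Y_eig Y_on Y_carrier j by (simp add: kms_smult_right)
  also have "\<dots> = \<langle>Madj (Y j), Nadj (Madj (Y j))\<rangle>" by (rule Madj_selfadj[OF Y_carrier[OF j] Nadj_carrier])
  finally show ?thesis by (metis Re_complex_of_real)
qed

lemma lam_le_one_minus_gap: assumes j: "j \<in> {2..d^2}"
  shows "lam j \<le> 1 - spec_gap d \<rho> s Nadj \<and> spec_gap d \<rho> s Nadj > 0"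
proof -
  define R where "R = rayleigh_quotient ` {X \<in> carrier_mat d d. X \<noteq> 0\<^sub>m d d \<and> \<langle>1\<^sub>m d, X\<rangle> = 0}"
  obtain m where m1: "m < 1" and bounds: "\<And>X. X \<in> carrier_mat d d \<Longrightarrow> \<langle>1\<^sub>m d, X\<rangle> = 0 \<Longrightarrow>
      0 \<le> Re \<langle>X, Nadj X\<rangle> \<and> Re \<langle>X, Nadj X\<rangle> \<le> m * Re \<langle>X, X\<rangle>"
    using Nadj_quadratic_form_bounds by blast
  have R_bounds: "0 \<le> r \<and> r \<le> m" if rR: "r \<in> R" for r
  proof -
    obtain X where X: "X \<in> carrier_mat d d" "X \<noteq> 0\<^sub>m d d" "\<langle>1\<^sub>m d, X\<rangle> = 0" and r: "r = rayleigh_quotient X"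
      using rR unfolding R_def by auto
    have "Re \<langle>X, X\<rangle> > 0" by (rule kms_self_pos[OF Y_orthonormal_basis X(1,2)])
    thus ?thesis using bounds[OF X(1,3)] unfolding r rayleigh_quotient_eq[OF X(1)] by (simp add: divide_le_eq)
  qed
  have bdd: "bdd_above R" using R_bounds by (intro bdd_aboveI) auto
  have jY: "j \<in> {1..d^2}" "j \<noteq> 1" using j by auto
  have Yj: "Y j \<in> carrier_mat d d" "\<langle>1\<^sub>m d, Y j\<rangle> = 0" "\<langle>Y j, Y j\<rangle> = 1"
    using Y_carrier[OF jY(1)] Y_on jY one_mem_Y_index unfolding Y1[symmetric] by auto
  hence "rayleigh_quotient (Y j) \<in> R" unfolding R_def by (auto simp: kms_zero_left)
  hence R0: "0 \<le> Sup R" using R_bounds bdd by (meson cSup_upper order_trans)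
  have "Sup R \<le> m" using R_bounds \<open>rayleigh_quotient (Y j) \<in> R\<close> by (intro cSup_least) auto
  hence gap_pos: "spec_gap d \<rho> s Nadj > 0" unfolding spec_gap_eq R_def[symmetric] using m1 by simp
  define W where "W = Madj (Y j)"
  have Wc: "W \<in> carrier_mat d d" and oW: "\<langle>1\<^sub>m d, W\<rangle> = 0" unfolding W_def using Yj by (auto simp: kms_one_Madj)
  have lamj: "lam j = Re \<langle>W, Nadj W\<rangle>" unfolding W_def by (rule lam_eq_Nadj_form[OF jY(1)])
  have "lam j \<le> Sup R"
  proof (cases "W = 0\<^sub>m d d")
    case True thus ?thesis using lamj R0 by (simp add: kms_zero_left)
  next
    case False
    have pos: "Re \<langle>W, W\<rangle> > 0" by (rule kms_self_pos[OF Y_orthonormal_basis Wc False])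
    have "Re \<langle>W, W\<rangle> \<le> 1" using Madj_contraction[OF Yj(1)] Yj unfolding W_def by simp
    hence "lam j \<le> rayleigh_quotient W"
      unfolding rayleigh_quotient_eq[OF Wc] lamj[symmetric] using pos lam_nonneg jY
      by (simp add: le_divide_eq mult_left_le)
    also have "\<dots> \<le> Sup R" using Wc False oW bdd unfolding R_def by (intro cSup_upper) auto
    finally show ?thesis .
  qed
  thus ?thesis using gap_pos unfolding spec_gap_eq R_def by simp
qed

end

lemma gibbs_faithful_state: assumes H: "hermitian_mat d H" and d: "d > 0"
  shows "\<exists>Ur p. faithful_state d (gibbs d \<beta> H) Ur p"
proof -
  have Hc: "H \<in> carrier_mat d d" and hH: "dag H = H" using H unfolding hermitian_mat_def by auto
  obtain U h where U: "unitary d U" and He: "H = spectral_mat d U (\<lambda>i. complex_of_real (h i))"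
    using hermitian_diagonalization[OF Hc hH] by auto
  define e where "e i = exp (- \<beta> * h i)" for i
  define Zs where "Zs = (\<Sum>i<d. e i)"
  define p where "p i = e i / Zs" for i
  have e0: "e i > 0" for i unfolding e_def by simp
  hence Z0: "Zs > 0" unfolding Zs_def using d by (intro sum_pos) auto
  have "gibbs d \<beta> H = (1 / complex_of_real Zs) \<cdot>\<^sub>m spectral_mat d U (\<lambda>i. complex_of_real (e i))"
    unfolding gibbs_def Let_def He mat_fun_spectral_mat[OF U] trace_spectral_mat[OF U] Zs_def e_def
    by (simp flip: exp_of_real)
  also have "\<dots> = spectral_mat d U (\<lambda>i. complex_of_real (p i))"
    unfolding smult_spectral_mat[OF U] p_def by simp
  finally have "gibbs d \<beta> H = spectral_mat d U (\<lambda>i. complex_of_real (p i))" .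
  moreover have "(\<Sum>i<d. p i) = 1" unfolding p_def Zs_def using Z0 unfolding Zs_def
    by (simp add: sum_divide_distrib[symmetric])
  ultimately have "faithful_state d (gibbs d \<beta> H) U p"
    using U d e0 Z0 unfolding faithful_state_def p_def by simp
  thus ?thesis by blast
qed

theorem lemma5p10:
  fixes n :: nat and H :: "complex mat" and \<beta> s :: real
    and Ns :: "complex mat list" and U :: "real set" and Ok :: "real \<Rightarrow> complex mat"
    and Y :: "nat \<Rightarrow> complex mat" and lam :: "nat \<Rightarrow> real" and K :: nat
  defines "d \<equiv> 2 ^ n"
  defines "\<rho> \<equiv> gibbs d \<beta> H"
  defines "Nadj \<equiv> kraus_adj d Ns"
  defines "Madj \<equiv> meas_adj d U Ok"
  defines "Eadj \<equiv> (\<lambda>X. Madj (Nadj (Madj X)))"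
  defines "Ehatadj \<equiv> (\<lambda>X. meas_hat_adj d U Ok \<rho> (Nadj (Madj X)))"
  defines "v \<equiv> meas_exp U Ok \<rho>"
  defines "\<alpha> \<equiv> (\<lambda>i j. sinner d \<rho> s (Y j) (Ehatadj (Y i)))"
  defines "SC \<equiv> (\<Sum>j = 1..d^2. cmod (\<alpha> 1 j * \<alpha> j 1))"
  assumes H: "hermitian_mat d H" and beta: "\<beta> > 0"
    and N_ch: "is_channel d Ns" and M_ch: "is_meas_channel d U Ok"
    and N_db: "detailed_balance d \<rho> s Nadj"
    and M_db: "detailed_balance d \<rho> s Madj"
    and N_fix: "\<forall>\<sigma>. density_mat d \<sigma> \<longrightarrow> (kraus_map d Ns \<sigma> = \<sigma> \<longleftrightarrow> \<sigma> = \<rho>)"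
    and N_spec: "\<forall>X \<in> carrier_mat d d. \<forall>c. X \<noteq> 0\<^sub>m d d \<and> kraus_map d Ns X = c \<cdot>\<^sub>m X
                   \<longrightarrow> c \<in> \<real> \<and> 0 \<le> Re c \<and> Re c \<le> 1"
    and Y_car: "\<forall>i \<in> {1..d^2}. Y i \<in> carrier_mat d d"
    and Y_on: "\<forall>i \<in> {1..d^2}. \<forall>j \<in> {1..d^2}. sinner d \<rho> s (Y i) (Y j) = (if i = j then 1 else 0)"
    and Y_span: "\<forall>X \<in> carrier_mat d d. \<exists>c. X = finsum_mat d d (\<lambda>i. c i \<cdot>\<^sub>m Y i) {1..d^2}"
    and Y_eig: "\<forall>i \<in> {1..d^2}. Eadj (Y i) = of_real (lam i) \<cdot>\<^sub>m Y i"
    and Y1: "Y 1 = 1\<^sub>m d" and lam1: "lam 1 = 1"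
    and lam2: "d^2 \<ge> 2 \<longrightarrow> lam 1 > lam 2"
    and lam_mono: "\<forall>i j. 2 \<le> i \<and> i \<le> j \<and> j \<le> d^2 \<longrightarrow> lam j \<le> lam i"
    and lam_nonneg: "\<forall>i \<in> {1..d^2}. 0 \<le> lam i"
  shows "traj_expect d Ns U Ok \<rho> K (\<lambda>es. (sum_list es - real K * v)^2)
           \<le> real K * (meas_var U Ok \<rho> + 2 / spec_gap d \<rho> s Nadj * SC)"
proof -
  have "d > 0" unfolding d_def by simp
  then obtain Ur p where "faithful_state d \<rho> Ur p" using gibbs_faithful_state[OF H] unfolding \<rho>_def by blast
  then interpret trajectory_setting d \<rho> s Ur p Ns U Ok Y lam
    using N_ch M_ch N_db M_db N_fix N_spec Y_car Y_on Y_span Y_eig Y1 lam_nonneg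
    unfolding trajectory_setting_def trajectory_setting_axioms_def Eadj_def Nadj_def Madj_def by simp
  have "SC = (\<Sum>j = 1..d^2. cmod (alpha 1 j * alpha j 1))"
    unfolding SC_def \<alpha>_def alpha_def Ehatadj_def Nadj_def Madj_def ..
  thus ?thesis using traj_bound_of_gap[OF lam_le_one_minus_gap] unfolding v_def Nadj_def by simp
qed

end
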